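(* Let $l\ge 3$, $\mathfrak g=\mathfrak{sl}_{l+1}(\mathbb C)$, $v'_{l,1}=e_{\epsilon_1-\epsilon_{l+1}}e_{\epsilon_2-\epsilon_l}-e_{\epsilon_2-\epsilon_{l+1}}e_{\epsilon_1-\epsilon_l}\in U(\mathfrak g)$, $R$ the adjoint $\mathfrak g$-submodule of $U(\mathfrak g)$ generated by $v'_{l,1}$, $R_0$ its zero-weight subspace, and $\mathcal P_0=\{p_r : r\in R_0\}$. Then the polynomials $p_{ij}(h)=h_ih_j$ ($i=1,\dots,l-2$, $i+2\le j\le l$) and $q_i(h)=h_i(h_{i-1}+h_i+h_{i+1}+1)$ ($i=2,\dots,l-1$) form a basis of the vector space $\mathcal P_0$.
   Context: $\mathfrak g=\mathfrak{sl}_{l+1}(\mathbb C)$ with Cartan subalgebra $\mathfrak h$ of traceless diagonal matrices, triangular decomposition $\mathfrak g=\mathfrak n_-\oplus\mathfrak h\oplus\mathfrak n_+$ ($\mathfrak n_+$ strictly upper triangular), simple roots $\alpha_i=\epsilon_i-\epsilon_{i+1}$. For $i<j$: $e_{\epsilon_i-\epsilon_j}=(-1)^{j-i-1}E_{ij}$, $f_{\epsilon_i-\epsilon_j}=(-1)^{j-i-1}E_{ji}$, $h_{\epsilon_i-\epsilon_j}=E_{ii}-E_{jj}$, $h_i=h_{\alpha_i}$. The adjoint action is $X_L f=[X,f]$. For $r\in R_0$, $p_r$ denotes the unique element of $S(\mathfrak h)=\mathbb C[h_1,\dots,h_l]$ with $r-p_r\in U(\mathfrak g)\mathfrak n_+$;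 equivalently $r v_\mu=p_r(\mu)v_\mu$ for every highest weight vector $v_\mu$ of weight $\mu$. *)

theory Defs
  imports Complex_Main
begin

text \<open>Model of U(sl_{n}) (n = l+1): the monoid algebra of the free monoid on the set
  sl_n (words of matrices), i.e. finitely supported functions on words, modulo the
  two-sided ideal generated by the linearity relations and XY - YX - [X,Y].
  Matrices are functions nat => nat => complex supported on indices 1..n.\<close>

type_synonym mat = "nat \<Rightarrow> nat \<Rightarrow> complex"
type_synonym fa = "mat list \<Rightarrow> complex"

definition mmul :: "nat \<Rightarrow> mat \<Rightarrow> mat \<Rightarrow> mat" where
  "mmul n A B = (\<lambda>a b. \<Sum>k=1..n. A a k * B k b)"

definition mbr :: "nat \<Rightarrow> mat \<Rightarrow> mat \<Rightarrow> mat" where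
  "mbr n A B = (\<lambda>a b. mmul n A B a b - mmul n B A a b)"

definition madd :: "mat \<Rightarrow> mat \<Rightarrow> mat" where
  "madd A B = (\<lambda>a b. A a b + B a b)"

definition msmul :: "complex \<Rightarrow> mat \<Rightarrow> mat" where
  "msmul c A = (\<lambda>a b. c * A a b)"

definition Eu :: "nat \<Rightarrow> nat \<Rightarrow> mat" where
  "Eu i j = (\<lambda>a b. if a = i \<and> b = j then 1 else 0)"

definition g_set :: "nat \<Rightarrow> mat set" where
  "g_set n = {A. (\<forall>a b. A a b \<noteq> 0 \<longrightarrow> a \<in> {1..n} \<and> b \<in> {1..n}) \<and> (\<Sum>k=1..n. A k k) = 0}"

definition h_set :: "nat \<Rightarrow> mat set" where
  "h_set n = {A \<in> g_set n. \<forall>a b. a \<noteq> b \<longrightarrow> A a b = 0}"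

definition np_set :: "nat \<Rightarrow> mat set" where
  "np_set n = {A \<in> g_set n. \<forall>a b. A a b \<noteq> 0 \<longrightarrow> a < b}"

definition fa_mul :: "fa \<Rightarrow> fa \<Rightarrow> fa" where
  "fa_mul f g = (\<lambda>w. \<Sum>k\<le>length w. f (take k w) * g (drop k w))"

definition fa_add :: "fa \<Rightarrow> fa \<Rightarrow> fa" where
  "fa_add f g = (\<lambda>w. f w + g w)"

definition fa_diff :: "fa \<Rightarrow> fa \<Rightarrow> fa" where
  "fa_diff f g = (\<lambda>w. f w - g w)"

definition fa_smul :: "complex \<Rightarrow> fa \<Rightarrow> fa" where
  "fa_smul c f = (\<lambda>w. c * f w)"

definition ltr :: "mat \<Rightarrow> fa" where
  "ltr A = (\<lambda>w. if w = [A] then 1 else 0)"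

definition FA :: "nat \<Rightarrow> fa set" where
  "FA n = {f. finite {w. f w \<noteq> 0} \<and> (\<forall>w. f w \<noteq> 0 \<longrightarrow> set w \<subseteq> g_set n)}"

inductive_set Iid :: "nat \<Rightarrow> fa set" for n where
  lin_add: "X \<in> g_set n \<Longrightarrow> Y \<in> g_set n \<Longrightarrow>
     (\<lambda>w. ltr (madd X Y) w - ltr X w - ltr Y w) \<in> Iid n"
| lin_smul: "X \<in> g_set n \<Longrightarrow> (\<lambda>w. ltr (msmul c X) w - c * ltr X w) \<in> Iid n"
| comm: "X \<in> g_set n \<Longrightarrow> Y \<in> g_set n \<Longrightarrow>
     (\<lambda>w. fa_mul (ltr X) (ltr Y) w - fa_mul (ltr Y) (ltr X) w - ltr (mbr n X Y) w) \<in> Iid n"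
| zero: "(\<lambda>w. 0) \<in> Iid n"
| add: "a \<in> Iid n \<Longrightarrow> b \<in> Iid n \<Longrightarrow> fa_add a b \<in> Iid n"
| smul: "a \<in> Iid n \<Longrightarrow> fa_smul c a \<in> Iid n"
| lmul: "a \<in> Iid n \<Longrightarrow> f \<in> FA n \<Longrightarrow> fa_mul f a \<in> Iid n"
| rmul: "a \<in> Iid n \<Longrightarrow> f \<in> FA n \<Longrightarrow> fa_mul a f \<in> Iid n"

text \<open>Preimage in the free algebra of U(g) n_+ (it contains the ideal).\<close>
inductive_set Jn :: "nat \<Rightarrow> fa set" for n where
  ideal: "a \<in> Iid n \<Longrightarrow> a \<in> Jn n"
| gen: "f \<in> FA n \<Longrightarrow> E \<in> np_set n \<Longrightarrow> fa_mul f (ltr E) \<in> Jn n"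
| zero: "(\<lambda>w. 0) \<in> Jn n"
| add: "a \<in> Jn n \<Longrightarrow> b \<in> Jn n \<Longrightarrow> fa_add a b \<in> Jn n"
| smul: "a \<in> Jn n \<Longrightarrow> fa_smul c a \<in> Jn n"

definition ad :: "mat \<Rightarrow> fa \<Rightarrow> fa" where
  "ad X f = fa_diff (fa_mul (ltr X) f) (fa_mul f (ltr X))"

text \<open>Root vectors e_{eps_i - eps_j} = (-1)^(j-i-1) E_ij for i < j.\<close>
definition eroot :: "nat \<Rightarrow> nat \<Rightarrow> mat" where
  "eroot i j = msmul ((-1) ^ (j - i - 1)) (Eu i j)"

definition vprime :: "nat \<Rightarrow> fa" where
  "vprime l = fa_diff (fa_mul (ltr (eroot 1 (l+1))) (ltr (eroot 2 l)))
                      (fa_mul (ltr (eroot 2 (l+1))) (ltr (eroot 1 l)))"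

text \<open>Preimage in the free algebra of the adjoint submodule R generated by v'_{l,1}.\<close>
inductive_set Rt :: "nat \<Rightarrow> fa set" for l where
  gen: "vprime l \<in> Rt l"
| ideal: "a \<in> Iid (l+1) \<Longrightarrow> a \<in> Rt l"
| add: "a \<in> Rt l \<Longrightarrow> b \<in> Rt l \<Longrightarrow> fa_add a b \<in> Rt l"
| smul: "a \<in> Rt l \<Longrightarrow> fa_smul c a \<in> Rt l"
| adj: "X \<in> g_set (l+1) \<Longrightarrow> a \<in> Rt l \<Longrightarrow> ad X a \<in> Rt l"

definition R0 :: "nat \<Rightarrow> fa set" where
  "R0 l = {r \<in> Rt l. \<forall>H \<in> h_set (l+1). ad H r \<in> Iid (l+1)}"

text \<open>Representatives of S(h) = U(h): combinations of words in h.\<close>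
definition Sh :: "nat \<Rightarrow> fa set" where
  "Sh n = {p \<in> FA n. \<forall>w. p w \<noteq> 0 \<longrightarrow> set w \<subseteq> h_set n}"

text \<open>A weight mu is given by its coordinates x k = mu(h_k), k = 1..l; then
  mu(H) = sum_k (sum_{j<=k} H_jj) x_k for traceless diagonal H.\<close>
definition hval :: "nat \<Rightarrow> (nat \<Rightarrow> complex) \<Rightarrow> mat \<Rightarrow> complex" where
  "hval l x H = (\<Sum>k=1..l. (\<Sum>j=1..k. H j j) * x k)"

definition evalS :: "nat \<Rightarrow> (nat \<Rightarrow> complex) \<Rightarrow> fa \<Rightarrow> complex" where
  "evalS l x p = (\<Sum>w\<in>{w. p w \<noteq> 0}. p w * prod_list (map (hval l x) w))"

definition P0 :: "nat \<Rightarrow> ((nat \<Rightarrow> complex) \<Rightarrow> complex) set" where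
  "P0 l = {f. \<exists>r \<in> R0 l. \<exists>p \<in> Sh (l+1). fa_diff r p \<in> Jn (l+1) \<and> f = (\<lambda>x. evalS l x p)}"

datatype idx = Pidx nat nat | Qidx nat

definition Ind :: "nat \<Rightarrow> idx set" where
  "Ind l = {Pidx i j | i j. 1 \<le> i \<and> i \<le> l - 2 \<and> i + 2 \<le> j \<and> j \<le> l}
         \<union> {Qidx i | i. 2 \<le> i \<and> i \<le> l - 1}"

fun bfun :: "idx \<Rightarrow> (nat \<Rightarrow> complex) \<Rightarrow> complex" where
  "bfun (Pidx i j) h = h i * h j"
| "bfun (Qidx i) h = h i * (h (i - 1) + h i + h (i + 1) + 1)"

end

theory Submission
  imports Defs
begin

(*
  The number p_r(mu) is the coefficient of a highest weight vector v of weight mu in r v.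
  Modulo the defining ideal, ad X does not raise the degree of a word (Leibniz rule), so every
  element of R is represented by an element of degree at most two, and p_r is a polynomial of
  degree at most two in h_1, ..., h_l.  Highest weight vectors of every weight are realised by
  monomials in oscillator representations of gl_{l+1} on l+1 copies of C^{l+1} with some
  coordinates dualised.  In a single copy v' acts by zero, hence so does all of R, and p_r
  vanishes on the weights of the one-copy highest weight vectors, i.e. on the lines
  h_k = -1 - s, h_{k+1} = s (other coordinates 0).  A quadratic polynomial vanishing on all
  these lines is a combination of the p_ij and q_i.

  Conversely, acting with ad of matrix units moves the 2x2 minor v' = E_{1,l+1} E_{2,l} -
  E_{2,l+1} E_{1,l} (up to sign) to every minor E_ac E_bd - E_bc E_ad, and ad(E_db) ad(E_ca)
  of such a minor is a zero weight element whose p_r is computed explicitly; suitable choices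
  of a, b, c, d give exactly the p_ij and q_i.  Linear independence is seen by evaluating at
  0/1-vectors supported on one or two coordinates.
*)

section \<open>The free algebra and the defining ideal\<close>

definition fa_word :: "mat list \<Rightarrow> fa" where "fa_word u = (\<lambda>w. if w = u then 1 else 0)"
definition finsupp :: "fa \<Rightarrow> bool" where "finsupp f \<longleftrightarrow> finite {w. f w \<noteq> 0}"

lemma ltr_eq_fa_word: "ltr X = fa_word [X]" by (simp add: ltr_def fa_word_def)

lemma fa_mul_fa_word: "fa_mul (fa_word u) (fa_word v) = fa_word (u @ v)"
proof
  fix w
  have "fa_mul (fa_word u) (fa_word v) w = (\<Sum>k\<le>length w. if k = length u \<and> w = u @ v then 1 else 0)"
    unfolding fa_mul_def fa_word_def
    apply (rule sum.cong, simp)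
    by (auto simp: min_def)
  also have "\<dots> = fa_word (u @ v) w" by (auto simp: fa_word_def)
  finally show "fa_mul (fa_word u) (fa_word v) w = fa_word (u @ v) w" .
qed

lemma fa_mul_lin_left: "fa_mul (\<lambda>w. a * f w + b * g w) h = (\<lambda>w. a * fa_mul f h w + b * fa_mul g h w)"
  by (simp add: fa_mul_def sum.distrib sum_distrib_left algebra_simps)
lemma fa_mul_lin_right: "fa_mul h (\<lambda>w. a * f w + b * g w) = (\<lambda>w. a * fa_mul h f w + b * fa_mul h g w)"
  by (simp add: fa_mul_def sum.distrib sum_distrib_left algebra_simps)
lemma fa_mul_add_left: "fa_mul (\<lambda>w. f w + g w) h = (\<lambda>w. fa_mul f h w + fa_mul g h w)"
  by (simp add: fa_mul_def sum.distrib algebra_simps)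
lemma fa_mul_add_right: "fa_mul h (\<lambda>w. f w + g w) = (\<lambda>w. fa_mul h f w + fa_mul h g w)"
  by (simp add: fa_mul_def sum.distrib algebra_simps)
lemma fa_mul_diff_left: "fa_mul (\<lambda>w. f w - g w) h = (\<lambda>w. fa_mul f h w - fa_mul g h w)"
  by (simp add: fa_mul_def sum_subtractf algebra_simps)
lemma fa_mul_diff_right: "fa_mul h (\<lambda>w. f w - g w) = (\<lambda>w. fa_mul h f w - fa_mul h g w)"
  by (simp add: fa_mul_def sum_subtractf algebra_simps)
lemma fa_mul_smul_left: "fa_mul (\<lambda>w. a * f w) h = (\<lambda>w. a * fa_mul f h w)"
  by (simp add: fa_mul_def sum_distrib_left algebra_simps)
lemma fa_mul_smul_right: "fa_mul h (\<lambda>w. a * f w) = (\<lambda>w. a * fa_mul h f w)"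
  by (simp add: fa_mul_def sum_distrib_left algebra_simps)
lemma fa_mul_zero_left: "fa_mul (\<lambda>w. 0) h = (\<lambda>w. 0)" by (simp add: fa_mul_def)
lemma fa_mul_zero_right: "fa_mul h (\<lambda>w. 0) = (\<lambda>w. 0)" by (simp add: fa_mul_def)

lemma finsupp_word_expansion: "finsupp a \<Longrightarrow> a = (\<lambda>w. \<Sum>u\<in>{w. a w \<noteq> 0}. a u * fa_word u w)"
proof
  fix w assume "finsupp a"
  have "(\<Sum>u\<in>{w. a w \<noteq> 0}. a u * fa_word u w) = (\<Sum>u\<in>{w. a w \<noteq> 0}. if u = w then a w else 0)"
    by (rule sum.cong) (auto simp: fa_word_def)
  also have "\<dots> = a w" using \<open>finsupp a\<close> by (simp add: finsupp_def)
  finally show "a w = (\<Sum>u\<in>{w. a w \<noteq> 0}. a u * fa_word u w)" by simp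
qed

lemma fa_mul_sum_left: "fa_mul (\<lambda>w. \<Sum>i\<in>I. c i * f i w) g = (\<lambda>w. \<Sum>i\<in>I. c i * fa_mul (f i) g w)"
  by (simp add: fa_mul_def sum_distrib_right sum_distrib_left algebra_simps sum.swap[of _ I])
lemma fa_mul_sum_right: "fa_mul g (\<lambda>w. \<Sum>i\<in>I. c i * f i w) = (\<lambda>w. \<Sum>i\<in>I. c i * fa_mul g (f i) w)"
  by (simp add: fa_mul_def sum_distrib_right sum_distrib_left algebra_simps sum.swap[of _ I])

lemma fa_mul_word_expansion:
  assumes "finsupp a" "finsupp b"
  shows "fa_mul a b = (\<lambda>w. \<Sum>u\<in>{w. a w \<noteq> 0}. \<Sum>v\<in>{w. b w \<noteq> 0}. a u * b v * fa_word (u @ v) w)"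
proof -
  have "fa_mul a b = fa_mul (\<lambda>w. \<Sum>u\<in>{w. a w \<noteq> 0}. a u * fa_word u w) (\<lambda>w. \<Sum>v\<in>{w. b w \<noteq> 0}. b v * fa_word v w)"
    using finsupp_word_expansion[OF assms(1)] finsupp_word_expansion[OF assms(2)] by simp
  also have "\<dots> = (\<lambda>w. \<Sum>u\<in>{w. a w \<noteq> 0}. \<Sum>v\<in>{w. b w \<noteq> 0}. a u * b v * fa_word (u @ v) w)"
    by (simp add: fa_mul_sum_left fa_mul_sum_right fa_mul_fa_word sum_distrib_left algebra_simps)
  finally show ?thesis .
qed

lemma fa_mul_support:
  "{w. fa_mul f g w \<noteq> 0} \<subseteq> (\<lambda>(u,v). u @ v) ` ({w. f w \<noteq> 0} \<times> {w. g w \<noteq> 0})"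
proof
  fix w assume "w \<in> {w. fa_mul f g w \<noteq> 0}"
  then have "(\<Sum>k\<le>length w. f (take k w) * g (drop k w)) \<noteq> 0" by (simp add: fa_mul_def)
  then obtain k where "f (take k w) * g (drop k w) \<noteq> 0" by (meson sum.not_neutral_contains_not_neutral)
  then show "w \<in> (\<lambda>(u,v). u @ v) ` ({w. f w \<noteq> 0} \<times> {w. g w \<noteq> 0})"
    by (intro image_eqI[of _ _ "(take k w, drop k w)"]) auto
qed

lemma finsupp_fa_mul: "finsupp f \<Longrightarrow> finsupp g \<Longrightarrow> finsupp (fa_mul f g)"
  unfolding finsupp_def using fa_mul_support[of f g] by (rule finite_subset) auto
lemma finsupp_fa_word: "finsupp (fa_word u)" by (simp add: finsupp_def fa_word_def)
lemma finsupp_ltr: "finsupp (ltr X)" by (simp add: ltr_eq_fa_word finsupp_fa_word)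
lemma finsupp_zero: "finsupp (\<lambda>w. 0)" by (simp add: finsupp_def)
lemma finsupp_lincomb: "finsupp f \<Longrightarrow> finsupp g \<Longrightarrow> finsupp (\<lambda>w. a * f w + b * g w)"
  unfolding finsupp_def by (rule finite_subset[of _ "{w. f w \<noteq> 0} \<union> {w. g w \<noteq> 0}"]) auto
lemma finsupp_add: "finsupp f \<Longrightarrow> finsupp g \<Longrightarrow> finsupp (\<lambda>w. f w + g w)"
  unfolding finsupp_def by (rule finite_subset[of _ "{w. f w \<noteq> 0} \<union> {w. g w \<noteq> 0}"]) auto
lemma finsupp_diff: "finsupp f \<Longrightarrow> finsupp g \<Longrightarrow> finsupp (\<lambda>w. f w - g w)"
  unfolding finsupp_def by (rule finite_subset[of _ "{w. f w \<noteq> 0} \<union> {w. g w \<noteq> 0}"]) auto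
lemma finsupp_smul: "finsupp f \<Longrightarrow> finsupp (\<lambda>w. a * f w)"
  unfolding finsupp_def by (rule finite_subset[of _ "{w. f w \<noteq> 0}"]) auto

lemma FA_finsupp: "f \<in> FA n \<Longrightarrow> finsupp f" by (simp add: FA_def finsupp_def)

lemma Iid_finsupp: "a \<in> Iid n \<Longrightarrow> finsupp a"
  by (induction rule: Iid.induct)
     (auto simp: finsupp_diff finsupp_ltr finsupp_fa_mul finsupp_zero finsupp_add finsupp_smul FA_finsupp fa_add_def fa_smul_def)

lemma Jn_finsupp: "a \<in> Jn n \<Longrightarrow> finsupp a"
  by (induction rule: Jn.induct)
     (auto simp: Iid_finsupp finsupp_ltr finsupp_fa_mul finsupp_zero finsupp_add finsupp_smul FA_finsupp fa_add_def fa_smul_def)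

lemma finsupp_vprime: "finsupp (vprime l)"
  by (simp add: vprime_def fa_diff_def finsupp_diff finsupp_fa_mul finsupp_ltr)

lemma finsupp_ad: "finsupp a \<Longrightarrow> finsupp (ad X a)"
  by (simp add: ad_def fa_diff_def finsupp_diff finsupp_fa_mul finsupp_ltr)

lemma Sh_finsupp: "p \<in> Sh n \<Longrightarrow> finsupp p"
  by (auto simp: Sh_def intro: FA_finsupp)

lemma Rt_finsupp: "a \<in> Rt l \<Longrightarrow> finsupp a"
  by (induction rule: Rt.induct)
     (auto simp: Iid_finsupp finsupp_vprime finsupp_ad finsupp_add finsupp_smul fa_add_def fa_smul_def)

lemma trace_g_set: "X \<in> g_set n \<Longrightarrow> (\<Sum>a=1..n. X a a) = 0" by (simp add: g_set_def)

lemma trace_mbr: "(\<Sum>a=1..n. mbr n X Y a a) = 0"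
proof -
  have "(\<Sum>a=1..n. \<Sum>k=1..n. Y a k * X k a) = (\<Sum>k=1..n. \<Sum>a=1..n. Y a k * X k a)" by (rule sum.swap)
  then show ?thesis unfolding mbr_def mmul_def by (simp add: sum_subtractf mult.commute)
qed

lemma mbr_g_set: "X \<in> g_set n \<Longrightarrow> Y \<in> g_set n \<Longrightarrow> mbr n X Y \<in> g_set n"
proof -
  assume X: "X \<in> g_set n" and Y: "Y \<in> g_set n"
  have "mbr n X Y a b \<noteq> 0 \<Longrightarrow> a \<in> {1..n} \<and> b \<in> {1..n}" for a b
  proof (rule ccontr)
    assume "mbr n X Y a b \<noteq> 0" "\<not> (a \<in> {1..n} \<and> b \<in> {1..n})"
    then have "X a k = 0 \<or> Y k b = 0" "Y a k = 0 \<or> X k b = 0" for k using X Y unfolding g_set_def by blast+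
    then have "mbr n X Y a b = 0" unfolding mbr_def mmul_def by (simp add: sum.neutral)
    then show False using \<open>mbr n X Y a b \<noteq> 0\<close> by simp
  qed
  then show ?thesis using trace_mbr[of n X Y] by (simp add: g_set_def)
qed

lemma h_set_offdiag: "H \<in> h_set n \<Longrightarrow> a \<noteq> b \<Longrightarrow> H a b = 0" by (simp add: h_set_def)
lemma h_set_g_set: "H \<in> h_set n \<Longrightarrow> H \<in> g_set n" by (simp add: h_set_def)
lemma np_set_upper: "E \<in> np_set n \<Longrightarrow> E a b \<noteq> 0 \<Longrightarrow> a < b" by (simp add: np_set_def)

lemma Eu_g_set: "a \<noteq> b \<Longrightarrow> a \<in> {1..n} \<Longrightarrow> b \<in> {1..n} \<Longrightarrow> Eu a b \<in> g_set n"
proof -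
  assume a: "a \<noteq> b" "a \<in> {1..n}" "b \<in> {1..n}"
  have "(\<Sum>k=1..n. Eu a b k k) = 0" using a(1) by (intro sum.neutral) (auto simp: Eu_def)
  then show ?thesis using a by (auto simp: g_set_def Eu_def split: if_splits)
qed

lemma zero_g_set: "(\<lambda>i j. 0) \<in> g_set n" by (simp add: g_set_def)

lemma eroot_g_set: "i \<noteq> j \<Longrightarrow> i \<in> {1..n} \<Longrightarrow> j \<in> {1..n} \<Longrightarrow> eroot i j \<in> g_set n"
proof -
  assume a: "i \<noteq> j" "i \<in> {1..n}" "j \<in> {1..n}"
  have "(\<Sum>k=1..n. eroot i j k k) = 0" using a(1) by (intro sum.neutral) (auto simp: eroot_def msmul_def Eu_def)
  then show ?thesis using a by (auto simp: g_set_def eroot_def msmul_def Eu_def split: if_splits)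
qed

lemma Iid_add': "a \<in> Iid n \<Longrightarrow> b \<in> Iid n \<Longrightarrow> (\<lambda>w. a w + b w) \<in> Iid n"
  using Iid.add[of a n b] by (simp add: fa_add_def)
lemma Iid_smul': "a \<in> Iid n \<Longrightarrow> (\<lambda>w. c * a w) \<in> Iid n"
  using Iid.smul[of a n c] by (simp add: fa_smul_def)
lemma Iid_neg: "a \<in> Iid n \<Longrightarrow> (\<lambda>w. - a w) \<in> Iid n"
  using Iid_smul'[of a n "-1"] by simp
lemma Iid_diff': "a \<in> Iid n \<Longrightarrow> b \<in> Iid n \<Longrightarrow> (\<lambda>w. a w - b w) \<in> Iid n"
  using Iid_add'[OF _ Iid_neg, of a n b] by simp
lemma Iid_sum: "(\<And>i. i \<in> I \<Longrightarrow> f i \<in> Iid n) \<Longrightarrow> (\<lambda>w. \<Sum>i\<in>I. c i * f i w) \<in> Iid n"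
proof (induction I rule: infinite_finite_induct)
  case (infinite A) then show ?case by (simp add: Iid.zero)
next
  case empty then show ?case by (simp add: Iid.zero)
next
  case (insert x F) then show ?case by (simp add: Iid_add' Iid_smul')
qed

lemma fa_word_FA: "set u \<subseteq> g_set n \<Longrightarrow> fa_word u \<in> FA n" by (auto simp: FA_def fa_word_def)

lemma Iid_word_context: "a \<in> Iid n \<Longrightarrow> set u \<subseteq> g_set n \<Longrightarrow> set v \<subseteq> g_set n \<Longrightarrow> fa_mul (fa_word u) (fa_mul a (fa_word v)) \<in> Iid n"
  by (intro Iid.lmul Iid.rmul fa_word_FA)

lemma Iid_comm_context: "X \<in> g_set n \<Longrightarrow> Y \<in> g_set n \<Longrightarrow> set u \<subseteq> g_set n \<Longrightarrow> set v \<subseteq> g_set n \<Longrightarrow>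
  (\<lambda>w. fa_word (u @ [X, Y] @ v) w - fa_word (u @ [Y, X] @ v) w - fa_word (u @ [mbr n X Y] @ v) w) \<in> Iid n"
proof -
  assume a: "X \<in> g_set n" "Y \<in> g_set n" "set u \<subseteq> g_set n" "set v \<subseteq> g_set n"
  have "fa_mul (fa_word u) (fa_mul (\<lambda>w. fa_mul (ltr X) (ltr Y) w - fa_mul (ltr Y) (ltr X) w - ltr (mbr n X Y) w) (fa_word v)) \<in> Iid n"
    by (rule Iid_word_context[OF Iid.comm]) (use a in auto)
  then show ?thesis by (simp add: ltr_eq_fa_word fa_mul_fa_word fa_mul_diff_left fa_mul_diff_right)
qed

lemma Iid_smul_context: "X \<in> g_set n \<Longrightarrow> set u \<subseteq> g_set n \<Longrightarrow> set v \<subseteq> g_set n \<Longrightarrow>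
  (\<lambda>w. fa_word (u @ [msmul c X] @ v) w - c * fa_word (u @ [X] @ v) w) \<in> Iid n"
proof -
  assume a: "X \<in> g_set n" "set u \<subseteq> g_set n" "set v \<subseteq> g_set n"
  have "fa_mul (fa_word u) (fa_mul (\<lambda>w. ltr (msmul c X) w - c * ltr X w) (fa_word v)) \<in> Iid n"
    by (rule Iid_word_context[OF Iid.lin_smul]) (use a in auto)
  then show ?thesis by (simp add: ltr_eq_fa_word fa_mul_fa_word fa_mul_diff_left fa_mul_diff_right fa_mul_smul_left fa_mul_smul_right)
qed

lemma ad_fa_word: "ad X (fa_word w) = (\<lambda>x. fa_word (X # w) x - fa_word (w @ [X]) x)"
  by (simp add: ad_def fa_diff_def ltr_eq_fa_word fa_mul_fa_word)

lemma ad_Iid: "X \<in> g_set n \<Longrightarrow> a \<in> Iid n \<Longrightarrow> ad X a \<in> Iid n"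
  unfolding ad_def fa_diff_def
  by (intro Iid_diff' Iid.lmul Iid.rmul) (auto simp: ltr_eq_fa_word fa_word_FA)

lemma ad_lincomb: "finsupp a \<Longrightarrow> finsupp b \<Longrightarrow> ad X (\<lambda>w. c * a w + d * b w) = (\<lambda>w. c * ad X a w + d * ad X b w)"
  by (simp add: ad_def fa_diff_def fa_mul_lin_left fa_mul_lin_right algebra_simps)

lemma ad_add: "ad X (\<lambda>w. a w + b w) = (\<lambda>w. ad X a w + ad X b w)"
  by (simp add: ad_def fa_diff_def fa_mul_add_left fa_mul_add_right algebra_simps)

lemma ad_diff: "ad X (\<lambda>w. a w - b w) = (\<lambda>w. ad X a w - ad X b w)"
  by (simp add: ad_def fa_diff_def fa_mul_diff_left fa_mul_diff_right algebra_simps)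

lemma ad_sum: "ad X (\<lambda>w. \<Sum>i\<in>I. c i * f i w) = (\<lambda>w. \<Sum>i\<in>I. c i * ad X (f i) w)"
  by (simp add: ad_def fa_diff_def fa_mul_sum_left fa_mul_sum_right sum_subtractf algebra_simps)

definition ueq :: "nat \<Rightarrow> fa \<Rightarrow> fa \<Rightarrow> bool" where
  "ueq n f g \<longleftrightarrow> (\<lambda>w. f w - g w) \<in> Iid n"

lemma ueq_refl: "ueq n f f" by (simp add: ueq_def Iid.zero)
lemma ueq_sym: "ueq n f g \<Longrightarrow> ueq n g f"
  unfolding ueq_def by (drule Iid_neg) simp
lemma ueq_trans [trans]: "ueq n f g \<Longrightarrow> ueq n g h \<Longrightarrow> ueq n f h"
  unfolding ueq_def by (drule (1) Iid_add') simp
lemma ueq_lincomb: "ueq n f f' \<Longrightarrow> ueq n g g' \<Longrightarrow> ueq n (\<lambda>w. a * f w + b * g w) (\<lambda>w. a * f' w + b * g' w)"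
  unfolding ueq_def by (drule Iid_smul'[of _ _ a], drule Iid_smul'[of _ _ b], drule (1) Iid_add') (simp add: algebra_simps)
lemma ueq_add: "ueq n f f' \<Longrightarrow> ueq n g g' \<Longrightarrow> ueq n (\<lambda>w. f w + g w) (\<lambda>w. f' w + g' w)"
  using ueq_lincomb[of n f f' g g' 1 1] by simp
lemma ueq_diff: "ueq n f f' \<Longrightarrow> ueq n g g' \<Longrightarrow> ueq n (\<lambda>w. f w - g w) (\<lambda>w. f' w - g' w)"
  using ueq_lincomb[of n f f' g g' 1 "-1"] by simp
lemma ueq_smul: "ueq n f f' \<Longrightarrow> ueq n (\<lambda>w. a * f w) (\<lambda>w. a * f' w)"
  using ueq_lincomb[of n f f' f f' a 0] by simp

lemma ueq_ad: "X \<in> g_set n \<Longrightarrow> ueq n f g \<Longrightarrow> ueq n (ad X f) (ad X g)"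
  unfolding ueq_def using ad_Iid[of X n "\<lambda>w. f w - g w"] by (simp add: ad_diff)

lemma Rt_ueq: "r \<in> Rt l \<Longrightarrow> ueq (Suc l) f r \<Longrightarrow> f \<in> Rt l"
proof -
  assume r: "r \<in> Rt l" and c: "ueq (Suc l) f r"
  have "fa_add r (\<lambda>w. f w - r w) \<in> Rt l" using Rt.add[OF r Rt.ideal] c by (simp add: ueq_def)
  then show ?thesis by (simp add: fa_add_def)
qed

lemma Rt_smul': "r \<in> Rt l \<Longrightarrow> (\<lambda>w. c * r w) \<in> Rt l"
  using Rt.smul[of r l c] by (simp add: fa_smul_def)
lemma Rt_neg: "r \<in> Rt l \<Longrightarrow> (\<lambda>w. - r w) \<in> Rt l"
  using Rt_smul'[of r l "-1"] by simp

lemma Jn_add': "a \<in> Jn n \<Longrightarrow> b \<in> Jn n \<Longrightarrow> (\<lambda>w. a w + b w) \<in> Jn n"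
  using Jn.add[of a n b] by (simp add: fa_add_def)
lemma Jn_smul': "a \<in> Jn n \<Longrightarrow> (\<lambda>w. c * a w) \<in> Jn n"
  using Jn.smul[of a n c] by (simp add: fa_smul_def)
lemma Jn_diff': "a \<in> Jn n \<Longrightarrow> b \<in> Jn n \<Longrightarrow> (\<lambda>w. a w - b w) \<in> Jn n"
  using Jn_add'[OF _ Jn_smul'[of b n "-1"], of a] by simp

section \<open>Representatives of degree at most two\<close>

definition deg_le2 :: "nat \<Rightarrow> fa \<Rightarrow> bool" where
  "deg_le2 n u \<longleftrightarrow> finsupp u \<and> (\<forall>w. u w \<noteq> 0 \<longrightarrow> length w \<le> 2 \<and> set w \<subseteq> g_set n)"

lemma deg_le2_finsupp: "deg_le2 n u \<Longrightarrow> finsupp u"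
  by (simp add: deg_le2_def)

lemma deg_le2_zero: "deg_le2 n (\<lambda>w. 0)"
  by (simp add: deg_le2_def finsupp_zero)

lemma deg_le2_fa_word: "length w \<le> 2 \<Longrightarrow> set w \<subseteq> g_set n \<Longrightarrow> deg_le2 n (fa_word w)"
  by (simp add: deg_le2_def finsupp_fa_word) (simp add: fa_word_def)

lemma deg_le2_lincomb:
  assumes "deg_le2 n a" "deg_le2 n b"
  shows "deg_le2 n (\<lambda>w. c * a w + d * b w)"
proof -
  have "finsupp (\<lambda>w. c * a w + d * b w)"
    using assms by (simp add: deg_le2_def finsupp_lincomb)
  moreover have "length w \<le> 2 \<and> set w \<subseteq> g_set n" if "c * a w + d * b w \<noteq> 0" for w
  proof -
    have "a w \<noteq> 0 \<or> b w \<noteq> 0" using that by auto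
    then show ?thesis using assms unfolding deg_le2_def by blast
  qed
  ultimately show ?thesis by (simp add: deg_le2_def)
qed

lemma deg_le2_sum:
  "finite I \<Longrightarrow> (\<And>i. i \<in> I \<Longrightarrow> deg_le2 n (f i)) \<Longrightarrow> deg_le2 n (\<lambda>w. \<Sum>i\<in>I. c i * f i w)"
proof (induction I rule: finite_induct)
  case empty
  then show ?case by (simp add: deg_le2_zero)
next
  case (insert i I)
  then have "deg_le2 n (\<lambda>w. c i * f i w + 1 * (\<Sum>i\<in>I. c i * f i w))"
    by (intro deg_le2_lincomb) auto
  then show ?case using insert(1,2) by simp
qed

text \<open>Leibniz rule: the representative of \<open>[X, w]\<close> for a word \<open>w\<close> of length at most two.\<close>

definition ad_word :: "nat \<Rightarrow> mat \<Rightarrow> mat list \<Rightarrow> fa" where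
  "ad_word n X w = (case w of [] \<Rightarrow> (\<lambda>x. 0) | [A] \<Rightarrow> fa_word [mbr n X A]
      | [A, B] \<Rightarrow> (\<lambda>x. fa_word [mbr n X A, B] x + fa_word [A, mbr n X B] x) | _ \<Rightarrow> (\<lambda>x. 0))"

lemma deg_le2_ad_word:
  assumes "X \<in> g_set n" "length w \<le> 2" "set w \<subseteq> g_set n"
  shows "deg_le2 n (ad_word n X w)"
proof -
  consider "w = []" | A where "w = [A]" | A B where "w = [A, B]"
    using assms(2) by (cases w rule: remdups_adj.cases) auto
  then show ?thesis
  proof cases
    case 1
    then show ?thesis by (simp add: ad_word_def deg_le2_zero)
  next
    case 2
    then show ?thesis using assms by (simp add: ad_word_def deg_le2_fa_word mbr_g_set)
  next
    case 3
    have "deg_le2 n (\<lambda>x. 1 * fa_word [mbr n X A, B] x + 1 * fa_word [A, mbr n X B] x)"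
      using assms 3 by (intro deg_le2_lincomb deg_le2_fa_word) (auto intro!: mbr_g_set)
    then show ?thesis by (simp add: ad_word_def 3)
  qed
qed

lemma ad_fa_word_ueq:
  assumes "X \<in> g_set n" "length w \<le> 2" "set w \<subseteq> g_set n"
  shows "ueq n (ad X (fa_word w)) (ad_word n X w)"
proof -
  consider "w = []" | A where "w = [A]" | A B where "w = [A, B]"
    using assms(2) by (cases w rule: remdups_adj.cases) auto
  then show ?thesis
  proof cases
    case 1
    then show ?thesis by (simp add: ueq_def ad_fa_word ad_word_def Iid.zero)
  next
    case 2
    then show ?thesis
      using Iid_comm_context[of X n A "[]" "[]"] assms by (simp add: ueq_def ad_fa_word ad_word_def)
  next
    case 3
    let ?c1 = "\<lambda>w. fa_word [X, A, B] w - fa_word [A, X, B] w - fa_word [mbr n X A, B] w"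
    let ?c2 = "\<lambda>w. fa_word [A, X, B] w - fa_word [A, B, X] w - fa_word [A, mbr n X B] w"
    have "?c1 \<in> Iid n" using Iid_comm_context[of X n A "[]" "[B]"] assms 3 by simp
    moreover have "?c2 \<in> Iid n" using Iid_comm_context[of X n B "[A]" "[]"] assms 3 by simp
    ultimately have "(\<lambda>w. ?c1 w + ?c2 w) \<in> Iid n" by (rule Iid_add')
    moreover have "(\<lambda>w. ?c1 w + ?c2 w) = (\<lambda>x. ad X (fa_word w) x - ad_word n X w x)"
      by (simp add: 3 ad_fa_word ad_word_def fun_eq_iff)
    ultimately show ?thesis by (simp add: ueq_def)
  qed
qed

lemma ad_deg_le2:
  assumes "X \<in> g_set n" "deg_le2 n u"
  shows "\<exists>u'. deg_le2 n u' \<and> ueq n (ad X u) u'"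
proof -
  let ?S = "{w. u w \<noteq> 0}"
  have fS: "finite ?S" using assms(2) by (simp add: deg_le2_def finsupp_def)
  have ws: "length w \<le> 2 \<and> set w \<subseteq> g_set n" if "w \<in> ?S" for w
    using assms(2) that by (simp add: deg_le2_def)
  define u' where "u' = (\<lambda>x. \<Sum>w\<in>?S. u w * ad_word n X w x)"
  have "deg_le2 n u'"
    unfolding u'_def by (rule deg_le2_sum[OF fS]) (use ws deg_le2_ad_word assms(1) in auto)
  moreover have "ueq n (ad X u) u'"
  proof -
    have "ad X u = (\<lambda>x. \<Sum>w\<in>?S. u w * ad X (fa_word w) x)"
      by (subst finsupp_word_expansion[OF deg_le2_finsupp[OF assms(2)]]) (simp add: ad_sum)
    then have "(\<lambda>x. ad X u x - u' x) = (\<lambda>x. \<Sum>w\<in>?S. u w * (ad X (fa_word w) x - ad_word n X w x))"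
      by (simp add: u'_def sum_subtractf algebra_simps)
    moreover have "(\<lambda>x. \<Sum>w\<in>?S. u w * (\<lambda>x. ad X (fa_word w) x - ad_word n X w x) x) \<in> Iid n"
      by (rule Iid_sum) (use ws ad_fa_word_ueq[unfolded ueq_def] assms(1) in auto)
    ultimately show ?thesis by (simp add: ueq_def)
  qed
  ultimately show ?thesis by blast
qed

lemma vprime_eq_words:
  "vprime l = (\<lambda>w. fa_word [eroot 1 (l+1), eroot 2 l] w - fa_word [eroot 2 (l+1), eroot 1 l] w)"
  by (simp add: vprime_def fa_diff_def ltr_eq_fa_word fa_mul_fa_word)

lemma deg_le2_vprime:
  assumes "3 \<le> l"
  shows "deg_le2 (Suc l) (vprime l)"
proof -
  have "deg_le2 (Suc l) (\<lambda>w. 1 * fa_word [eroot 1 (l+1), eroot 2 l] w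
      + (-1) * fa_word [eroot 2 (l+1), eroot 1 l] w)"
    using assms by (intro deg_le2_lincomb deg_le2_fa_word) (auto intro!: eroot_g_set)
  then show ?thesis by (simp add: vprime_eq_words)
qed

lemma Rt_deg_le2_representative:
  assumes "r \<in> Rt l" "3 \<le> l"
  shows "\<exists>u. deg_le2 (Suc l) u \<and> ueq (Suc l) r u"
  using assms(1)
proof (induction rule: Rt.induct)
  case gen
  show ?case using deg_le2_vprime[OF assms(2)] ueq_refl by blast
next
  case (ideal a)
  then have "ueq (Suc l) a (\<lambda>w. 0)" by (simp add: ueq_def)
  then show ?case using deg_le2_zero by blast
next
  case (add a b)
  then obtain ua ub where u: "deg_le2 (Suc l) ua" "ueq (Suc l) a ua" "deg_le2 (Suc l) ub" "ueq (Suc l) b ub"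
    by blast
  have "deg_le2 (Suc l) (\<lambda>w. 1 * ua w + 1 * ub w)" using u by (intro deg_le2_lincomb)
  moreover have "ueq (Suc l) (fa_add a b) (\<lambda>w. ua w + ub w)"
    using u by (simp add: fa_add_def ueq_add)
  ultimately show ?case by auto
next
  case (smul a c)
  then obtain ua where u: "deg_le2 (Suc l) ua" "ueq (Suc l) a ua" by blast
  have "deg_le2 (Suc l) (\<lambda>w. c * ua w + 0 * ua w)" using u by (intro deg_le2_lincomb)
  moreover have "ueq (Suc l) (fa_smul c a) (\<lambda>w. c * ua w)"
    using u by (simp add: fa_smul_def ueq_smul)
  ultimately show ?case by auto
next
  case (adj X a)
  then have X: "X \<in> g_set (Suc l)" by simp
  obtain ua where ua: "deg_le2 (Suc l) ua" "ueq (Suc l) a ua" using adj.IH by blast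
  obtain u' where "deg_le2 (Suc l) u'" "ueq (Suc l) (ad X ua) u'"
    using ad_deg_le2[OF X ua(1)] by blast
  then show ?case using ueq_trans[OF ueq_ad[OF X ua(2)]] by blast
qed

section \<open>Oscillator representations\<close>

type_synonym expvec = "nat \<times> nat \<Rightarrow> complex"
type_synonym gpoly = "expvec \<Rightarrow> complex"

text \<open>A function \<open>f :: gpoly\<close> stands for the formal sum of \<open>f x * t^x\<close> over exponent vectors \<open>x\<close>
  with complex entries, in variables \<open>t_(k,a)\<close> (copy \<open>k\<close>, coordinate \<open>a\<close>). Off \<open>B\<close>, \<open>weyl_x e\<close> is
  multiplication by \<open>t_e\<close> and \<open>weyl_d e\<close> is \<open>d/dt_e\<close>; on \<open>B\<close> the roles are exchanged
  (\<open>weyl_x e = d/dt_e\<close>, \<open>weyl_d e = -t_e\<close>), which keeps \<open>[weyl_d e, weyl_x e] = 1\<close>.\<close>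

definition weyl_x :: "(nat \<times> nat \<Rightarrow> bool) \<Rightarrow> nat \<times> nat \<Rightarrow> gpoly \<Rightarrow> gpoly" where
  "weyl_x B e f = (\<lambda>x. if B e then (x e + 1) * f (x(e := x e + 1)) else f (x(e := x e - 1)))"
definition weyl_d :: "(nat \<times> nat \<Rightarrow> bool) \<Rightarrow> nat \<times> nat \<Rightarrow> gpoly \<Rightarrow> gpoly" where
  "weyl_d B e f = (\<lambda>x. if B e then - f (x(e := x e - 1)) else (x e + 1) * f (x(e := x e + 1)))"

definition linear_op :: "(gpoly \<Rightarrow> gpoly) \<Rightarrow> bool" where
  "linear_op T \<longleftrightarrow> (\<forall>a b f g. T (\<lambda>x. a * f x + b * g x) = (\<lambda>x. a * T f x + b * T g x))"

lemma linear_weyl_x: "linear_op (weyl_x B e)" by (auto simp: linear_op_def weyl_x_def fun_eq_iff algebra_simps)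
lemma linear_weyl_d: "linear_op (weyl_d B e)" by (auto simp: linear_op_def weyl_d_def fun_eq_iff algebra_simps)

lemma linear_op_zero: "linear_op T \<Longrightarrow> T (\<lambda>x. 0) = (\<lambda>x. 0)"
  unfolding linear_op_def by (drule spec[of _ 0], drule spec[of _ 0]) auto
lemma linear_op_add: "linear_op T \<Longrightarrow> T (\<lambda>x. f x + g x) = (\<lambda>x. T f x + T g x)"
  unfolding linear_op_def by (drule spec[of _ 1], drule spec[of _ 1]) auto
lemma linear_op_smul: "linear_op T \<Longrightarrow> T (\<lambda>x. a * f x) = (\<lambda>x. a * T f x)"
proof -
  assume "linear_op T"
  then have "T (\<lambda>x. a * f x + 0 * f x) = (\<lambda>x. a * T f x + 0 * T f x)" unfolding linear_op_def by blast
  then show ?thesis by simp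
qed
lemma linear_op_sum: "linear_op T \<Longrightarrow> T (\<lambda>x. \<Sum>i\<in>S. g i x) = (\<lambda>x. \<Sum>i\<in>S. T (g i) x)"
proof (induction S rule: infinite_finite_induct)
  case (infinite S) then show ?case by (simp add: linear_op_zero)
next
  case empty then show ?case by (simp add: linear_op_zero)
next
  case (insert s S)
  then show ?case by (simp add: linear_op_add[OF insert.prems, where f="g s" and g="\<lambda>x. \<Sum>i\<in>S. g i x"])
qed
lemma linear_op_comp: "linear_op T \<Longrightarrow> linear_op U \<Longrightarrow> linear_op (\<lambda>f. T (U f))"
  unfolding linear_op_def by simp
lemma linear_op_id: "linear_op (\<lambda>f. f)" unfolding linear_op_def by simp

lemma weyl_x_commute: "weyl_x B e (weyl_x B e' f) = weyl_x B e' (weyl_x B e f)"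
  by (cases "e = e'") (auto simp: weyl_x_def fun_eq_iff fun_upd_twist algebra_simps)
lemma weyl_d_commute: "weyl_d B e (weyl_d B e' f) = weyl_d B e' (weyl_d B e f)"
  by (cases "e = e'") (auto simp: weyl_d_def fun_eq_iff fun_upd_twist algebra_simps)
lemma weyl_d_x_commutator: "weyl_d B e (weyl_x B e' f) = (\<lambda>x. weyl_x B e' (weyl_d B e f) x + (if e = e' then f x else 0))"
  by (cases "e = e'") (auto simp: weyl_d_def weyl_x_def fun_eq_iff fun_upd_twist algebra_simps)

text \<open>\<open>polar K B a b\<close>, the sum over \<open>k < K\<close> of \<open>x_(k,a) d_(k,b)\<close>, realises the matrix unit
  \<open>E_ab\<close> on \<open>K\<close> copies of the natural representation; by the commutator rule below, \<open>osc\<close> is a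
  representation of \<open>gl_n\<close>.\<close>

definition polar :: "nat \<Rightarrow> (nat \<times> nat \<Rightarrow> bool) \<Rightarrow> nat \<Rightarrow> nat \<Rightarrow> gpoly \<Rightarrow> gpoly" where
  "polar K B a b f = (\<lambda>x. \<Sum>k<K. weyl_x B (k,a) (weyl_d B (k,b) f) x)"

lemma linear_polar: "linear_op (polar K B a b)"
  unfolding linear_op_def polar_def
  by (simp add: linear_op_add[OF linear_weyl_x] linear_op_add[OF linear_weyl_d]
      linear_op_smul[OF linear_weyl_x] linear_op_smul[OF linear_weyl_d] sum.distrib sum_distrib_left)

lemma polar_commutator:
  "polar K B a b (polar K B c d f) = (\<lambda>x. polar K B c d (polar K B a b f) x
      + (if b = c then polar K B a d f x else 0) - (if d = a then polar K B c b f x else 0))"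
proof
  fix x
  define T where "T k k' = weyl_x B (k,a) (weyl_x B (k',c) (weyl_d B (k,b) (weyl_d B (k',d) f))) x" for k k'
  have L: "polar K B a b (polar K B c d f) x = (\<Sum>k<K. \<Sum>k'<K. T k k') + (if b = c then polar K B a d f x else 0)"
  proof -
    have "polar K B a b (polar K B c d f) x = (\<Sum>k<K. \<Sum>k'<K. weyl_x B (k,a) (weyl_d B (k,b) (weyl_x B (k',c) (weyl_d B (k',d) f))) x)"
      unfolding polar_def by (simp add: linear_op_sum[OF linear_weyl_x] linear_op_sum[OF linear_weyl_d])
    also have "\<dots> = (\<Sum>k<K. \<Sum>k'<K. T k k' + (if k = k' \<and> b = c then weyl_x B (k,a) (weyl_d B (k',d) f) x else 0))"
      unfolding T_def weyl_d_x_commutator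
      by (intro sum.cong refl) (auto simp: linear_op_add[OF linear_weyl_x] linear_op_zero[OF linear_weyl_x])
    also have "\<dots> = (\<Sum>k<K. \<Sum>k'<K. T k k') + (\<Sum>k<K. \<Sum>k'<K. (if k = k' \<and> b = c then weyl_x B (k,a) (weyl_d B (k',d) f) x else 0))"
      by (simp add: sum.distrib)
    also have "(\<Sum>k<K. \<Sum>k'<K. (if k = k' \<and> b = c then weyl_x B (k,a) (weyl_d B (k',d) f) x else 0)) = (if b = c then polar K B a d f x else 0)"
      unfolding polar_def by (auto simp: sum.delta)
    finally show ?thesis .
  qed
  have R: "polar K B c d (polar K B a b f) x = (\<Sum>k'<K. \<Sum>k<K. T k k') + (if d = a then polar K B c b f x else 0)"
  proof -
    have "polar K B c d (polar K B a b f) x = (\<Sum>k'<K. \<Sum>k<K. weyl_x B (k',c) (weyl_d B (k',d) (weyl_x B (k,a) (weyl_d B (k,b) f))) x)"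
      unfolding polar_def by (simp add: linear_op_sum[OF linear_weyl_x] linear_op_sum[OF linear_weyl_d])
    also have "\<dots> = (\<Sum>k'<K. \<Sum>k<K. T k k' + (if k' = k \<and> d = a then weyl_x B (k',c) (weyl_d B (k,b) f) x else 0))"
      unfolding T_def weyl_d_x_commutator
      by (intro sum.cong refl)
        (auto simp: linear_op_add[OF linear_weyl_x] linear_op_zero[OF linear_weyl_x] weyl_x_commute weyl_d_commute)
    also have "\<dots> = (\<Sum>k'<K. \<Sum>k<K. T k k') + (\<Sum>k'<K. \<Sum>k<K. (if k' = k \<and> d = a then weyl_x B (k',c) (weyl_d B (k,b) f) x else 0))"
      by (simp add: sum.distrib)
    also have "(\<Sum>k'<K. \<Sum>k<K. (if k' = k \<and> d = a then weyl_x B (k',c) (weyl_d B (k,b) f) x else 0)) = (if d = a then polar K B c b f x else 0)"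
      unfolding polar_def by (auto simp: sum.delta)
    finally show ?thesis .
  qed
  show "polar K B a b (polar K B c d f) x = polar K B c d (polar K B a b f) x
      + (if b = c then polar K B a d f x else 0) - (if d = a then polar K B c b f x else 0)"
    using L R sum.swap[of "\<lambda>k k'. T k k'" "{..<K}" "{..<K}"] by simp
qed

definition osc :: "nat \<Rightarrow> nat \<Rightarrow> (nat \<times> nat \<Rightarrow> bool) \<Rightarrow> mat \<Rightarrow> gpoly \<Rightarrow> gpoly" where
  "osc n K B X f = (\<lambda>x. \<Sum>a=1..n. \<Sum>b=1..n. X a b * polar K B a b f x)"

lemma linear_osc: "linear_op (osc n K B X)"
  unfolding linear_op_def osc_def
  by (simp add: linear_op_add[OF linear_polar] linear_op_smul[OF linear_polar] sum.distrib sum_distrib_left algebra_simps)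

lemma osc_madd: "osc n K B (madd X Y) f = (\<lambda>x. osc n K B X f x + osc n K B Y f x)"
  by (simp add: osc_def madd_def sum.distrib algebra_simps)
lemma osc_msmul: "osc n K B (msmul c X) f = (\<lambda>x. c * osc n K B X f x)"
  by (simp add: osc_def msmul_def sum_distrib_left algebra_simps)

lemma sum_swap_pairs:
  fixes g :: "nat \<Rightarrow> nat \<Rightarrow> nat \<Rightarrow> nat \<Rightarrow> complex"
  shows "(\<Sum>a\<in>A. \<Sum>b\<in>A. \<Sum>c\<in>A. \<Sum>d\<in>A. g a b c d) = (\<Sum>c\<in>A. \<Sum>d\<in>A. \<Sum>a\<in>A. \<Sum>b\<in>A. g a b c d)"
proof -
  have "(\<Sum>a\<in>A. \<Sum>b\<in>A. \<Sum>c\<in>A. \<Sum>d\<in>A. g a b c d) = (\<Sum>a\<in>A. \<Sum>c\<in>A. \<Sum>b\<in>A. \<Sum>d\<in>A. g a b c d)"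
    by (rule sum.cong[OF refl], rule sum.swap)
  also have "\<dots> = (\<Sum>c\<in>A. \<Sum>a\<in>A. \<Sum>b\<in>A. \<Sum>d\<in>A. g a b c d)" by (rule sum.swap)
  also have "\<dots> = (\<Sum>c\<in>A. \<Sum>a\<in>A. \<Sum>d\<in>A. \<Sum>b\<in>A. g a b c d)"
    by (rule sum.cong[OF refl], rule sum.cong[OF refl], rule sum.swap)
  also have "\<dots> = (\<Sum>c\<in>A. \<Sum>d\<in>A. \<Sum>a\<in>A. \<Sum>b\<in>A. g a b c d)"
    by (rule sum.cong[OF refl], rule sum.swap)
  finally show ?thesis .
qed

lemma sum_sum_delta_left:
  fixes g :: "nat \<Rightarrow> nat \<Rightarrow> complex"
  assumes "finite A" "b \<in> A"
  shows "(\<Sum>c\<in>A. \<Sum>d\<in>A. g c d * (if b = c then h d else 0)) = (\<Sum>d\<in>A. g b d * h d)"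
proof -
  have "(\<Sum>c\<in>A. \<Sum>d\<in>A. g c d * (if b = c then h d else 0)) = (\<Sum>c\<in>A. if c = b then (\<Sum>d\<in>A. g b d * h d) else 0)"
    by (rule sum.cong) auto
  also have "\<dots> = (\<Sum>d\<in>A. g b d * h d)" using assms by simp
  finally show ?thesis .
qed

lemma sum_sum_delta_right:
  fixes g :: "nat \<Rightarrow> nat \<Rightarrow> complex"
  assumes "finite A" "a \<in> A"
  shows "(\<Sum>c\<in>A. \<Sum>d\<in>A. g c d * (if d = a then h c else 0)) = (\<Sum>c\<in>A. g c a * h c)"
proof -
  have "(\<Sum>d\<in>A. g c d * (if d = a then h c else 0)) = g c a * h c" for c
  proof -
    have "(\<Sum>d\<in>A. g c d * (if d = a then h c else 0)) = (\<Sum>d\<in>A. if d = a then g c a * h c else 0)"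
      by (rule sum.cong) auto
    also have "\<dots> = g c a * h c" using assms by simp
    finally show ?thesis .
  qed
  then show ?thesis by simp
qed

lemma osc_osc_expand:
  "osc n K B X (osc n K B Y f) x = (\<Sum>a=1..n. \<Sum>b=1..n. \<Sum>c=1..n. \<Sum>d=1..n.
     X a b * Y c d * polar K B a b (polar K B c d f) x)"
  unfolding osc_def
  by (simp only: linear_op_sum[OF linear_polar] linear_op_smul[OF linear_polar] sum_distrib_left mult.assoc)

lemma osc_mmul_expand:
  "osc n K B (mmul n X Y) f x = (\<Sum>a=1..n. \<Sum>b=1..n. \<Sum>c=1..n. \<Sum>d=1..n.
     X a b * Y c d * (if b = c then polar K B a d f x else 0))"
proof -
  let ?A = "{1..n}"
  have "(\<Sum>a\<in>?A. \<Sum>b\<in>?A. \<Sum>c\<in>?A. \<Sum>d\<in>?A. X a b * Y c d * (if b = c then polar K B a d f x else 0))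
     = (\<Sum>a\<in>?A. \<Sum>b\<in>?A. \<Sum>d\<in>?A. X a b * Y b d * polar K B a d f x)"
    apply (rule sum.cong[OF refl], rule sum.cong[OF refl])
    apply (subst sum_sum_delta_left[where g="\<lambda>c d. X _ _ * Y c d", simplified mult.assoc[symmetric]])
    by auto
  also have "\<dots> = (\<Sum>a\<in>?A. \<Sum>d\<in>?A. \<Sum>b\<in>?A. X a b * Y b d * polar K B a d f x)"
    by (rule sum.cong[OF refl], rule sum.swap)
  also have "\<dots> = osc n K B (mmul n X Y) f x"
    by (simp add: osc_def mmul_def sum_distrib_right)
  finally show ?thesis by simp
qed

lemma osc_mmul_expand':
  "osc n K B (mmul n Y X) f x = (\<Sum>a=1..n. \<Sum>b=1..n. \<Sum>c=1..n. \<Sum>d=1..n.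
     X a b * Y c d * (if d = a then polar K B c b f x else 0))"
proof -
  let ?A = "{1..n}"
  have "(\<Sum>a\<in>?A. \<Sum>b\<in>?A. \<Sum>c\<in>?A. \<Sum>d\<in>?A. X a b * Y c d * (if d = a then polar K B c b f x else 0))
     = (\<Sum>a\<in>?A. \<Sum>b\<in>?A. \<Sum>c\<in>?A. X a b * Y c a * polar K B c b f x)"
    apply (rule sum.cong[OF refl], rule sum.cong[OF refl])
    apply (subst sum_sum_delta_right[where g="\<lambda>c d. X _ _ * Y c d", simplified mult.assoc[symmetric]])
    by auto
  also have "\<dots> = (\<Sum>b\<in>?A. \<Sum>a\<in>?A. \<Sum>c\<in>?A. X a b * Y c a * polar K B c b f x)"
    by (rule sum.swap)
  also have "\<dots> = (\<Sum>b\<in>?A. \<Sum>c\<in>?A. \<Sum>a\<in>?A. X a b * Y c a * polar K B c b f x)"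
    by (rule sum.cong[OF refl], rule sum.swap)
  also have "\<dots> = (\<Sum>c\<in>?A. \<Sum>b\<in>?A. \<Sum>a\<in>?A. X a b * Y c a * polar K B c b f x)"
    by (rule sum.swap)
  also have "\<dots> = osc n K B (mmul n Y X) f x"
    unfolding osc_def mmul_def sum_distrib_right by (intro sum.cong refl) (simp add: mult_ac)
  finally show ?thesis by simp
qed

lemma osc_commutator:
  "osc n K B X (osc n K B Y f) = (\<lambda>x. osc n K B Y (osc n K B X f) x + osc n K B (mbr n X Y) f x)"
proof
  fix x
  let ?A = "{1..n}"
  let ?P = "\<lambda>a b c d. polar K B a b (polar K B c d f) x"
  have "osc n K B X (osc n K B Y f) x = (\<Sum>a\<in>?A. \<Sum>b\<in>?A. \<Sum>c\<in>?A. \<Sum>d\<in>?A.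
        X a b * Y c d * ?P c d a b + X a b * Y c d * (if b = c then polar K B a d f x else 0)
        - X a b * Y c d * (if d = a then polar K B c b f x else 0))"
    unfolding osc_osc_expand by (intro sum.cong refl) (subst polar_commutator, simp add: algebra_simps)
  also have "\<dots> = (\<Sum>a\<in>?A. \<Sum>b\<in>?A. \<Sum>c\<in>?A. \<Sum>d\<in>?A. X a b * Y c d * ?P c d a b)
     + osc n K B (mmul n X Y) f x - osc n K B (mmul n Y X) f x"
    unfolding osc_mmul_expand[of n K B X Y] osc_mmul_expand'[of n K B Y X] by (simp only: sum.distrib sum_subtractf)
  also have "(\<Sum>a\<in>?A. \<Sum>b\<in>?A. \<Sum>c\<in>?A. \<Sum>d\<in>?A. X a b * Y c d * ?P c d a b)
      = osc n K B Y (osc n K B X f) x"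
    unfolding osc_osc_expand[of n K B Y X]
    by (subst sum_swap_pairs) (simp only: mult.commute)
  finally show "osc n K B X (osc n K B Y f) x = osc n K B Y (osc n K B X f) x + osc n K B (mbr n X Y) f x"
    by (simp add: osc_def mbr_def sum_subtractf ring_distribs)
qed

fun osc_word :: "nat \<Rightarrow> nat \<Rightarrow> (nat \<times> nat \<Rightarrow> bool) \<Rightarrow> mat list \<Rightarrow> gpoly \<Rightarrow> gpoly" where
  "osc_word n K B [] f = f"
| "osc_word n K B (X # w) f = osc n K B X (osc_word n K B w f)"

lemma linear_osc_word: "linear_op (osc_word n K B w)"
proof (induction w)
  case Nil
  have "osc_word n K B [] = (\<lambda>f. f)" by (rule ext) simp
  then show ?case by (simp add: linear_op_id)
next
  case (Cons X w)
  have "osc_word n K B (X # w) = (\<lambda>f. osc n K B X (osc_word n K B w f))" by (rule ext) simp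
  then show ?case using linear_op_comp[OF linear_osc Cons.IH] by simp
qed

lemma osc_word_append: "osc_word n K B (u @ v) f = osc_word n K B u (osc_word n K B v f)"
  by (induction u) auto

definition osc_fa :: "nat \<Rightarrow> nat \<Rightarrow> (nat \<times> nat \<Rightarrow> bool) \<Rightarrow> fa \<Rightarrow> gpoly \<Rightarrow> gpoly" where
  "osc_fa n K B a f = (\<lambda>x. \<Sum>w\<in>{w. a w \<noteq> 0}. a w * osc_word n K B w f x)"

lemma linear_osc_fa: "linear_op (osc_fa n K B a)"
  unfolding linear_op_def osc_fa_def
  by (simp add: linear_op_add[OF linear_osc_word] linear_op_smul[OF linear_osc_word] sum.distrib sum_distrib_left algebra_simps)

lemma osc_fa_superset:
  assumes "finite S" "{w. a w \<noteq> 0} \<subseteq> S"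
  shows "osc_fa n K B a f = (\<lambda>x. \<Sum>w\<in>S. a w * osc_word n K B w f x)"
  unfolding osc_fa_def using assms by (intro ext sum.mono_neutral_left) auto

lemma osc_fa_lincomb:
  assumes "finsupp a" "finsupp b"
  shows "osc_fa n K B (\<lambda>w. c * a w + d * b w) f = (\<lambda>x. c * osc_fa n K B a f x + d * osc_fa n K B b f x)"
proof -
  let ?S = "{w. a w \<noteq> 0} \<union> {w. b w \<noteq> 0}"
  have fS: "finite ?S" using assms by (simp add: finsupp_def)
  have "osc_fa n K B (\<lambda>w. c * a w + d * b w) f = (\<lambda>x. \<Sum>w\<in>?S. (c * a w + d * b w) * osc_word n K B w f x)"
    by (rule osc_fa_superset[OF fS]) auto
  moreover have "osc_fa n K B a f = (\<lambda>x. \<Sum>w\<in>?S. a w * osc_word n K B w f x)" by (rule osc_fa_superset[OF fS]) auto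
  moreover have "osc_fa n K B b f = (\<lambda>x. \<Sum>w\<in>?S. b w * osc_word n K B w f x)" by (rule osc_fa_superset[OF fS]) auto
  ultimately show ?thesis by (simp add: sum.distrib sum_distrib_left algebra_simps)
qed

lemma osc_fa_add: "finsupp a \<Longrightarrow> finsupp b \<Longrightarrow> osc_fa n K B (\<lambda>w. a w + b w) f = (\<lambda>x. osc_fa n K B a f x + osc_fa n K B b f x)"
  using osc_fa_lincomb[of a b n K B 1 1 f] by simp
lemma osc_fa_diff: "finsupp a \<Longrightarrow> finsupp b \<Longrightarrow> osc_fa n K B (\<lambda>w. a w - b w) f = (\<lambda>x. osc_fa n K B a f x - osc_fa n K B b f x)"
  using osc_fa_lincomb[of a b n K B 1 "-1" f] by simp
lemma osc_fa_smul: "finsupp a \<Longrightarrow> osc_fa n K B (\<lambda>w. c * a w) f = (\<lambda>x. c * osc_fa n K B a f x)"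
  using osc_fa_lincomb[of a a n K B c 0 f] by simp
lemma osc_fa_zero: "osc_fa n K B (\<lambda>w. 0) f = (\<lambda>x. 0)" by (simp add: osc_fa_def)
lemma osc_fa_word: "osc_fa n K B (fa_word u) f = osc_word n K B u f"
  by (rule ext) (simp add: osc_fa_def fa_word_def)

lemma osc_fa_mul:
  assumes "finsupp a" "finsupp b"
  shows "osc_fa n K B (fa_mul a b) f = osc_fa n K B a (osc_fa n K B b f)"
proof
  fix x
  let ?Sa = "{w. a w \<noteq> 0}" and ?Sb = "{w. b w \<noteq> 0}"
  let ?S = "(\<lambda>(u,v). u @ v) ` (?Sa \<times> ?Sb)"
  have fa: "finite ?Sa" and fb: "finite ?Sb" using assms by (auto simp: finsupp_def)
  have fS: "finite ?S" using fa fb by simp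
  have "osc_fa n K B (fa_mul a b) f x = (\<Sum>w\<in>?S. fa_mul a b w * osc_word n K B w f x)"
    using osc_fa_superset[OF fS fa_mul_support[of a b]] by simp
  also have "\<dots> = (\<Sum>w\<in>?S. \<Sum>u\<in>?Sa. \<Sum>v\<in>?Sb. a u * b v * (fa_word (u @ v) w * osc_word n K B w f x))"
    by (subst fa_mul_word_expansion[OF assms]) (simp add: sum_distrib_left sum_distrib_right mult_ac)
  also have "\<dots> = (\<Sum>u\<in>?Sa. \<Sum>v\<in>?Sb. a u * b v * (\<Sum>w\<in>?S. fa_word (u @ v) w * osc_word n K B w f x))"
    by (simp add: sum_distrib_left sum.swap[of _ ?S])
  also have "\<dots> = (\<Sum>u\<in>?Sa. \<Sum>v\<in>?Sb. a u * b v * osc_word n K B (u @ v) f x)"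
  proof (intro sum.cong refl)
    fix u v assume "u \<in> ?Sa" "v \<in> ?Sb"
    then have "u @ v \<in> ?S" by auto
    then have "(\<Sum>w\<in>?S. fa_word (u @ v) w * osc_word n K B w f x) = osc_word n K B (u @ v) f x"
    proof -
      have "(\<Sum>w\<in>?S. fa_word (u @ v) w * osc_word n K B w f x) = (\<Sum>w\<in>?S. if w = u @ v then osc_word n K B (u @ v) f x else 0)"
        by (rule sum.cong) (auto simp: fa_word_def)
      also have "\<dots> = osc_word n K B (u @ v) f x" using fS \<open>u @ v \<in> ?S\<close> by simp
      finally show ?thesis .
    qed
    then show "a u * b v * (\<Sum>w\<in>?S. fa_word (u @ v) w * osc_word n K B w f x) = a u * b v * osc_word n K B (u @ v) f x" by simp
  qed
  also have "\<dots> = osc_fa n K B a (osc_fa n K B b f) x"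
    unfolding osc_fa_def osc_word_append
    by (simp add: linear_op_sum[OF linear_osc_word] linear_op_smul[OF linear_osc_word] sum_distrib_left algebra_simps)
  finally show "osc_fa n K B (fa_mul a b) f x = osc_fa n K B a (osc_fa n K B b f) x" .
qed

lemma osc_fa_Iid: "a \<in> Iid n \<Longrightarrow> osc_fa n K B a f = (\<lambda>x. 0)"
proof (induction arbitrary: f rule: Iid.induct)
  case (lin_add X Y)
  show ?case
    by (simp add: ltr_eq_fa_word osc_fa_diff finsupp_diff finsupp_fa_word osc_fa_word osc_madd)
next
  case (lin_smul X c)
  show ?case
    by (simp add: ltr_eq_fa_word osc_fa_diff osc_fa_smul finsupp_smul finsupp_fa_word osc_fa_word osc_msmul)
next
  case (comm X Y)
  have "osc_fa n K B (fa_mul (ltr X) (ltr Y)) f = osc n K B X (osc n K B Y f)"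
    by (simp add: ltr_eq_fa_word fa_mul_fa_word osc_fa_word)
  moreover have "osc_fa n K B (fa_mul (ltr Y) (ltr X)) f = osc n K B Y (osc n K B X f)"
    by (simp add: ltr_eq_fa_word fa_mul_fa_word osc_fa_word)
  ultimately show ?case
    by (simp add: ltr_eq_fa_word fa_mul_fa_word osc_fa_diff finsupp_diff finsupp_fa_word osc_fa_word osc_commutator[of n K B X Y f])
next
  case zero then show ?case by (simp add: osc_fa_zero)
next
  case (add a b) then show ?case by (simp add: fa_add_def osc_fa_add Iid_finsupp)
next
  case (smul a c) then show ?case by (simp add: fa_smul_def osc_fa_smul Iid_finsupp)
next
  case (lmul a g) then show ?case by (simp add: osc_fa_mul Iid_finsupp FA_finsupp linear_op_zero[OF linear_osc_fa])
next
  case (rmul a g) then show ?case by (simp add: osc_fa_mul Iid_finsupp FA_finsupp)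
qed

lemma osc_fa_ueq:
  assumes "ueq n a b" "finsupp a" "finsupp b"
  shows "osc_fa n K B a f = osc_fa n K B b f"
proof -
  have "osc_fa n K B (\<lambda>w. a w - b w) f = (\<lambda>x. 0)"
    using assms(1) by (simp add: ueq_def osc_fa_Iid)
  then show ?thesis using assms(2,3) by (simp add: osc_fa_diff fun_eq_iff)
qed

section \<open>Highest weight vectors\<close>

definition gmonom :: "expvec \<Rightarrow> gpoly" where "gmonom g = (\<lambda>x. if x = g then 1 else 0)"

lemma fun_upd_shift_eq_iff: fixes x g :: expvec and c :: complex
  shows "(x(e := x e + c) = g) \<longleftrightarrow> (x = g(e := g e - c))"
proof
  assume "x(e := x e + c) = g"
  then have g: "g = x(e := x e + c)" by simp
  show "x = g(e := g e - c)" unfolding g by simp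
next
  assume "x = g(e := g e - c)"
  then show "x(e := x e + c) = g" by simp
qed

lemma fun_upd_shift_eq_iff': fixes x g :: expvec and c :: complex shows "(x(e := x e - c) = g) \<longleftrightarrow> (x = g(e := g e + c))"
  using fun_upd_shift_eq_iff[of x e "-c" g] by simp

lemma weyl_d_gmonom: "weyl_d B e (gmonom g) = (if B e then (\<lambda>x. - gmonom (g(e := g e + 1)) x) else (\<lambda>x. g e * gmonom (g(e := g e - 1)) x))"
proof (cases "B e")
  case True
  then show ?thesis by (intro ext) (simp add: weyl_d_def gmonom_def fun_upd_shift_eq_iff')
next
  case False
  then show ?thesis by (intro ext) (simp add: weyl_d_def gmonom_def fun_upd_shift_eq_iff)
qed

lemma weyl_x_gmonom: "weyl_x B e (gmonom g) = (if B e then (\<lambda>x. g e * gmonom (g(e := g e - 1)) x) else gmonom (g(e := g e + 1)))"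
proof (cases "B e")
  case True
  then show ?thesis by (intro ext) (simp add: weyl_x_def gmonom_def fun_upd_shift_eq_iff)
next
  case False
  then show ?thesis by (intro ext) (simp add: weyl_x_def gmonom_def fun_upd_shift_eq_iff')
qed

lemma weyl_d_gmonom': "weyl_d B e (gmonom g) = (\<lambda>x. (if B e then -1 else g e) * gmonom (g(e := g e + (if B e then 1 else -1))) x)"
  by (simp add: weyl_d_gmonom)
lemma weyl_x_gmonom': "weyl_x B e (gmonom g) = (\<lambda>x. (if B e then g e else 1) * gmonom (g(e := g e + (if B e then -1 else 1))) x)"
  by (simp add: weyl_x_gmonom)

text \<open>In copy \<open>k\<close> the coordinates \<open>a \<le> m k\<close> are dualised, and the monomial with exponent vector
  \<open>hw_exp m s\<close>, the product over \<open>k\<close> of \<open>t_(k, m k + 1) ^ s k\<close>, is a highest weight vector: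
  \<open>x_(k,a) d_(k,b)\<close> with \<open>a < b\<close> kills it, and \<open>x_e d_e\<close> acts on it by \<open>hw_eigen m s e\<close>.\<close>

definition dual_coords :: "(nat \<Rightarrow> nat) \<Rightarrow> nat \<times> nat \<Rightarrow> bool" where "dual_coords m = (\<lambda>e. snd e \<le> m (fst e))"
definition hw_exp :: "(nat \<Rightarrow> nat) \<Rightarrow> (nat \<Rightarrow> complex) \<Rightarrow> expvec" where
  "hw_exp m s = (\<lambda>e. if snd e = m (fst e) + 1 then s (fst e) else 0)"
definition hw_eigen :: "(nat \<Rightarrow> nat) \<Rightarrow> (nat \<Rightarrow> complex) \<Rightarrow> nat \<times> nat \<Rightarrow> complex" where
  "hw_eigen m s e = (if snd e \<le> m (fst e) then -1 else if snd e = m (fst e) + 1 then s (fst e) else 0)"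

lemma weyl_xd_gmonom: "weyl_x B e (weyl_d B e' (gmonom g)) = (\<lambda>x. (if B e' then -1 else g e') *
   ((if B e then (g(e' := g e' + (if B e' then 1 else -1))) e else 1) *
     gmonom ((g(e' := g e' + (if B e' then 1 else -1)))(e := (g(e' := g e' + (if B e' then 1 else -1))) e + (if B e then -1 else 1))) x))"
  by (simp add: weyl_d_gmonom' linear_op_smul[OF linear_weyl_x] weyl_x_gmonom')

lemma weyl_xd_upper_hw: "a < b \<Longrightarrow> weyl_x (dual_coords m) (k,a) (weyl_d (dual_coords m) (k,b) (gmonom (hw_exp m s))) = (\<lambda>x. 0)"
  unfolding weyl_xd_gmonom by (rule ext) (auto simp: dual_coords_def hw_exp_def)

lemma weyl_xd_same_gmonom: "weyl_x B e (weyl_d B e (gmonom g)) = (\<lambda>x. (if B e then -(g e + 1) else g e) * gmonom g x)"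
  unfolding weyl_xd_gmonom by (rule ext) (auto simp: algebra_simps)

lemma weyl_xd_same_at: "weyl_x B e (weyl_d B e f) g = (if B e then -(g e + 1) else g e) * f g"
  by (auto simp: weyl_x_def weyl_d_def algebra_simps)

lemma hw_eigen_eq: "(if dual_coords m e then -(hw_exp m s e + 1) else hw_exp m s e) = hw_eigen m s e"
  by (auto simp: dual_coords_def hw_exp_def hw_eigen_def)

lemma weyl_xd_same_hw: "weyl_x (dual_coords m) e (weyl_d (dual_coords m) e (gmonom (hw_exp m s))) = (\<lambda>x. hw_eigen m s e * gmonom (hw_exp m s) x)"
  by (simp add: weyl_xd_same_gmonom hw_eigen_eq)

lemma weyl_xd_same_hw_at: "weyl_x (dual_coords m) e (weyl_d (dual_coords m) e f) (hw_exp m s) = hw_eigen m s e * f (hw_exp m s)"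
  by (simp add: weyl_xd_same_at hw_eigen_eq)

lemma weyl_xd_distinct_at: assumes "e \<noteq> e'" shows "weyl_x B e (weyl_d B e' (gmonom g)) g = 0"
proof -
  define c1 :: complex where "c1 = (if B e' then 1 else -1)"
  define c2 :: complex where "c2 = (if B e then -1 else 1)"
  have "c1 \<noteq> 0" by (simp add: c1_def)
  then have "((g(e' := g e' + c1))(e := (g(e' := g e' + c1)) e + c2)) e' \<noteq> g e'" using assms by simp
  then have "(g(e' := g e' + c1))(e := (g(e' := g e' + c1)) e + c2) \<noteq> g" by metis
  then show ?thesis unfolding weyl_xd_gmonom c1_def[symmetric] c2_def[symmetric] by (simp add: gmonom_def)
qed

definition diag_weight :: "nat \<Rightarrow> (nat \<Rightarrow> nat) \<Rightarrow> (nat \<Rightarrow> complex) \<Rightarrow> nat \<Rightarrow> complex" where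
  "diag_weight K m s a = (\<Sum>k<K. hw_eigen m s (k,a))"
definition diag_eval :: "nat \<Rightarrow> nat \<Rightarrow> (nat \<Rightarrow> nat) \<Rightarrow> (nat \<Rightarrow> complex) \<Rightarrow> mat \<Rightarrow> complex" where
  "diag_eval n K m s X = (\<Sum>a=1..n. X a a * diag_weight K m s a)"
definition lower_part :: "mat \<Rightarrow> mat" where "lower_part X = (\<lambda>a b. if b < a then X a b else 0)"
definition upper_part :: "mat \<Rightarrow> mat" where "upper_part X = (\<lambda>a b. if a < b then X a b else 0)"
definition diag_part :: "mat \<Rightarrow> mat" where "diag_part X = (\<lambda>a b. if a = b then X a b else 0)"

lemma lower_diag_upper_split: "X = madd (madd (lower_part X) (diag_part X)) (upper_part X)"
  by (auto simp: fun_eq_iff madd_def lower_part_def upper_part_def diag_part_def)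

context
  fixes n K :: nat and m :: "nat \<Rightarrow> nat" and s :: "nat \<Rightarrow> complex"
begin

abbreviation "hwv \<equiv> gmonom (hw_exp m s)"
abbreviation "hwB \<equiv> dual_coords m"

lemma polar_upper_hwv: "a < b \<Longrightarrow> polar K hwB a b hwv = (\<lambda>x. 0)"
  by (simp add: polar_def weyl_xd_upper_hw)

lemma polar_diag_hwv: "polar K hwB a a hwv = (\<lambda>x. diag_weight K m s a * hwv x)"
  by (simp add: polar_def weyl_xd_same_hw diag_weight_def sum_distrib_right)

lemma osc_upper_hwv: assumes "\<And>a b. X a b \<noteq> 0 \<Longrightarrow> a < b" shows "osc n K hwB X hwv = (\<lambda>x. 0)"
proof -
  have "X a b * polar K hwB a b hwv x = 0" for a b x
    by (cases "X a b = 0") (auto simp: polar_upper_hwv assms)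
  then show ?thesis unfolding osc_def by (intro ext) (simp del: mult_eq_0_iff)
qed

lemma osc_diag_hwv: assumes "\<And>a b. a \<noteq> b \<Longrightarrow> X a b = 0" shows "osc n K hwB X hwv = (\<lambda>x. diag_eval n K m s X * hwv x)"
proof
  fix x
  have "osc n K hwB X hwv x = (\<Sum>a=1..n. \<Sum>b=1..n. if b = a then X a a * polar K hwB a a hwv x else 0)"
    unfolding osc_def by (intro sum.cong refl) (auto simp: assms)
  also have "\<dots> = (\<Sum>a=1..n. X a a * diag_weight K m s a * hwv x)" by (simp add: polar_diag_hwv mult.assoc)
  finally show "osc n K hwB X hwv x = diag_eval n K m s X * hwv x" by (simp add: diag_eval_def sum_distrib_right)
qed

lemma osc_diag_at_hw: assumes "\<And>a b. a \<noteq> b \<Longrightarrow> X a b = 0" shows "osc n K hwB X f (hw_exp m s) = diag_eval n K m s X * f (hw_exp m s)"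
proof -
  have "osc n K hwB X f (hw_exp m s) = (\<Sum>a=1..n. \<Sum>b=1..n. if b = a then X a a * polar K hwB a a f (hw_exp m s) else 0)"
    unfolding osc_def by (intro sum.cong refl) (auto simp: assms)
  also have "\<dots> = (\<Sum>a=1..n. X a a * diag_weight K m s a * f (hw_exp m s))"
    by (simp add: polar_def weyl_xd_same_hw_at diag_weight_def sum_distrib_right sum_distrib_left mult.assoc)
  finally show ?thesis by (simp add: diag_eval_def sum_distrib_right)
qed

lemma osc_hwv_at_hw: "osc n K hwB X hwv (hw_exp m s) = diag_eval n K m s X"
proof -
  have "osc n K hwB X hwv (hw_exp m s) = (\<Sum>a=1..n. \<Sum>b=1..n. if b = a then X a a * diag_weight K m s a else 0)"
    unfolding osc_def
  proof (intro sum.cong refl)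
    fix a b
    show "X a b * polar K hwB a b hwv (hw_exp m s) = (if b = a then X a a * diag_weight K m s a else 0)"
    proof (cases "b = a")
      case True then show ?thesis using polar_diag_hwv[of a] by (simp add: gmonom_def)
    next
      case False then show ?thesis by (simp add: polar_def weyl_xd_distinct_at)
    qed
  qed
  also have "\<dots> = diag_eval n K m s X" by (simp add: diag_eval_def)
  finally show ?thesis .
qed

definition height_mat :: mat where "height_mat = (\<lambda>i j. if i = j then of_nat i else 0)"

lemma osc_Eu: "a \<in> {1..n} \<Longrightarrow> b \<in> {1..n} \<Longrightarrow> osc n K B (Eu a b) f = polar K B a b f"
proof
  fix x assume ab: "a \<in> {1..n}" "b \<in> {1..n}"
  have "osc n K B (Eu a b) f x = (\<Sum>a'=1..n. if a' = a then (\<Sum>b'=1..n. if b' = b then polar K B a b f x else 0) else 0)"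
    unfolding osc_def Eu_def by (intro sum.cong refl) (auto simp: if_distrib[where f="\<lambda>z. z * _"] cong: if_cong)
  also have "\<dots> = polar K B a b f x" using ab by simp
  finally show "osc n K B (Eu a b) f x = polar K B a b f x" .
qed

lemma mbr_height_mat_Eu: assumes "a \<in> {1..n}" "b \<in> {1..n}"
  shows "mbr n height_mat (Eu a b) = msmul (of_nat a - of_nat b) (Eu a b)"
proof (intro ext)
  fix i j
  have 1: "mmul n height_mat (Eu a b) i j = (if i = a \<and> j = b then of_nat a else 0)"
  proof -
    have "mmul n height_mat (Eu a b) i j = (\<Sum>k=1..n. if k = a then (if i = a \<and> j = b then of_nat a else 0) else 0)"
      unfolding mmul_def height_mat_def Eu_def by (intro sum.cong refl) auto
    then show ?thesis using assms by simp
  qed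
  have 2: "mmul n (Eu a b) height_mat i j = (if i = a \<and> j = b then of_nat b else 0)"
  proof -
    have "mmul n (Eu a b) height_mat i j = (\<Sum>k=1..n. if k = b then (if i = a \<and> j = b then of_nat b else 0) else 0)"
      unfolding mmul_def height_mat_def Eu_def by (intro sum.cong refl) auto
    then show ?thesis using assms by simp
  qed
  show "mbr n height_mat (Eu a b) i j = msmul (of_nat a - of_nat b) (Eu a b) i j"
    unfolding mbr_def 1 2 by (auto simp: msmul_def Eu_def)
qed

lemma osc_height_mat_polar: assumes "a \<in> {1..n}" "b \<in> {1..n}"
  shows "osc n K B height_mat (polar K B a b f) = (\<lambda>x. polar K B a b (osc n K B height_mat f) x + (of_nat a - of_nat b) * polar K B a b f x)"
  using osc_commutator[of n K B height_mat "Eu a b" f] assms by (simp add: osc_Eu mbr_height_mat_Eu osc_msmul)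

text \<open>Weight argument: \<open>height_mat = diag(1, ..., n)\<close> has a strictly larger eigenvalue on
  \<open>E_ab E_cd v\<close> than on \<open>v\<close>, so this vector has no component along \<open>v\<close>.\<close>

lemma polar_lower_lower_at_hw: assumes "a \<in> {1..n}" "b \<in> {1..n}" "c \<in> {1..n}" "d \<in> {1..n}" "b < a" "d < c"
  shows "polar K hwB a b (polar K hwB c d hwv) (hw_exp m s) = 0"
proof -
  let ?y = "polar K hwB a b (polar K hwB c d hwv)"
  have H0d: "\<And>i j. i \<noteq> j \<Longrightarrow> height_mat i j = 0" by (simp add: height_mat_def)
  have 1: "osc n K hwB height_mat hwv = (\<lambda>x. diag_eval n K m s height_mat * hwv x)" by (rule osc_diag_hwv[OF H0d])
  have 2: "osc n K hwB height_mat (polar K hwB c d hwv) = (\<lambda>x. (diag_eval n K m s height_mat + (of_nat c - of_nat d)) * polar K hwB c d hwv x)"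
    using assms by (simp add: osc_height_mat_polar 1 linear_op_smul[OF linear_polar]) (simp add: algebra_simps)
  have 3: "osc n K hwB height_mat ?y = (\<lambda>x. (diag_eval n K m s height_mat + (of_nat c - of_nat d) + (of_nat a - of_nat b)) * ?y x)"
    using assms by (simp add: osc_height_mat_polar 2 linear_op_smul[OF linear_polar]) (simp add: algebra_simps)
  have "osc n K hwB height_mat ?y (hw_exp m s) = diag_eval n K m s height_mat * ?y (hw_exp m s)" by (rule osc_diag_at_hw[OF H0d])
  then have "((of_nat c - of_nat d) + (of_nat a - of_nat b)) * ?y (hw_exp m s) = (0::complex)"
    unfolding 3 by (simp add: algebra_simps)
  moreover have "((of_nat c - of_nat d) + (of_nat a - of_nat b)) \<noteq> (0::complex)"
  proof -
    have "real c - real d + (real a - real b) > 0" using assms by simp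
    then have "complex_of_real (real c - real d + (real a - real b)) \<noteq> 0" by (metis of_real_eq_0_iff less_irrefl)
    then show ?thesis by simp
  qed
  ultimately show ?thesis by simp
qed

lemma osc_lower_lower_at_hw: assumes "\<And>a b. N a b \<noteq> 0 \<Longrightarrow> b < a" "\<And>a b. N' a b \<noteq> 0 \<Longrightarrow> b < a"
  shows "osc n K hwB N (osc n K hwB N' hwv) (hw_exp m s) = 0"
proof -
  have "osc n K hwB N (osc n K hwB N' hwv) (hw_exp m s) = (\<Sum>a=1..n. \<Sum>b=1..n. \<Sum>c=1..n. \<Sum>d=1..n.
      N a b * (N' c d * polar K hwB a b (polar K hwB c d hwv) (hw_exp m s)))"
    unfolding osc_def by (simp add: linear_op_sum[OF linear_polar] linear_op_smul[OF linear_polar] sum_distrib_left)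
  also have "\<dots> = 0"
  proof (intro sum.neutral ballI)
    fix a b c d assume "a \<in> {1..n}" "b \<in> {1..n}" "c \<in> {1..n}" "d \<in> {1..n}"
    then show "N a b * (N' c d * polar K hwB a b (polar K hwB c d hwv) (hw_exp m s)) = 0"
      using assms polar_lower_lower_at_hw by (cases "N a b = 0"; cases "N' c d = 0") auto
  qed
  finally show ?thesis .
qed

lemma osc_osc_hwv_at_hw: "osc n K hwB X (osc n K hwB Y hwv) (hw_exp m s) = diag_eval n K m s (mbr n X (lower_part Y)) + diag_eval n K m s X * diag_eval n K m s Y"
proof -
  have low: "\<And>a b. lower_part Z a b \<noteq> 0 \<Longrightarrow> b < a" for Z by (auto simp: lower_part_def split: if_splits)
  have up: "\<And>a b. upper_part Z a b \<noteq> 0 \<Longrightarrow> a < b" for Z by (auto simp: upper_part_def split: if_splits)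
  have dg: "\<And>a b. a \<noteq> b \<Longrightarrow> diag_part Z a b = 0" for Z by (auto simp: diag_part_def)
  have evd: "diag_eval n K m s (diag_part Z) = diag_eval n K m s Z" for Z by (simp add: diag_eval_def diag_part_def)
  have evl: "diag_eval n K m s (lower_part Z) = 0" for Z by (simp add: diag_eval_def lower_part_def)
  have rv: "osc n K hwB Z hwv = (\<lambda>x. osc n K hwB (lower_part Z) hwv x + diag_eval n K m s Z * hwv x)" for Z
    by (subst lower_diag_upper_split[of Z]) (simp add: osc_madd osc_upper_hwv[OF up] osc_diag_hwv[OF dg] evd)
  have "osc n K hwB X (osc n K hwB Y hwv) = (\<lambda>x. osc n K hwB X (osc n K hwB (lower_part Y) hwv) x + diag_eval n K m s Y * osc n K hwB X hwv x)"
    by (simp add: rv[of Y] linear_op_add[OF linear_osc] linear_op_smul[OF linear_osc])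
  moreover have "osc n K hwB X (osc n K hwB (lower_part Y) hwv) = (\<lambda>x. osc n K hwB (lower_part Y) (osc n K hwB X hwv) x + osc n K hwB (mbr n X (lower_part Y)) hwv x)"
    by (rule osc_commutator)
  moreover have "osc n K hwB (lower_part Y) (osc n K hwB X hwv) (hw_exp m s) = 0"
    by (simp add: rv[of X] linear_op_add[OF linear_osc] linear_op_smul[OF linear_osc] osc_lower_lower_at_hw[OF low low] osc_hwv_at_hw evl)
  ultimately show ?thesis by (simp add: osc_hwv_at_hw)
qed

end

definition hw_weight :: "nat \<Rightarrow> (nat \<Rightarrow> nat) \<Rightarrow> (nat \<Rightarrow> complex) \<Rightarrow> nat \<Rightarrow> complex" where
  "hw_weight K m s i = diag_weight K m s i - diag_weight K m s (i + 1)"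

lemma abel_summation: fixes l :: nat shows "(\<Sum>k=1..l. (\<Sum>j=1..k. X j j) * (L k - L (k+1))) =
    (\<Sum>j=1..l. X j j * L j) - (\<Sum>j=1..l. X j j) * (L (l+1) :: complex)"
  by (induction l) (simp_all add: algebra_simps)

lemma diag_eval_eq_hval:
  assumes "(\<Sum>a=1..Suc l. X a a) = 0"
  shows "diag_eval (Suc l) K m s X = hval l (hw_weight K m s) X"
proof -
  have "hval l (hw_weight K m s) X = (\<Sum>j=1..l. X j j * diag_weight K m s j) - (\<Sum>j=1..l. X j j) * diag_weight K m s (l+1)"
    unfolding hval_def hw_weight_def by (rule abel_summation)
  moreover have "(\<Sum>j=1..l. X j j) = - X (l+1) (l+1)" using assms by (simp add: add_eq_0_iff)
  ultimately show ?thesis by (simp add: diag_eval_def)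
qed

lemma diag_eval_g_set: "X \<in> g_set (Suc l) \<Longrightarrow> diag_eval (Suc l) K m s X = hval l (hw_weight K m s) X"
  by (rule diag_eval_eq_hval[OF trace_g_set])

text \<open>The coefficient of the highest weight vector \<open>v\<close> in \<open>w v\<close>, for a word \<open>w\<close> of length at most
  two: in \<open>X Y v\<close> it is \<open>mu([X, Y_-]) + mu(X) mu(Y)\<close>, where \<open>Y_-\<close> is the strictly lower
  triangular part of \<open>Y\<close>.\<close>

fun hw_word_value :: "nat \<Rightarrow> (nat \<Rightarrow> complex) \<Rightarrow> mat list \<Rightarrow> complex" where
  "hw_word_value l x [] = 1"
| "hw_word_value l x [X] = hval l x X"
| "hw_word_value l x [X, Y] = hval l x (mbr (l+1) X (lower_part Y)) + hval l x X * hval l x Y"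
| "hw_word_value l x w = 0"

lemma osc_word_hwv_at_hw:
  assumes "length w \<le> 2" "set w \<subseteq> g_set (Suc l)"
  shows "osc_word (Suc l) K (dual_coords m) w (gmonom (hw_exp m s)) (hw_exp m s) = hw_word_value l (hw_weight K m s) w"
proof -
  consider "w = []" | X where "w = [X]" | X Y where "w = [X, Y]"
    using assms(1) by (cases w rule: remdups_adj.cases) auto
  then show ?thesis
  proof cases
    case 1 then show ?thesis by (simp add: gmonom_def)
  next
    case 2
    then have "X \<in> g_set (Suc l)" using assms(2) by simp
    then show ?thesis using 2 by (simp add: osc_hwv_at_hw diag_eval_g_set)
  next
    case 3
    then have "X \<in> g_set (Suc l)" "Y \<in> g_set (Suc l)" using assms(2) by auto
    then show ?thesis
      using 3 diag_eval_eq_hval[where X="mbr (Suc l) X (lower_part Y)", OF trace_mbr]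
      by (simp add: osc_osc_hwv_at_hw diag_eval_g_set)
  qed
qed

lemma osc_fa_deg_le2_at_hw:
  assumes "deg_le2 (Suc l) u"
  shows "osc_fa (Suc l) K (dual_coords m) u (gmonom (hw_exp m s)) (hw_exp m s) = (\<Sum>w\<in>{w. u w \<noteq> 0}. u w * hw_word_value l (hw_weight K m s) w)"
  unfolding osc_fa_def using assms by (intro sum.cong refl) (auto simp: deg_le2_def osc_word_hwv_at_hw)

lemma osc_fa_Jn_hwv: "j \<in> Jn n \<Longrightarrow> osc_fa n K (dual_coords m) j (gmonom (hw_exp m s)) = (\<lambda>x. 0)"
proof (induction rule: Jn.induct)
  case (ideal a) then show ?case by (rule osc_fa_Iid)
next
  case (gen f E)
  have "osc_fa n K (dual_coords m) (fa_mul f (ltr E)) (gmonom (hw_exp m s)) = osc_fa n K (dual_coords m) f (osc n K (dual_coords m) E (gmonom (hw_exp m s)))"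
    using gen(1) by (simp add: osc_fa_mul FA_finsupp finsupp_fa_word ltr_eq_fa_word osc_fa_word)
  moreover have "osc n K (dual_coords m) E (gmonom (hw_exp m s)) = (\<lambda>x. 0)" by (rule osc_upper_hwv) (rule np_set_upper[OF gen(2)])
  ultimately show ?case by (simp add: osc_fa_mul FA_finsupp finsupp_ltr ltr_eq_fa_word osc_fa_word osc_upper_hwv np_set_upper linear_op_zero[OF linear_osc_fa])
next
  case zero then show ?case by (simp add: osc_fa_zero)
next
  case (add a b) then show ?case by (simp add: fa_add_def osc_fa_add Jn_finsupp)
next
  case (smul a c) then show ?case by (simp add: fa_smul_def osc_fa_smul Jn_finsupp)
qed

lemma osc_word_h_hwv:
  assumes "set w \<subseteq> h_set (l+1)"
  shows "osc_word (Suc l) K (dual_coords m) w (gmonom (hw_exp m s)) = (\<lambda>x. prod_list (map (hval l (hw_weight K m s)) w) * gmonom (hw_exp m s) x)"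
  using assms
proof (induction w)
  case Nil then show ?case by simp
next
  case (Cons H w)
  then have H: "H \<in> h_set (Suc l)" by simp
  have "diag_eval (Suc l) K m s H = hval l (hw_weight K m s) H"
    using H by (simp add: diag_eval_g_set h_set_g_set)
  moreover have "osc_word (Suc l) K (dual_coords m) w (gmonom (hw_exp m s)) = (\<lambda>x. prod_list (map (hval l (hw_weight K m s)) w) * gmonom (hw_exp m s) x)"
    using Cons by simp
  ultimately show ?case
    by (simp add: linear_op_smul[OF linear_osc] osc_diag_hwv[OF h_set_offdiag[OF H]]) (simp add: algebra_simps)
qed

lemma osc_fa_Sh_hwv:
  assumes "p \<in> Sh (Suc l)"
  shows "osc_fa (Suc l) K (dual_coords m) p (gmonom (hw_exp m s)) = (\<lambda>x. evalS l (hw_weight K m s) p * gmonom (hw_exp m s) x)"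
  unfolding osc_fa_def evalS_def sum_distrib_right
proof (intro ext sum.cong refl)
  fix x w assume "w \<in> {w. p w \<noteq> 0}"
  then have "set w \<subseteq> h_set (Suc l)" using assms by (simp add: Sh_def)
  then show "p w * osc_word (Suc l) K (dual_coords m) w (gmonom (hw_exp m s)) x = p w * prod_list (map (hval l (hw_weight K m s)) w) * gmonom (hw_exp m s) x"
    by (simp add: osc_word_h_hwv)
qed

lemma polar_rank_one: "polar (Suc 0) B a b f = weyl_x B (0,a) (weyl_d B (0,b) f)"
  by (simp add: polar_def)

lemma weyl_d_x_commute: "e \<noteq> e' \<Longrightarrow> weyl_d B e (weyl_x B e' f) = weyl_x B e' (weyl_d B e f)"
  by (simp add: weyl_d_x_commutator)

text \<open>With a single copy \<open>E_ab\<close> acts as \<open>x_a d_b\<close>, and the two terms of \<open>v'\<close> cancel because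
  \<open>x_1\<close>, \<open>x_2\<close>, \<open>d_l\<close> and \<open>d_(l+1)\<close> pairwise commute.\<close>

lemma osc_rank_one_vprime: assumes "3 \<le> l" shows "osc_fa (Suc l) (Suc 0) B (vprime l) f = (\<lambda>x. 0)"
proof -
  have r: "\<And>i j. i \<in> {1..Suc l} \<Longrightarrow> j \<in> {1..Suc l} \<Longrightarrow> osc (Suc l) (Suc 0) B (eroot i j) g = (\<lambda>x. (-1)^(j-i-1) * weyl_x B (0,i) (weyl_d B (0,j) g) x)" for g
    by (simp add: eroot_def osc_msmul osc_Eu polar_rank_one)
  define k where "k = l - 3"
  have k: "l = Suc (Suc (Suc k))" using assms by (simp add: k_def)
  have sg: "((-1::complex)^k * (-1)^k) = 1" by (simp add: power_mult_distrib[symmetric])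
  have c: "weyl_x B (0,1) (weyl_d B (0,Suc l) (weyl_x B (0,2) (weyl_d B (0,l) f))) = weyl_x B (0,2) (weyl_d B (0,Suc l) (weyl_x B (0,1) (weyl_d B (0,l) f)))"
  proof -
    have "weyl_x B (0,1) (weyl_d B (0,Suc l) (weyl_x B (0,2) (weyl_d B (0,l) f))) = weyl_x B (0,1) (weyl_x B (0,2) (weyl_d B (0,Suc l) (weyl_d B (0,l) f)))"
      using assms by (simp add: weyl_d_x_commute)
    also have "\<dots> = weyl_x B (0,2) (weyl_x B (0,1) (weyl_d B (0,Suc l) (weyl_d B (0,l) f)))" by (rule weyl_x_commute)
    also have "\<dots> = weyl_x B (0,2) (weyl_d B (0,Suc l) (weyl_x B (0,1) (weyl_d B (0,l) f)))"
      using assms by (simp add: weyl_d_x_commute)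
    finally show ?thesis .
  qed
  have "osc_fa (Suc l) (Suc 0) B (vprime l) f = (\<lambda>x. osc (Suc l) (Suc 0) B (eroot 1 (Suc l)) (osc (Suc l) (Suc 0) B (eroot 2 l) f) x
      - osc (Suc l) (Suc 0) B (eroot 2 (Suc l)) (osc (Suc l) (Suc 0) B (eroot 1 l) f) x)"
    by (simp add: vprime_eq_words osc_fa_diff finsupp_fa_word osc_fa_word)
  also have "\<dots> = (\<lambda>x. 0)"
    using assms c sg by (simp add: r linear_op_smul[OF linear_weyl_x] linear_op_smul[OF linear_weyl_d]) (simp add: k)
  finally show ?thesis .
qed

lemma osc_rank_one_Rt: assumes "r \<in> Rt l" "3 \<le> l" shows "osc_fa (Suc l) (Suc 0) B r f = (\<lambda>x. 0)"
  using assms(1)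
proof (induction arbitrary: f rule: Rt.induct)
  case gen then show ?case by (rule osc_rank_one_vprime[OF assms(2)])
next
  case (ideal a) then show ?case by (simp add: osc_fa_Iid)
next
  case (add a b) then show ?case by (simp add: fa_add_def osc_fa_add Rt_finsupp)
next
  case (smul a c) then show ?case by (simp add: fa_smul_def osc_fa_smul Rt_finsupp)
next
  case (adj X a)
  then show ?case
    by (simp add: ad_def fa_diff_def osc_fa_diff osc_fa_mul finsupp_fa_mul finsupp_ltr Rt_finsupp
        ltr_eq_fa_word finsupp_fa_word osc_fa_word linear_op_zero[OF linear_osc])
qed

definition hw_value :: "nat \<Rightarrow> fa \<Rightarrow> (nat \<Rightarrow> complex) \<Rightarrow> complex" where
  "hw_value l u x = (\<Sum>w\<in>{w. u w \<noteq> 0}. u w * hw_word_value l x w)"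

lemma evalS_hw_weight:
  assumes r: "r \<in> Rt l" and p: "p \<in> Sh (Suc l)" and rp: "fa_diff r p \<in> Jn (Suc l)"
    and u: "deg_le2 (Suc l) u" and ru: "ueq (Suc l) r u"
  shows "evalS l (hw_weight K m s) p = hw_value l u (hw_weight K m s)"
proof -
  let ?v = "gmonom (hw_exp m s)" and ?osc = "osc_fa (Suc l) K (dual_coords m)"
  have fin: "finsupp r" "finsupp p" "finsupp u"
    using Rt_finsupp[OF r] Sh_finsupp[OF p] deg_le2_finsupp[OF u] .
  have "?osc (\<lambda>w. r w - p w) ?v = (\<lambda>x. 0)"
    using osc_fa_Jn_hwv[OF rp] by (simp add: fa_diff_def)
  then have rp_eq: "?osc p ?v = ?osc r ?v"
    by (simp add: osc_fa_diff fin fun_eq_iff)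
  have "evalS l (hw_weight K m s) p = ?osc p ?v (hw_exp m s)"
    by (simp add: osc_fa_Sh_hwv[OF p]) (simp add: gmonom_def)
  also have "\<dots> = ?osc u ?v (hw_exp m s)"
    using rp_eq osc_fa_ueq[OF ru fin(1,3)] by simp
  also have "\<dots> = hw_value l u (hw_weight K m s)"
    by (simp add: osc_fa_deg_le2_at_hw[OF u] hw_value_def)
  finally show ?thesis .
qed

lemma hw_value_rank_one:
  assumes r: "r \<in> Rt l" and l3: "3 \<le> l" and u: "deg_le2 (Suc l) u" and ru: "ueq (Suc l) r u"
  shows "hw_value l u (hw_weight (Suc 0) m s) = 0"
proof -
  let ?v = "gmonom (hw_exp m s)" and ?osc = "osc_fa (Suc l) (Suc 0) (dual_coords m)"
  have "hw_value l u (hw_weight (Suc 0) m s) = ?osc u ?v (hw_exp m s)"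
    by (simp add: osc_fa_deg_le2_at_hw[OF u] hw_value_def)
  also have "\<dots> = ?osc r ?v (hw_exp m s)"
    using osc_fa_ueq[OF ru Rt_finsupp[OF r] deg_le2_finsupp[OF u]] by simp
  also have "\<dots> = 0"
    by (simp add: osc_rank_one_Rt[OF r l3])
  finally show ?thesis .
qed

lemma hw_eigen_diff: "hw_eigen m s (k,i) - hw_eigen m s (k, i+1) = (if i = m k then -1 - s k else if i = m k + 1 then s k else 0)"
  by (auto simp: hw_eigen_def)

lemma hw_weight_formula: "hw_weight K m s i = (\<Sum>k<K. if i = m k then -1 - s k else if i = m k + 1 then s k else 0)"
  by (simp add: hw_weight_def diag_weight_def sum_subtractf[symmetric] hw_eigen_diff del: One_nat_def)

lemma hw_weight_rank_one: "hw_weight (Suc 0) m s i = (if i = m 0 then -1 - s 0 else if i = m 0 + 1 then s 0 else 0)"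
  by (simp add: hw_weight_formula)

definition hw_exp_param :: "nat \<Rightarrow> (nat \<Rightarrow> complex) \<Rightarrow> nat \<Rightarrow> complex" where
  "hw_exp_param l x k = (\<Sum>j\<in>{k+1..l}. x j + 1)"

lemma hw_weight_attains: assumes "i \<in> {1..l}" shows "hw_weight (Suc l) (\<lambda>k. k) (hw_exp_param l x) i = x i"
proof -
  obtain j where j: "i = Suc j" using assms by (cases i) auto
  have "hw_weight (Suc l) (\<lambda>k. k) (hw_exp_param l x) i = (\<Sum>k<Suc l. (if k = i then -1 - hw_exp_param l x k else 0) + (if k = j then hw_exp_param l x k else 0))"
    unfolding hw_weight_formula by (intro sum.cong refl) (auto simp: j)
  also have "\<dots> = -1 - hw_exp_param l x i + hw_exp_param l x j" using assms j by (simp add: sum.distrib)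
  also have "\<dots> = x i"
  proof -
    have "{j+1..l} = insert i {i+1..l}" using assms j by auto
    then have "hw_exp_param l x j = (x i + 1) + hw_exp_param l x i" by (simp add: hw_exp_param_def)
    then show ?thesis by simp
  qed
  finally show ?thesis .
qed

lemma hval_cong: "\<forall>i\<in>{1..l}. x i = y i \<Longrightarrow> hval l x = hval l y"
  by (auto simp: hval_def fun_eq_iff)

lemma hw_word_value_cong: "\<forall>i\<in>{1..l}. x i = y i \<Longrightarrow> hw_word_value l x = hw_word_value l y"
proof
  fix w assume a: "\<forall>i\<in>{1..l}. x i = y i"
  show "hw_word_value l x w = hw_word_value l y w" using hval_cong[OF a]
    by (induction l x w rule: hw_word_value.induct) simp_all
qed

lemma hw_value_cong: "\<forall>i\<in>{1..l}. x i = y i \<Longrightarrow> hw_value l u x = hw_value l u y"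
  unfolding hw_value_def by (simp add: hw_word_value_cong[of l x y])

lemma evalS_cong: "\<forall>i\<in>{1..l}. x i = y i \<Longrightarrow> evalS l x p = evalS l y p"
  unfolding evalS_def by (simp add: hval_cong[of l x y])

lemma evalS_eq_hw_value:
  assumes r: "r \<in> Rt l" and p: "p \<in> Sh (Suc l)" and rp: "fa_diff r p \<in> Jn (Suc l)"
    and u: "deg_le2 (Suc l) u" and ru: "ueq (Suc l) r u"
  shows "evalS l x p = hw_value l u x"
proof -
  have e: "\<And>i. i \<in> {1..l} \<Longrightarrow> hw_weight (Suc l) (\<lambda>k. k) (hw_exp_param l x) i = x i" by (rule hw_weight_attains)
  have "evalS l x p = evalS l (hw_weight (Suc l) (\<lambda>k. k) (hw_exp_param l x)) p" using e by (intro evalS_cong) auto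
  also have "\<dots> = hw_value l u (hw_weight (Suc l) (\<lambda>k. k) (hw_exp_param l x))" by (rule evalS_hw_weight[OF r p rp u ru])
  also have "\<dots> = hw_value l u x" using e by (intro hw_value_cong) auto
  finally show ?thesis .
qed

section \<open>Quadratic polynomials vanishing on the lines\<close>

definition quadratic_fn :: "nat \<Rightarrow> ((nat \<Rightarrow> complex) \<Rightarrow> complex) \<Rightarrow> bool" where
  "quadratic_fn l F \<longleftrightarrow> (\<exists>c b a. \<forall>x. F x = c + (\<Sum>k=1..l. b k * x k) + (\<Sum>j=1..l. \<Sum>k=1..l. a j k * x j * x k))"

lemma quadratic_fn_const: "quadratic_fn l (\<lambda>x. c)"
  unfolding quadratic_fn_def by (rule exI[of _ c], rule exI[of _ "\<lambda>k. 0"], rule exI[of _ "\<lambda>j k. 0"]) simp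

lemma quadratic_fn_add: "quadratic_fn l F \<Longrightarrow> quadratic_fn l G \<Longrightarrow> quadratic_fn l (\<lambda>x. F x + G x)"
proof -
  assume "quadratic_fn l F" "quadratic_fn l G"
  then obtain c b a c' b' a' where
    F: "\<forall>x. F x = c + (\<Sum>k=1..l. b k * x k) + (\<Sum>j=1..l. \<Sum>k=1..l. a j k * x j * x k)" and
    G: "\<forall>x. G x = c' + (\<Sum>k=1..l. b' k * x k) + (\<Sum>j=1..l. \<Sum>k=1..l. a' j k * x j * x k)"
    unfolding quadratic_fn_def by blast
  show ?thesis unfolding quadratic_fn_def
    by (rule exI[of _ "c + c'"], rule exI[of _ "\<lambda>k. b k + b' k"], rule exI[of _ "\<lambda>j k. a j k + a' j k"])
       (simp add: F G sum.distrib algebra_simps)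
qed

lemma quadratic_fn_smul: "quadratic_fn l F \<Longrightarrow> quadratic_fn l (\<lambda>x. d * F x)"
proof -
  assume "quadratic_fn l F"
  then obtain c b a where
    F: "\<forall>x. F x = c + (\<Sum>k=1..l. b k * x k) + (\<Sum>j=1..l. \<Sum>k=1..l. a j k * x j * x k)"
    unfolding quadratic_fn_def by blast
  show ?thesis unfolding quadratic_fn_def
    by (rule exI[of _ "d * c"], rule exI[of _ "\<lambda>k. d * b k"], rule exI[of _ "\<lambda>j k. d * a j k"])
       (simp add: F sum_distrib_left algebra_simps)
qed

lemma quadratic_fn_sum:
  "(\<And>i. i \<in> I \<Longrightarrow> quadratic_fn l (F i)) \<Longrightarrow> quadratic_fn l (\<lambda>x. \<Sum>i\<in>I. F i x)"
proof (induction I rule: infinite_finite_induct)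
  case (infinite A) then show ?case by (simp add: quadratic_fn_const)
next
  case empty then show ?case by (simp add: quadratic_fn_const)
next
  case (insert i I) then show ?case by (simp add: quadratic_fn_add)
qed

lemma quadratic_fn_linear: "quadratic_fn l (\<lambda>x. \<Sum>k=1..l. b k * x k)"
  unfolding quadratic_fn_def by (rule exI[of _ 0], rule exI[of _ b], rule exI[of _ "\<lambda>j k. 0"]) simp

lemma quadratic_fn_product: "quadratic_fn l (\<lambda>x. (\<Sum>k=1..l. b k * x k) * (\<Sum>k=1..l. b' k * x k))"
  unfolding quadratic_fn_def
  by (rule exI[of _ 0], rule exI[of _ "\<lambda>k. 0"], rule exI[of _ "\<lambda>j k. b j * b' k"])
     (simp only: sum_product, simp add: mult_ac)

lemma quadratic_fn_hval: "quadratic_fn l (\<lambda>x. hval l x X)"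
  unfolding hval_def by (rule quadratic_fn_linear)

lemma quadratic_fn_hval_product: "quadratic_fn l (\<lambda>x. hval l x X * hval l x Y)"
  unfolding hval_def by (rule quadratic_fn_product)

lemma sum_two_point_eval:
  fixes p q l :: nat and u v :: complex
  assumes "p \<noteq> q"
  shows "(\<Sum>k=1..l. b k * ((if k = p then u else 0) + (if k = q then v else 0))) =
    (if p \<in> {1..l} then b p * u else 0) + (if q \<in> {1..l} then b q * (v::complex) else 0)"
proof -
  have "(\<Sum>k=1..l. b k * ((if k = p then u else 0) + (if k = q then v else 0))) =
        (\<Sum>k=1..l. (if k = p then b p * u else 0) + (if k = q then b q * v else 0))"
    using assms by (intro sum.cong) auto
  also have "\<dots> = (if p \<in> {1..l} then b p * u else 0) + (if q \<in> {1..l} then b q * v else 0)"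
    unfolding sum.distrib by (simp only: sum.delta[OF finite_atLeastAtMost])
  finally show ?thesis .
qed

lemma double_sum_two_point_eval:
  fixes u v :: complex and p q l :: nat and a :: "nat \<Rightarrow> nat \<Rightarrow> complex"
  assumes "p \<noteq> q"
  defines "y \<equiv> (\<lambda>i. (if i = p then u else 0) + (if i = q then v else (0::complex)))"
  shows "(\<Sum>j=1..l. \<Sum>k=1..l. a j k * y j * y k) =
     (if p \<in> {1..l} then ((if p \<in> {1..l} then a p p * u else 0) + (if q \<in> {1..l} then a p q * v else 0)) * u else 0)
   + (if q \<in> {1..l} then ((if p \<in> {1..l} then a q p * u else 0) + (if q \<in> {1..l} then a q q * v else 0)) * v else 0)"
  (is "_ = ?rhs")
proof -
  have "(\<Sum>j=1..l. \<Sum>k=1..l. a j k * y j * y k) = (\<Sum>j=1..l. (\<Sum>k=1..l. a j k * y k) * y j)"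
    by (simp add: sum_distrib_left sum_distrib_right mult_ac)
  also have "\<dots> = (\<Sum>j=1..l. ((if p \<in> {1..l} then a j p * u else 0) + (if q \<in> {1..l} then a j q * v else 0)) * y j)"
    unfolding y_def using sum_two_point_eval[OF assms(1)] by simp
  also have "\<dots> = ?rhs"
    unfolding y_def using sum_two_point_eval[OF assms(1), where l=l and b="\<lambda>j. ((if p \<in> {1..l} then a j p * u else 0) + (if q \<in> {1..l} then a j q * v else 0))" and u=u and v=v]
    by (simp add: mult.commute)
  finally show ?thesis .
qed

lemma Ind_sum_expand:
  fixes l :: nat
  shows "(\<Sum>k\<in>Ind l. c k * bfun k h) = (\<Sum>i=1..l-2. \<Sum>j=i+2..l. c (Pidx i j) * (h i * h j))
     + (\<Sum>i=2..l-1. c (Qidx i) * (h i * (h (i - 1) + h i + h (i + 1) + 1)))"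
proof -
  let ?A = "(\<lambda>(i,j). Pidx i j) ` (SIGMA i:{1..l-2}. {i+2..l})"
  let ?B = "Qidx ` {2..l-1}"
  have I: "Ind l = ?A \<union> ?B" unfolding Ind_def by auto
  have d: "?A \<inter> ?B = {}" by auto
  have fA: "finite ?A" and fB: "finite ?B" by auto
  have iA: "inj_on (\<lambda>(i,j). Pidx i j) (SIGMA i:{1..l-2}. {i+2..l})" by (auto simp: inj_on_def)
  have iB: "inj_on Qidx {2..l-1}" by (auto simp: inj_on_def)
  have "(\<Sum>k\<in>Ind l. c k * bfun k h) = (\<Sum>k\<in>?A. c k * bfun k h) + (\<Sum>k\<in>?B. c k * bfun k h)"
    unfolding I by (rule sum.union_disjoint[OF fA fB d])
  also have "(\<Sum>k\<in>?A. c k * bfun k h) = (\<Sum>(i,j)\<in>(SIGMA i:{1..l-2}. {i+2..l}). c (Pidx i j) * (h i * h j))"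
    by (subst sum.reindex[OF iA]) (simp add: case_prod_unfold)
  also have "\<dots> = (\<Sum>i=1..l-2. \<Sum>j=i+2..l. c (Pidx i j) * (h i * h j))"
    by (subst sum.Sigma[symmetric]) auto
  also have "(\<Sum>k\<in>?B. c k * bfun k h) = (\<Sum>i=2..l-1. c (Qidx i) * (h i * (h (i - 1) + h i + h (i + 1) + 1)))"
    by (subst sum.reindex[OF iB]) simp
  finally show ?thesis .
qed

lemma double_sum_diag_split:
  fixes l :: nat and a :: "nat \<Rightarrow> nat \<Rightarrow> complex"
  shows "(\<Sum>j=1..l. \<Sum>k=1..l. a j k * x j * x k) = (\<Sum>k=1..l. a k k * x k * x k)
     + (\<Sum>j=1..l. \<Sum>k=j+1..l. (a j k + a k j) * x j * x k)"
proof (induction l)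
  case 0 then show ?case by simp
next
  case (Suc l)
  have e1: "(\<Sum>j=1..Suc l. \<Sum>k=1..Suc l. a j k * x j * x k) = (\<Sum>j=1..l. \<Sum>k=1..l. a j k * x j * x k)
     + (\<Sum>j=1..l. a j (Suc l) * x j * x (Suc l)) + (\<Sum>k=1..l. a (Suc l) k * x (Suc l) * x k)
     + a (Suc l) (Suc l) * x (Suc l) * x (Suc l)"
    by (simp add: sum.distrib)
  have e2: "(\<Sum>j=1..Suc l. \<Sum>k=j+1..Suc l. (a j k + a k j) * x j * x k) =
     (\<Sum>j=1..l. \<Sum>k=j+1..l. (a j k + a k j) * x j * x k) + (\<Sum>j=1..l. (a j (Suc l) + a (Suc l) j) * x j * x (Suc l))"
  proof -
    have "(\<Sum>j=1..Suc l. \<Sum>k=j+1..Suc l. (a j k + a k j) * x j * x k) = (\<Sum>j=1..l. \<Sum>k=j+1..Suc l. (a j k + a k j) * x j * x k)"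
      by simp
    also have "\<dots> = (\<Sum>j=1..l. (\<Sum>k=j+1..l. (a j k + a k j) * x j * x k) + (a j (Suc l) + a (Suc l) j) * x j * x (Suc l))"
      by (intro sum.cong refl) simp
    finally show ?thesis by (simp add: sum.distrib)
  qed
  show ?case unfolding e1 e2 Suc.IH
    by (simp add: sum.distrib distrib_right algebra_simps)
qed

lemma sum_upper_split_adjacent:
  fixes T :: "nat \<Rightarrow> nat \<Rightarrow> complex" and m :: nat
  shows "(\<Sum>j=1..Suc m. \<Sum>k=j+1..Suc m. T j k) = (\<Sum>j=1..m. T j (j+1)) + (\<Sum>j=1..m-1. \<Sum>k=j+2..Suc m. T j k)"
proof -
  have "(\<Sum>j=1..Suc m. \<Sum>k=j+1..Suc m. T j k) = (\<Sum>j=1..m. \<Sum>k=j+1..Suc m. T j k)" by simp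
  also have "\<dots> = (\<Sum>j=1..m. T j (j+1) + (\<Sum>k=j+2..Suc m. T j k))"
  proof (intro sum.cong refl)
    fix j assume "j \<in> {1..m}"
    then have "{j+1..Suc m} = insert (j+1) {j+2..Suc m}" by auto
    then show "(\<Sum>k=j+1..Suc m. T j k) = T j (j+1) + (\<Sum>k=j+2..Suc m. T j k)" by simp
  qed
  also have "\<dots> = (\<Sum>j=1..m. T j (j+1)) + (\<Sum>j=1..m. \<Sum>k=j+2..Suc m. T j k)" by (simp add: sum.distrib)
  also have "(\<Sum>j=1..m. \<Sum>k=j+2..Suc m. T j k) = (\<Sum>j=1..m-1. \<Sum>k=j+2..Suc m. T j k)"
  proof (cases m)
    case 0 then show ?thesis by simp
  next
    case (Suc m') then show ?thesis by simp
  qed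
  finally show ?thesis .
qed

lemma q_combination_identity:
  fixes b h :: "nat \<Rightarrow> complex" and m :: nat
  assumes m: "1 \<le> m" and b1: "b 1 = 0" and bl: "b (Suc m) = 0"
  shows "(\<Sum>k=1..Suc m. b k * h k) + (\<Sum>k=1..Suc m. b k * h k * h k) + (\<Sum>j=1..m. (b j + b (j+1)) * h j * h (j+1))
       = (\<Sum>i=2..m. b i * (h i * (h (i - 1) + h i + h (i + 1) + 1)))"
proof -
  have b1': "b (Suc 0) = 0" using b1 by simp
  define f where "f i = b i * (h i * (h (i - 1) + h i + h (i + 1) + 1))" for i
  have "(\<Sum>i=1..Suc m. f i) = f 1 + (\<Sum>i=2..m. f i) + f (Suc m)"
  proof -
    have "(\<Sum>i=1..Suc m. f i) = (\<Sum>i=1..m. f i) + f (Suc m)" by simp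
    moreover have "(\<Sum>i=1..m. f i) = f 1 + (\<Sum>i=Suc 1..m. f i)" using m by (rule sum.atLeast_Suc_atMost)
    ultimately show ?thesis by (simp add: numeral_2_eq_2)
  qed
  then have R: "(\<Sum>i=2..m. f i) = (\<Sum>i=1..Suc m. f i)" by (simp add: f_def b1' bl)
  have D: "(\<Sum>i=1..Suc m. f i) = (\<Sum>i=1..Suc m. b i * h (i - 1) * h i) + (\<Sum>k=1..Suc m. b k * h k * h k)
        + (\<Sum>i=1..Suc m. b i * h i * h (i+1)) + (\<Sum>k=1..Suc m. b k * h k)"
    unfolding f_def by (simp add: sum.distrib algebra_simps)
  have S1: "(\<Sum>j=1..m. b j * h j * h (j+1)) = (\<Sum>i=1..Suc m. b i * h i * h (i+1))" by (simp add: bl)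
  have S2: "(\<Sum>j=1..m. b (j+1) * h j * h (j+1)) = (\<Sum>i=1..Suc m. b i * h (i - 1) * h i)"
  proof -
    have "(\<Sum>i=Suc 1..Suc m. b i * h (i - 1) * h i) = (\<Sum>j=1..m. b (Suc j) * h (Suc j - 1) * h (Suc j))"
      by (rule sum.shift_bounds_cl_Suc_ivl)
    moreover have "(\<Sum>i=1..Suc m. b i * h (i - 1) * h i) = b 1 * h 0 * h 1 + (\<Sum>i=Suc 1..Suc m. b i * h (i - 1) * h i)"
      by (subst sum.atLeast_Suc_atMost) auto
    ultimately show ?thesis by (simp add: b1')
  qed
  have "(\<Sum>j=1..m. (b j + b (j+1)) * h j * h (j+1)) = (\<Sum>j=1..m. b j * h j * h (j+1)) + (\<Sum>j=1..m. b (j+1) * h j * h (j+1))"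
    by (simp add: sum.distrib algebra_simps)
  then show ?thesis unfolding f_def[symmetric] R D S1 S2 by (simp add: algebra_simps)
qed

text \<open>The weights of the highest weight vectors of the rank-one oscillator representations.\<close>

definition line_point :: "nat \<Rightarrow> complex \<Rightarrow> nat \<Rightarrow> complex" where
  "line_point k s = (\<lambda>i. if i = k then -1 - s else if i = k + 1 then s else 0)"

lemma quadratic_form_at_line_point:
  fixes b :: "nat \<Rightarrow> complex" and a :: "nat \<Rightarrow> nat \<Rightarrow> complex"
  shows "c0 + (\<Sum>i=1..l. b i * line_point k s i) + (\<Sum>j=1..l. \<Sum>i=1..l. a j i * line_point k s j * line_point k s i)
    = c0 + ((if k \<in> {1..l} then b k * (-1-s) else 0) + (if k+1 \<in> {1..l} then b (k+1) * s else 0))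
     + ((if k \<in> {1..l} then ((if k \<in> {1..l} then a k k * (-1-s) else 0)
            + (if k+1 \<in> {1..l} then a k (k+1) * s else 0)) * (-1-s) else 0)
      + (if k+1 \<in> {1..l} then ((if k \<in> {1..l} then a (k+1) k * (-1-s) else 0)
            + (if k+1 \<in> {1..l} then a (k+1) (k+1) * s else 0)) * s else 0))"
proof -
  have "line_point k s = (\<lambda>i. (if i = k then -1-s else 0) + (if i = k+1 then s else 0))"
    by (auto simp: line_point_def)
  then show ?thesis
    using sum_two_point_eval[where p=k and q="k+1" and l=l and b=b and u="-1-s" and v=s]
      double_sum_two_point_eval[where p=k and q="k+1" and l=l and a=a and u="-1-s" and v=s]
    by simp
qed

lemma quadratic_form_vanishing_on_lines_coeffs:
  fixes b :: "nat \<Rightarrow> complex" and a :: "nat \<Rightarrow> nat \<Rightarrow> complex"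
  assumes l3: "3 \<le> l"
    and Z: "\<And>k s. c0 + (\<Sum>i=1..l. b i * line_point k s i)
      + (\<Sum>j=1..l. \<Sum>i=1..l. a j i * line_point k s j * line_point k s i) = 0"
  shows "c0 = 0" and "b 1 = 0" and "b l = 0"
    and "\<And>k. k \<in> {1..l} \<Longrightarrow> a k k = b k"
    and "\<And>k. k \<in> {1..l-1} \<Longrightarrow> a k (k+1) + a (k+1) k = b k + b (k+1)"
proof -
  note E = Z[unfolded quadratic_form_at_line_point]
  show c0: "c0 = 0" using E[of 0 0] l3 by simp
  have "0 = b 1 + a 1 1" using E[of 0 1] l3 c0 by simp
  moreover have "0 = - b 1 + a 1 1" using E[of 0 "-1"] l3 c0 by simp
  ultimately show "b 1 = 0" by (simp add: add_eq_0_iff)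
  show akk: "a k k = b k" if "k \<in> {1..l}" for k
    using E[of k 0] that c0 by (simp split: if_splits)
  have "0 = b l * (-2) + a l l * 4" using E[of l 1] l3 c0 by (simp add: algebra_simps)
  then show "b l = 0" using akk[of l] l3 by simp
  show "a k (k+1) + a (k+1) k = b k + b (k+1)" if "k \<in> {1..l-1}" for k
  proof -
    have k1: "k \<in> {1..l}" "k+1 \<in> {1..l}" using that by auto
    have "0 = b k * (-2) + b (k+1) + (a k k * (-2) + a k (k+1)) * (-2) + (a (k+1) k * (-2) + a (k+1) (k+1))"
      using E[of k 1] k1 c0 by (simp add: algebra_simps)
    then have "2 * (a k (k+1) + a (k+1) k) = 2 * (b k + b (k+1))"
      using akk[OF k1(1)] akk[OF k1(2)] by (simp add: algebra_simps)
    then show ?thesis by (metis mult_left_cancel zero_neq_numeral)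
  qed
qed

lemma quadratic_form_in_span:
  fixes b h :: "nat \<Rightarrow> complex" and a :: "nat \<Rightarrow> nat \<Rightarrow> complex"
  assumes l3: "3 \<le> l" and b1: "b 1 = 0" and bl: "b l = 0"
    and akk: "\<And>k. k \<in> {1..l} \<Longrightarrow> a k k = b k"
    and adj: "\<And>k. k \<in> {1..l-1} \<Longrightarrow> a k (k+1) + a (k+1) k = b k + b (k+1)"
  shows "(\<Sum>k=1..l. b k * h k) + (\<Sum>j=1..l. \<Sum>k=1..l. a j k * h j * h k)
    = (\<Sum>k\<in>Ind l. (case k of Pidx i j \<Rightarrow> a i j + a j i | Qidx i \<Rightarrow> b i) * bfun k h)"
proof -
  obtain m where lm: "l = Suc m" and m2: "2 \<le> m" using l3 by (cases l) auto
  have "(\<Sum>k=1..l. b k * h k) + (\<Sum>j=1..l. \<Sum>k=1..l. a j k * h j * h k)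
     = (\<Sum>k=1..l. b k * h k) + (\<Sum>k=1..l. a k k * h k * h k)
       + ((\<Sum>j=1..m. (a j (j+1) + a (j+1) j) * h j * h (j+1))
         + (\<Sum>j=1..m-1. \<Sum>k=j+2..Suc m. (a j k + a k j) * h j * h k))"
    unfolding double_sum_diag_split lm sum_upper_split_adjacent by simp
  also have "(\<Sum>k=1..l. a k k * h k * h k) = (\<Sum>k=1..l. b k * h k * h k)"
    by (intro sum.cong refl) (simp add: akk)
  also have "(\<Sum>j=1..m. (a j (j+1) + a (j+1) j) * h j * h (j+1)) = (\<Sum>j=1..m. (b j + b (j+1)) * h j * h (j+1))"
    using adj lm by (intro sum.cong refl) auto
  finally have "(\<Sum>k=1..l. b k * h k) + (\<Sum>j=1..l. \<Sum>k=1..l. a j k * h j * h k)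
     = ((\<Sum>k=1..Suc m. b k * h k) + (\<Sum>k=1..Suc m. b k * h k * h k) + (\<Sum>j=1..m. (b j + b (j+1)) * h j * h (j+1)))
       + (\<Sum>j=1..m-1. \<Sum>k=j+2..Suc m. (a j k + a k j) * h j * h k)"
    unfolding lm by (simp add: algebra_simps)
  also have "\<dots> = (\<Sum>i=2..m. b i * (h i * (h (i - 1) + h i + h (i + 1) + 1)))
       + (\<Sum>j=1..m-1. \<Sum>k=j+2..Suc m. (a j k + a k j) * h j * h k)"
    using q_combination_identity[of m b h] m2 b1 bl lm by simp
  also have "\<dots> = (\<Sum>k\<in>Ind l. (case k of Pidx i j \<Rightarrow> a i j + a j i | Qidx i \<Rightarrow> b i) * bfun k h)"
    unfolding Ind_sum_expand lm by (simp add: mult.assoc)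
  finally show ?thesis .
qed

lemma quadratic_vanishing_on_lines_span:
  assumes l3: "3 \<le> l" and Q: "quadratic_fn l F" and Z: "\<And>k s. F (line_point k s) = 0"
  shows "\<exists>c. F = (\<lambda>h. \<Sum>k\<in>Ind l. c k * bfun k h)"
proof -
  obtain c0 b a where F: "\<And>x. F x = c0 + (\<Sum>k=1..l. b k * x k) + (\<Sum>j=1..l. \<Sum>k=1..l. a j k * x j * x k)"
    using Q unfolding quadratic_fn_def by blast
  note coeffs = quadratic_form_vanishing_on_lines_coeffs[of l c0 b a, OF l3 Z[unfolded F]]
  have "F h = (\<Sum>k\<in>Ind l. (case k of Pidx i j \<Rightarrow> a i j + a j i | Qidx i \<Rightarrow> b i) * bfun k h)" for h
    using quadratic_form_in_span[OF l3 coeffs(2-5)] by (simp add: F coeffs(1))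
  then show ?thesis by blast
qed

lemma bfun_sum_at_indicator:
  assumes p: "p \<in> {2..l-1}"
  shows "(\<Sum>k\<in>Ind l. c k * bfun k (\<lambda>i. if i = p then 1 else 0)) = 2 * c (Qidx p)"
proof -
  define h :: "nat \<Rightarrow> complex" where "h = (\<lambda>i. if i = p then 1 else 0)"
  have "(\<Sum>i=1..l-2. \<Sum>j=i+2..l. c (Pidx i j) * (h i * h j)) = 0"
    by (intro sum.neutral ballI) (auto simp: h_def)
  moreover have "(\<Sum>i=2..l-1. c (Qidx i) * (h i * (h (i - 1) + h i + h (i + 1) + 1)))
      = (\<Sum>i=2..l-1. if i = p then 2 * c (Qidx p) else 0)"
    using p by (intro sum.cong refl) (auto simp: h_def)
  ultimately show ?thesis using p by (simp add: Ind_sum_expand h_def[symmetric])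
qed

lemma bfun_sum_at_pair_indicator:
  assumes p: "1 \<le> p" "p + 2 \<le> q" "q \<le> l" and cQ: "\<And>i. i \<in> {2..l-1} \<Longrightarrow> c (Qidx i) = 0"
  shows "(\<Sum>k\<in>Ind l. c k * bfun k (\<lambda>i. if i = p \<or> i = q then 1 else 0)) = c (Pidx p q)"
proof -
  define h :: "nat \<Rightarrow> complex" where "h = (\<lambda>i. if i = p \<or> i = q then 1 else 0)"
  have Q0: "(\<Sum>i=2..l-1. c (Qidx i) * (h i * (h (i - 1) + h i + h (i + 1) + 1))) = 0"
    by (intro sum.neutral ballI) (simp add: cQ)
  have row: "(\<Sum>j=i+2..l. c (Pidx i j) * (h i * h j)) = (if i = p then c (Pidx p q) else 0)" for i
  proof (cases "i = p")
    case True
    then have "(\<Sum>j=i+2..l. c (Pidx i j) * (h i * h j)) = (\<Sum>j=i+2..l. if j = q then c (Pidx p q) else 0)"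
      using p by (intro sum.cong refl) (auto simp: h_def)
    then show ?thesis using True p by simp
  next
    case False
    have "(\<Sum>j=i+2..l. c (Pidx i j) * (h i * h j)) = 0"
      using p False by (intro sum.neutral ballI) (auto simp: h_def)
    then show ?thesis using False by simp
  qed
  have "p \<in> {1..l-2}" using p by auto
  then have "(\<Sum>i=1..l-2. \<Sum>j=i+2..l. c (Pidx i j) * (h i * h j)) = c (Pidx p q)"
    unfolding row by simp
  then show ?thesis using Q0 by (simp add: Ind_sum_expand h_def[symmetric])
qed

lemma bfun_linear_independent:
  assumes "\<forall>h. (\<Sum>k\<in>Ind l. c k * bfun k h) = 0"
  shows "\<forall>k\<in>Ind l. c k = 0"
proof -
  have cQ: "c (Qidx i) = 0" if "i \<in> {2..l-1}" for i
    using assms bfun_sum_at_indicator[OF that, of c] by simp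
  have "c (Pidx i j) = 0" if "1 \<le> i" "i + 2 \<le> j" "j \<le> l" for i j
    using assms bfun_sum_at_pair_indicator[of i j l c, OF that cQ] by simp
  then show ?thesis unfolding Ind_def using cQ by auto
qed

section \<open>Minors of matrix units in R\<close>

lemma mmul_Eu: "b \<in> {1..n} \<Longrightarrow> mmul n (Eu a b) (Eu c d) = (if b = c then Eu a d else (\<lambda>i j. 0))"
proof (intro ext)
  fix i j assume b: "b \<in> {1..n}"
  have "mmul n (Eu a b) (Eu c d) i j = (\<Sum>k=1..n. if k = b then (if i = a \<and> b = c \<and> j = d then 1 else 0) else 0)"
    unfolding mmul_def Eu_def by (intro sum.cong refl) auto
  also have "\<dots> = (if i = a \<and> b = c \<and> j = d then 1 else 0)" using b by simp
  finally show "mmul n (Eu a b) (Eu c d) i j = (if b = c then Eu a d else (\<lambda>i j. 0)) i j" by (auto simp: Eu_def)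
qed

definition Ediff :: "nat \<Rightarrow> nat \<Rightarrow> mat" where
  "Ediff a b = (\<lambda>i j. (if i = a \<and> j = a then 1 else 0) - (if i = b \<and> j = b then 1 else 0))"

lemma mbr_Eu_zero: "b \<in> {1..n} \<Longrightarrow> d \<in> {1..n} \<Longrightarrow> b \<noteq> c \<Longrightarrow> d \<noteq> a \<Longrightarrow> mbr n (Eu a b) (Eu c d) = (\<lambda>i j. 0)"
  by (simp add: mbr_def mmul_Eu)
lemma mbr_Eu_compose: "b \<in> {1..n} \<Longrightarrow> d \<in> {1..n} \<Longrightarrow> d \<noteq> a \<Longrightarrow> mbr n (Eu a b) (Eu b d) = Eu a d"
  by (simp add: mbr_def mmul_Eu)
lemma mbr_Eu_compose_neg: "b \<in> {1..n} \<Longrightarrow> a \<in> {1..n} \<Longrightarrow> b \<noteq> c \<Longrightarrow> mbr n (Eu a b) (Eu c a) = msmul (-1) (Eu c b)"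
  by (auto simp: mbr_def mmul_Eu msmul_def fun_eq_iff)
lemma mbr_Eu_transpose: "b \<in> {1..n} \<Longrightarrow> a \<in> {1..n} \<Longrightarrow> a \<noteq> b \<Longrightarrow> mbr n (Eu a b) (Eu b a) = Ediff a b"
  by (simp add: mbr_def mmul_Eu) (auto simp: Ediff_def Eu_def fun_eq_iff)

lemma Ediff_h_set: "a \<noteq> b \<Longrightarrow> a \<in> {1..n} \<Longrightarrow> b \<in> {1..n} \<Longrightarrow> Ediff a b \<in> h_set n"
proof -
  assume a: "a \<noteq> b" "a \<in> {1..n}" "b \<in> {1..n}"
  have "(\<Sum>k=1..n. Ediff a b k k) = (\<Sum>k=1..n. (if k = a then 1 else 0) - (if k = b then 1 else 0))"
    by (intro sum.cong refl) (auto simp: Ediff_def)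
  also have "\<dots> = 0" using a by (simp add: sum_subtractf)
  finally show ?thesis using a by (auto simp: h_set_def g_set_def Ediff_def split: if_splits)
qed

lemma mbr_diagonal: assumes "\<And>i j. i \<noteq> j \<Longrightarrow> H i j = 0" "\<And>i j. i \<noteq> j \<Longrightarrow> D i j = 0"
  shows "mbr n H D = (\<lambda>i j. 0)"
proof (intro ext)
  fix i j
  have "mmul n H D i j = mmul n D H i j"
    unfolding mmul_def by (intro sum.cong refl) (metis assms mult_zero_left mult_zero_right mult.commute)
  then show "mbr n H D i j = 0" by (simp add: mbr_def)
qed

lemma mbr_H_Eu: assumes "\<And>i j. i \<noteq> j \<Longrightarrow> H i j = 0" "a \<in> {1..n}" "b \<in> {1..n}"
  shows "mbr n H (Eu a b) = msmul (H a a - H b b) (Eu a b)"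
proof (intro ext)
  fix i j
  have 1: "mmul n H (Eu a b) i j = (if i = a \<and> j = b then H a a else 0)"
  proof -
    have "mmul n H (Eu a b) i j = (\<Sum>k=1..n. if k = a then (if i = a \<and> j = b then H a a else 0) else 0)"
      unfolding mmul_def Eu_def using assms(1) by (intro sum.cong refl) auto
    then show ?thesis using assms by simp
  qed
  have 2: "mmul n (Eu a b) H i j = (if i = a \<and> j = b then H b b else 0)"
  proof -
    have "mmul n (Eu a b) H i j = (\<Sum>k=1..n. if k = b then (if i = a \<and> j = b then H b b else 0) else 0)"
      unfolding mmul_def Eu_def using assms(1) by (intro sum.cong refl) auto
    then show ?thesis using assms by simp
  qed
  show "mbr n H (Eu a b) i j = msmul (H a a - H b b) (Eu a b) i j"
    unfolding mbr_def 1 2 by (auto simp: msmul_def Eu_def)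
qed

lemma ueq_word_smul_right:
  "Y \<in> g_set n \<Longrightarrow> X \<in> g_set n \<Longrightarrow> ueq n (fa_word [Y, msmul c X]) (\<lambda>w. c * fa_word [Y, X] w)"
  using Iid_smul_context[of X n "[Y]" "[]" c] by (simp add: ueq_def)

lemma ueq_word_smul_left:
  "Y \<in> g_set n \<Longrightarrow> X \<in> g_set n \<Longrightarrow> ueq n (fa_word [msmul c X, Y]) (\<lambda>w. c * fa_word [X, Y] w)"
  using Iid_smul_context[of X n "[]" "[Y]" c] by (simp add: ueq_def)

lemma ueq_word_zero_right: "Y \<in> g_set n \<Longrightarrow> ueq n (fa_word [Y, (\<lambda>i j. 0)]) (\<lambda>w. 0)"
  using ueq_word_smul_right[of Y n "\<lambda>i j. 0" 0] by (simp add: zero_g_set msmul_def)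

lemma ueq_word_zero_left: "Y \<in> g_set n \<Longrightarrow> ueq n (fa_word [(\<lambda>i j. 0), Y]) (\<lambda>w. 0)"
  using ueq_word_smul_left[of Y n "\<lambda>i j. 0" 0] by (simp add: zero_g_set msmul_def)

lemma ueq_word_zero: "ueq n (fa_word [(\<lambda>i j. 0)]) (\<lambda>w. 0)"
  using Iid_smul_context[of "\<lambda>i j. 0" n "[]" "[]" 0] by (simp add: ueq_def zero_g_set msmul_def)

lemma ueq_word_swap:
  "X \<in> g_set n \<Longrightarrow> Y \<in> g_set n \<Longrightarrow> ueq n (fa_word [X, Y]) (\<lambda>w. fa_word [Y, X] w + fa_word [mbr n X Y] w)"
  using Iid_comm_context[of X n Y "[]" "[]"] by (simp add: ueq_def algebra_simps)

lemma ueq_ad_word2: "X \<in> g_set n \<Longrightarrow> A \<in> g_set n \<Longrightarrow> B \<in> g_set n \<Longrightarrow>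
   ueq n (ad X (fa_word [A, B])) (\<lambda>w. fa_word [mbr n X A, B] w + fa_word [A, mbr n X B] w)"
  using ad_fa_word_ueq[of X n "[A, B]"] by (simp add: ueq_def ad_word_def)

definition minor :: "nat \<Rightarrow> nat \<Rightarrow> nat \<Rightarrow> nat \<Rightarrow> fa" where
  "minor a b c d = (\<lambda>w. fa_word [Eu a c, Eu b d] w - fa_word [Eu b c, Eu a d] w)"

lemma ad_minor_row:
  assumes "distinct [a,b,c,d,t]" "a \<in> {1..n}" "b \<in> {1..n}" "c \<in> {1..n}" "d \<in> {1..n}" "t \<in> {1..n}"
  shows "ueq n (ad (Eu t a) (minor a b c d)) (minor t b c d)"
proof -
  have ne[simp]: "a \<noteq> b" "a \<noteq> c" "a \<noteq> d" "a \<noteq> t" "b \<noteq> a"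
    "b \<noteq> c" "b \<noteq> d" "b \<noteq> t" "c \<noteq> a" "c \<noteq> b" "c \<noteq> d"
    "c \<noteq> t" "d \<noteq> a" "d \<noteq> b" "d \<noteq> c" "d \<noteq> t" "t \<noteq> a"
    "t \<noteq> b" "t \<noteq> c" "t \<noteq> d"
    using assms(1) by auto
  have rg[simp]: "a \<in> {1..n}" "b \<in> {1..n}" "c \<in> {1..n}" "d \<in> {1..n}" "t \<in> {1..n}" using assms by auto
  have 1: "ueq n (ad (Eu t a) (fa_word [Eu a c, Eu b d])) (\<lambda>w. fa_word [Eu t c, Eu b d] w + fa_word [Eu a c, (\<lambda>i j. 0)] w)"
    using ueq_ad_word2[of "Eu t a" n "Eu a c" "Eu b d"] assms by (simp add: Eu_g_set mbr_Eu_compose mbr_Eu_zero)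
  have 2: "ueq n (ad (Eu t a) (fa_word [Eu b c, Eu a d])) (\<lambda>w. fa_word [(\<lambda>i j. 0), Eu a d] w + fa_word [Eu b c, Eu t d] w)"
    using ueq_ad_word2[of "Eu t a" n "Eu b c" "Eu a d"] assms by (simp add: Eu_g_set mbr_Eu_compose mbr_Eu_zero)
  have 3: "ueq n (\<lambda>w. (fa_word [Eu t c, Eu b d] w + fa_word [Eu a c, (\<lambda>i j. 0)] w) - (fa_word [(\<lambda>i j. 0), Eu a d] w + fa_word [Eu b c, Eu t d] w))
       (\<lambda>w. (fa_word [Eu t c, Eu b d] w + 0) - (0 + fa_word [Eu b c, Eu t d] w))"
    by (intro ueq_diff ueq_add ueq_refl ueq_word_zero_left ueq_word_zero_right) (use assms in \<open>auto simp: Eu_g_set\<close>)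
  show ?thesis unfolding minor_def ad_diff
    using ueq_trans[OF ueq_diff[OF 1 2] 3] by simp
qed

lemma ad_minor_col:
  assumes "distinct [a,b,c,d,t]" "a \<in> {1..n}" "b \<in> {1..n}" "c \<in> {1..n}" "d \<in> {1..n}" "t \<in> {1..n}"
  shows "ueq n (ad (Eu c t) (minor a b c d)) (\<lambda>w. - minor a b t d w)"
proof -
  have ne[simp]: "a \<noteq> b" "a \<noteq> c" "a \<noteq> d" "a \<noteq> t" "b \<noteq> a"
    "b \<noteq> c" "b \<noteq> d" "b \<noteq> t" "c \<noteq> a" "c \<noteq> b" "c \<noteq> d"
    "c \<noteq> t" "d \<noteq> a" "d \<noteq> b" "d \<noteq> c" "d \<noteq> t" "t \<noteq> a"
    "t \<noteq> b" "t \<noteq> c" "t \<noteq> d"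
    using assms(1) by auto
  have rg[simp]: "a \<in> {1..n}" "b \<in> {1..n}" "c \<in> {1..n}" "d \<in> {1..n}" "t \<in> {1..n}" using assms by auto
  have 1: "ueq n (ad (Eu c t) (fa_word [Eu a c, Eu b d])) (\<lambda>w. fa_word [msmul (-1) (Eu a t), Eu b d] w + fa_word [Eu a c, (\<lambda>i j. 0)] w)"
    using ueq_ad_word2[of "Eu c t" n "Eu a c" "Eu b d"] assms by (simp add: Eu_g_set mbr_Eu_compose_neg mbr_Eu_zero)
  have 2: "ueq n (ad (Eu c t) (fa_word [Eu b c, Eu a d])) (\<lambda>w. fa_word [msmul (-1) (Eu b t), Eu a d] w + fa_word [Eu b c, (\<lambda>i j. 0)] w)"
    using ueq_ad_word2[of "Eu c t" n "Eu b c" "Eu a d"] assms by (simp add: Eu_g_set mbr_Eu_compose_neg mbr_Eu_zero)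
  have 3: "ueq n (\<lambda>w. (fa_word [msmul (-1) (Eu a t), Eu b d] w + fa_word [Eu a c, (\<lambda>i j. 0)] w) - (fa_word [msmul (-1) (Eu b t), Eu a d] w + fa_word [Eu b c, (\<lambda>i j. 0)] w))
       (\<lambda>w. ((-1) * fa_word [Eu a t, Eu b d] w + 0) - ((-1) * fa_word [Eu b t, Eu a d] w + 0))"
    by (intro ueq_diff ueq_add ueq_refl ueq_word_zero_left ueq_word_zero_right ueq_word_smul_left) (use assms in \<open>auto simp: Eu_g_set\<close>)
  show ?thesis unfolding minor_def ad_diff
    using ueq_trans[OF ueq_diff[OF 1 2] 3] by (simp add: fun_eq_iff)
qed

lemma minor_swap_rows: "minor b a c d = (\<lambda>w. - minor a b c d w)" by (simp add: minor_def fun_eq_iff)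

lemma minor_swap_cols:
  assumes "distinct [a,b,c,d]" "a \<in> {1..n}" "b \<in> {1..n}" "c \<in> {1..n}" "d \<in> {1..n}"
  shows "ueq n (minor a b d c) (\<lambda>w. - minor a b c d w)"
proof -
  have ne[simp]: "a \<noteq> b" "a \<noteq> c" "a \<noteq> d" "b \<noteq> a" "b \<noteq> c"
    "b \<noteq> d" "c \<noteq> a" "c \<noteq> b" "c \<noteq> d" "d \<noteq> a" "d \<noteq> b"
    "d \<noteq> c"
    using assms(1) by auto
  have rg[simp]: "a \<in> {1..n}" "b \<in> {1..n}" "c \<in> {1..n}" "d \<in> {1..n}" using assms by auto
  have rg2[simp]: "Suc 0 \<le> a" "a \<le> n" "Suc 0 \<le> b" "b \<le> n" "Suc 0 \<le> c" "c \<le> n" "Suc 0 \<le> d" "d \<le> n" using assms by auto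
  have 1: "ueq n (fa_word [Eu a d, Eu b c]) (\<lambda>w. fa_word [Eu b c, Eu a d] w + fa_word [(\<lambda>i j. 0)] w)"
    using ueq_word_swap[of "Eu a d" n "Eu b c"] assms by (simp add: Eu_g_set mbr_Eu_zero)
  have 2: "ueq n (fa_word [Eu b d, Eu a c]) (\<lambda>w. fa_word [Eu a c, Eu b d] w + fa_word [(\<lambda>i j. 0)] w)"
    using ueq_word_swap[of "Eu b d" n "Eu a c"] assms by (simp add: Eu_g_set mbr_Eu_zero)
  have 3: "ueq n (\<lambda>w. (fa_word [Eu b c, Eu a d] w + fa_word [(\<lambda>i j. 0)] w) - (fa_word [Eu a c, Eu b d] w + fa_word [(\<lambda>i j. 0)] w))
      (\<lambda>w. (fa_word [Eu b c, Eu a d] w + 0) - (fa_word [Eu a c, Eu b d] w + 0))"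
    by (intro ueq_diff ueq_add ueq_refl ueq_word_zero)
  show ?thesis unfolding minor_def
    using ueq_trans[OF ueq_diff[OF 1 2] 3] by (simp add: fun_eq_iff)
qed

definition minor_in_R :: "nat \<Rightarrow> nat \<Rightarrow> nat \<Rightarrow> nat \<Rightarrow> nat \<Rightarrow> bool" where
  "minor_in_R l a b c d \<longleftrightarrow> minor a b c d \<in> Rt l \<and> distinct [a,b,c,d] \<and> {a,b,c,d} \<subseteq> {1..Suc l}"

lemma minor_in_R_row: assumes "minor_in_R l a b c d" "t \<in> {1..Suc l}" "t \<notin> {b,c,d}" shows "minor_in_R l t b c d"
proof (cases "t = a")
  case True then show ?thesis using assms by simp
next
  case False
  have d: "distinct [a,b,c,d,t]" using assms False by (auto simp: minor_in_R_def)
  have r: "a \<in> {1..Suc l}" "b \<in> {1..Suc l}" "c \<in> {1..Suc l}" "d \<in> {1..Suc l}" using assms by (auto simp: minor_in_R_def)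
  have "ad (Eu t a) (minor a b c d) \<in> Rt l"
    using assms False r by (intro Rt.adj Eu_g_set) (auto simp: minor_in_R_def)
  moreover have "ueq (Suc l) (minor t b c d) (ad (Eu t a) (minor a b c d))"
    by (rule ueq_sym, rule ad_minor_row[OF d r assms(2)])
  ultimately have "minor t b c d \<in> Rt l" by (rule Rt_ueq)
  then show ?thesis using assms d by (auto simp: minor_in_R_def)
qed

lemma minor_in_R_col: assumes "minor_in_R l a b c d" "t \<in> {1..Suc l}" "t \<notin> {a,b,d}" shows "minor_in_R l a b t d"
proof (cases "t = c")
  case True then show ?thesis using assms by simp
next
  case False
  have d: "distinct [a,b,c,d,t]" using assms False by (auto simp: minor_in_R_def)
  have r: "a \<in> {1..Suc l}" "b \<in> {1..Suc l}" "c \<in> {1..Suc l}" "d \<in> {1..Suc l}" using assms by (auto simp: minor_in_R_def)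
  have "ad (Eu c t) (minor a b c d) \<in> Rt l"
    using assms False r by (intro Rt.adj Eu_g_set) (auto simp: minor_in_R_def)
  moreover have "ueq (Suc l) (\<lambda>w. - minor a b t d w) (ad (Eu c t) (minor a b c d))"
    by (rule ueq_sym, rule ad_minor_col[OF d r assms(2)])
  ultimately have "(\<lambda>w. - minor a b t d w) \<in> Rt l" by (rule Rt_ueq)
  then have "(\<lambda>w. - (- minor a b t d w)) \<in> Rt l" by (rule Rt_neg)
  then show ?thesis using assms d by (auto simp: minor_in_R_def)
qed

lemma minor_in_R_swap_rows: assumes "minor_in_R l a b c d" shows "minor_in_R l b a c d"
  using assms Rt_neg[of "minor a b c d" l] minor_swap_rows[of b a c d] by (auto simp: minor_in_R_def)

lemma minor_in_R_swap_cols: assumes "minor_in_R l a b c d" shows "minor_in_R l a b d c"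
proof -
  have d: "distinct [a,b,c,d]" and r: "a \<in> {1..Suc l}" "b \<in> {1..Suc l}" "c \<in> {1..Suc l}" "d \<in> {1..Suc l}"
    using assms by (auto simp: minor_in_R_def)
  have "(\<lambda>w. - minor a b c d w) \<in> Rt l" using assms by (intro Rt_neg) (simp add: minor_in_R_def)
  from Rt_ueq[OF this minor_swap_cols[OF d r]] show ?thesis using assms by (auto simp: minor_in_R_def)
qed

lemma minor_in_R_row2: assumes "minor_in_R l a b c d" "t \<in> {1..Suc l}" "t \<notin> {a,c,d}" shows "minor_in_R l a t c d"
  using minor_in_R_swap_rows[OF minor_in_R_row[OF minor_in_R_swap_rows[OF assms(1)] assms(2)]] assms(3) by auto

lemma minor_in_R_col2: assumes "minor_in_R l a b c d" "t \<in> {1..Suc l}" "t \<notin> {a,b,c}" shows "minor_in_R l a b c t"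
  using minor_in_R_swap_cols[OF minor_in_R_col[OF minor_in_R_swap_cols[OF assms(1)] assms(2)]] assms(3) by auto

lemma exists_index_outside4: assumes "4 \<le> l" shows "\<exists>f\<in>{1..Suc l}. f \<notin> {a,b,c,d}"
proof (rule ccontr)
  assume "\<not> ?thesis"
  then have "{1..Suc l} \<subseteq> {a,b,c,d}" by auto
  then have "card {1..Suc l} \<le> card {a,b,c,d}" by (intro card_mono) auto
  also have "card {a,b,c,d} \<le> 4" by (simp add: card_insert_if)
  finally show False using assms by simp
qed

text \<open>For \<open>l \<ge> 4\<close> there are at least five indices, so a free one is always available to move
  the rows and columns of a minor one at a time.\<close>

lemma minor_in_R_fix_c: assumes "4 \<le> l" "minor_in_R l a b c d" "c' \<in> {1..Suc l}" "c' \<notin> {a,b}" shows "\<exists>d1. minor_in_R l a b c' d1"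
proof (cases "c' = d")
  case True
  obtain f where f: "f \<in> {1..Suc l}" "f \<notin> {a,b,c,d}" using exists_index_outside4[OF assms(1)] by blast
  have "minor_in_R l a b c f" using minor_in_R_col2[OF assms(2) f(1)] f(2) by auto
  then have "minor_in_R l a b c' f" using minor_in_R_col[OF _ assms(3)] True f assms(4) by auto
  then show ?thesis by blast
next
  case False
  then show ?thesis using minor_in_R_col[OF assms(2) assms(3)] assms(4) by auto
qed

lemma minor_in_R_fix_b: assumes "4 \<le> l" "minor_in_R l a b c d" "b' \<in> {1..Suc l}" "b' \<noteq> a" shows "\<exists>c1 d1. minor_in_R l a b' c1 d1"
proof -
  obtain f where f: "f \<in> {1..Suc l}" "f \<notin> {a,b,c,d}" using exists_index_outside4[OF assms(1)] by blast
  have dd: "distinct [a,b,c,d]" using assms(2) by (simp add: minor_in_R_def)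
  consider "b' = c" | "b' = d" | "b' \<notin> {a,c,d}" using assms(4) by auto
  then show ?thesis
  proof cases
    case 1
    have "minor_in_R l a b f d" using minor_in_R_col[OF assms(2) f(1)] f(2) by auto
    then have "minor_in_R l a b' f d" using minor_in_R_row2[OF _ assms(3)] 1 f dd by auto
    then show ?thesis by blast
  next
    case 2
    have "minor_in_R l a b c f" using minor_in_R_col2[OF assms(2) f(1)] f(2) by auto
    then have "minor_in_R l a b' c f" using minor_in_R_row2[OF _ assms(3)] 2 f dd by auto
    then show ?thesis by blast
  next
    case 3
    then show ?thesis using minor_in_R_row2[OF assms(2) assms(3)] by blast
  qed
qed

lemma minor_in_R_fix_a: assumes "4 \<le> l" "minor_in_R l a b c d" "a' \<in> {1..Suc l}" shows "\<exists>b1 c1 d1. minor_in_R l a' b1 c1 d1"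
proof -
  obtain f where f: "f \<in> {1..Suc l}" "f \<notin> {a,b,c,d}" using exists_index_outside4[OF assms(1)] by blast
  have dd: "distinct [a,b,c,d]" using assms(2) by (simp add: minor_in_R_def)
  consider "a' = a" | "a' = b" | "a' = c" | "a' = d" | "a' \<notin> {b,c,d}" by auto
  then show ?thesis
  proof cases
    case 1 then show ?thesis using assms(2) by blast
  next
    case 2
    have "minor_in_R l a f c d" using minor_in_R_row2[OF assms(2) f(1)] f(2) by auto
    then have "minor_in_R l a' f c d" using minor_in_R_row[OF _ assms(3)] 2 f dd by auto
    then show ?thesis by blast
  next
    case 3
    have "minor_in_R l a b f d" using minor_in_R_col[OF assms(2) f(1)] f(2) by auto
    then have "minor_in_R l a' b f d" using minor_in_R_row[OF _ assms(3)] 3 f dd by auto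
    then show ?thesis by blast
  next
    case 4
    have "minor_in_R l a b c f" using minor_in_R_col2[OF assms(2) f(1)] f(2) by auto
    then have "minor_in_R l a' b c f" using minor_in_R_row[OF _ assms(3)] 4 f dd by auto
    then show ?thesis by blast
  next
    case 5
    then show ?thesis using minor_in_R_row[OF assms(2) assms(3)] by blast
  qed
qed

lemma minor_in_R_all:
  assumes "4 \<le> l" "minor_in_R l a b c d" "distinct [a',b',c',d']" "{a',b',c',d'} \<subseteq> {1..Suc l}"
  shows "minor_in_R l a' b' c' d'"
proof -
  have "a' \<in> {1..Suc l}" using assms(4) by auto
  then obtain b1 c1 d1 where 1: "minor_in_R l a' b1 c1 d1" using minor_in_R_fix_a[OF assms(1,2)] by blast
  have "b' \<in> {1..Suc l}" "b' \<noteq> a'" using assms(3,4) by auto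
  then obtain c2 d2 where 2: "minor_in_R l a' b' c2 d2" using minor_in_R_fix_b[OF assms(1) 1] by blast
  have "c' \<in> {1..Suc l}" "c' \<notin> {a',b'}" using assms(3,4) by auto
  then obtain d3 where 3: "minor_in_R l a' b' c' d3" using minor_in_R_fix_c[OF assms(1) 2] by blast
  show ?thesis using minor_in_R_col2[OF 3] assms(3,4) by auto
qed

lemma ueq_word_smul_both: "X \<in> g_set n \<Longrightarrow> Y \<in> g_set n \<Longrightarrow> ueq n (fa_word [msmul c1 X, msmul c2 Y]) (\<lambda>w. (c1 * c2) * fa_word [X, Y] w)"
proof -
  assume X: "X \<in> g_set n" and Y: "Y \<in> g_set n"
  have mY: "msmul c2 Y \<in> g_set n" using Y by (auto simp: g_set_def msmul_def sum_distrib_left[symmetric])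
  have "ueq n (fa_word [msmul c1 X, msmul c2 Y]) (\<lambda>w. c1 * fa_word [X, msmul c2 Y] w)" by (rule ueq_word_smul_left[OF mY X])
  moreover have "ueq n (\<lambda>w. c1 * fa_word [X, msmul c2 Y] w) (\<lambda>w. c1 * (c2 * fa_word [X, Y] w))"
    by (rule ueq_smul, rule ueq_word_smul_right[OF X Y])
  ultimately have "ueq n (fa_word [msmul c1 X, msmul c2 Y]) (\<lambda>w. c1 * (c2 * fa_word [X, Y] w))"
    by (rule ueq_trans)
  then show ?thesis by (simp add: algebra_simps)
qed

lemma vprime_ueq_minor: assumes "3 \<le> l" shows "ueq (Suc l) (vprime l) (minor 1 2 (Suc l) l)"
proof -
  define k where "k = l - 3"
  have k: "l = Suc (Suc (Suc k))" using assms by (simp add: k_def)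
  have sg1: "(-1::complex)^(l + 1 - 1 - 1) * (-1)^(l - 2 - 1) = 1"
    unfolding k by (simp add: power_mult_distrib[symmetric])
  have sg2: "(-1::complex)^(l + 1 - 2 - 1) * (-1)^(l - 1 - 1) = 1"
    unfolding k by (simp add: power_mult_distrib[symmetric])
  have g: "Eu 1 (Suc l) \<in> g_set (Suc l)" "Eu 2 l \<in> g_set (Suc l)" "Eu 2 (Suc l) \<in> g_set (Suc l)" "Eu 1 l \<in> g_set (Suc l)"
    using assms by (auto intro!: Eu_g_set)
  have "ueq (Suc l) (vprime l) (\<lambda>w. ((-1)^(l + 1 - 1 - 1) * (-1)^(l - 2 - 1)) * fa_word [Eu 1 (Suc l), Eu 2 l] w
                              - ((-1)^(l + 1 - 2 - 1) * (-1)^(l - 1 - 1)) * fa_word [Eu 2 (Suc l), Eu 1 l] w)"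
    unfolding vprime_eq_words eroot_def Suc_eq_plus1[symmetric]
    by (intro ueq_diff ueq_word_smul_both g)
  then show ?thesis unfolding sg1 sg2 by (simp add: minor_def)
qed

lemma minor_in_R_vprime: assumes "3 \<le> l" shows "minor_in_R l 1 2 (Suc l) l"
proof -
  have "minor 1 2 (Suc l) l \<in> Rt l" by (rule Rt_ueq[OF Rt.gen ueq_sym[OF vprime_ueq_minor[OF assms]]])
  then show ?thesis using assms by (auto simp: minor_in_R_def)
qed

lemma mbr_Eu_Ediff: assumes "d \<notin> {c,a}" "b \<notin> {c,a}" "b \<in> {1..n}" "d \<in> {1..n}"
  shows "mbr n (Eu d b) (Ediff c a) = (\<lambda>i j. 0)"
proof (intro ext)
  fix i j
  have 1: "mmul n (Eu d b) (Ediff c a) i j = 0"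
    unfolding mmul_def using assms by (intro sum.neutral) (auto simp: Eu_def Ediff_def)
  have 2: "mmul n (Ediff c a) (Eu d b) i j = 0"
    unfolding mmul_def using assms by (intro sum.neutral) (auto simp: Eu_def Ediff_def)
  show "mbr n (Eu d b) (Ediff c a) i j = 0" by (simp add: mbr_def 1 2)
qed

definition minor_zero_weight :: "nat \<Rightarrow> nat \<Rightarrow> nat \<Rightarrow> nat \<Rightarrow> fa" where
  "minor_zero_weight a b c d = (\<lambda>w. fa_word [Ediff c a, Ediff d b] w + fa_word [Eu d a, Eu a d] w - fa_word [Eu b a, Eu a b] w
                   - fa_word [Eu d c, Eu c d] w + fa_word [Eu b c, Eu c b] w)"

lemma ad_minor_ueq:
  assumes "distinct [a,b,c,d]" "a \<in> {1..n}" "b \<in> {1..n}" "c \<in> {1..n}" "d \<in> {1..n}"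
  shows "ueq n (ad (Eu c a) (minor a b c d))
    (\<lambda>w. fa_word [Ediff c a, Eu b d] w + fa_word [Eu b a, Eu a d] w - fa_word [Eu b c, Eu c d] w)"
proof -
  have ne[simp]: "a \<noteq> b" "a \<noteq> c" "a \<noteq> d" "b \<noteq> a" "b \<noteq> c"
    "b \<noteq> d" "c \<noteq> a" "c \<noteq> b" "c \<noteq> d" "d \<noteq> a" "d \<noteq> b"
    "d \<noteq> c"
    using assms(1) by auto
  have rg[simp]: "a \<in> {1..n}" "b \<in> {1..n}" "c \<in> {1..n}" "d \<in> {1..n}" using assms by auto
  have rg2[simp]: "Suc 0 \<le> a" "a \<le> n" "Suc 0 \<le> b" "b \<le> n" "Suc 0 \<le> c" "c \<le> n" "Suc 0 \<le> d" "d \<le> n"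
    using assms by auto
  have 1: "ueq n (ad (Eu c a) (fa_word [Eu a c, Eu b d])) (\<lambda>w. fa_word [Ediff c a, Eu b d] w + fa_word [Eu a c, (\<lambda>i j. 0)] w)"
    using ueq_ad_word2[of "Eu c a" n "Eu a c" "Eu b d"] mbr_Eu_transpose[of a n c] by (simp add: Eu_g_set mbr_Eu_zero)
  have 2: "ueq n (ad (Eu c a) (fa_word [Eu b c, Eu a d])) (\<lambda>w. fa_word [msmul (-1) (Eu b a), Eu a d] w + fa_word [Eu b c, Eu c d] w)"
    using ueq_ad_word2[of "Eu c a" n "Eu b c" "Eu a d"] by (simp add: Eu_g_set mbr_Eu_compose_neg mbr_Eu_compose)
  have 3: "ueq n (\<lambda>w. (fa_word [Ediff c a, Eu b d] w + fa_word [Eu a c, (\<lambda>i j. 0)] w) - (fa_word [msmul (-1) (Eu b a), Eu a d] w + fa_word [Eu b c, Eu c d] w))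
      (\<lambda>w. (fa_word [Ediff c a, Eu b d] w + 0) - ((-1) * fa_word [Eu b a, Eu a d] w + fa_word [Eu b c, Eu c d] w))"
    using assms by (intro ueq_diff ueq_add ueq_refl ueq_word_zero_right ueq_word_smul_left)
      (simp_all add: Eu_g_set h_set_g_set Ediff_h_set)
  show ?thesis unfolding minor_def ad_diff
    using ueq_trans[OF ueq_diff[OF 1 2] 3] by (simp add: algebra_simps)
qed

lemma ad_ad_minor_ueq:
  assumes "distinct [a,b,c,d]" "a \<in> {1..n}" "b \<in> {1..n}" "c \<in> {1..n}" "d \<in> {1..n}"
  shows "ueq n (ad (Eu d b) (ad (Eu c a) (minor a b c d))) (minor_zero_weight a b c d)"
proof -
  have ne[simp]: "a \<noteq> b" "a \<noteq> c" "a \<noteq> d" "b \<noteq> a" "b \<noteq> c"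
    "b \<noteq> d" "c \<noteq> a" "c \<noteq> b" "c \<noteq> d" "d \<noteq> a" "d \<noteq> b"
    "d \<noteq> c"
    using assms(1) by auto
  have rg[simp]: "a \<in> {1..n}" "b \<in> {1..n}" "c \<in> {1..n}" "d \<in> {1..n}" using assms by auto
  have rg2[simp]: "Suc 0 \<le> a" "a \<le> n" "Suc 0 \<le> b" "b \<le> n" "Suc 0 \<le> c" "c \<le> n" "Suc 0 \<le> d" "d \<le> n"
    using assms by auto
  have gD[simp]: "Ediff c a \<in> g_set n" "Ediff d b \<in> g_set n" using assms by (auto intro!: h_set_g_set Ediff_h_set)
  have 1: "ueq n (ad (Eu d b) (fa_word [Ediff c a, Eu b d])) (\<lambda>w. fa_word [(\<lambda>i j. 0), Eu b d] w + fa_word [Ediff c a, Ediff d b] w)"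
    using ueq_ad_word2[of "Eu d b" n "Ediff c a" "Eu b d"] mbr_Eu_transpose[of b n d] by (simp add: Eu_g_set mbr_Eu_Ediff)
  have 2: "ueq n (ad (Eu d b) (fa_word [Eu b a, Eu a d])) (\<lambda>w. fa_word [Eu d a, Eu a d] w + fa_word [Eu b a, msmul (-1) (Eu a b)] w)"
    using ueq_ad_word2[of "Eu d b" n "Eu b a" "Eu a d"] by (simp add: Eu_g_set mbr_Eu_compose mbr_Eu_compose_neg)
  have 3: "ueq n (ad (Eu d b) (fa_word [Eu b c, Eu c d])) (\<lambda>w. fa_word [Eu d c, Eu c d] w + fa_word [Eu b c, msmul (-1) (Eu c b)] w)"
    using ueq_ad_word2[of "Eu d b" n "Eu b c" "Eu c d"] by (simp add: Eu_g_set mbr_Eu_compose mbr_Eu_compose_neg)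
  have 4: "ueq n (\<lambda>w. (fa_word [(\<lambda>i j. 0), Eu b d] w + fa_word [Ediff c a, Ediff d b] w) + (fa_word [Eu d a, Eu a d] w + fa_word [Eu b a, msmul (-1) (Eu a b)] w)
                   - (fa_word [Eu d c, Eu c d] w + fa_word [Eu b c, msmul (-1) (Eu c b)] w))
      (\<lambda>w. (0 + fa_word [Ediff c a, Ediff d b] w) + (fa_word [Eu d a, Eu a d] w + (-1) * fa_word [Eu b a, Eu a b] w)
                   - (fa_word [Eu d c, Eu c d] w + (-1) * fa_word [Eu b c, Eu c b] w))"
    by (intro ueq_diff ueq_add ueq_refl ueq_word_zero_left ueq_word_smul_right) (simp_all add: Eu_g_set)
  have "ueq n (ad (Eu d b) (ad (Eu c a) (minor a b c d)))
      (ad (Eu d b) (\<lambda>w. fa_word [Ediff c a, Eu b d] w + fa_word [Eu b a, Eu a d] w - fa_word [Eu b c, Eu c d] w))"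
    using assms by (intro ueq_ad ad_minor_ueq) (simp_all add: Eu_g_set)
  also have "ueq n \<dots> (minor_zero_weight a b c d)"
    unfolding ad_diff ad_add
    using ueq_trans[OF ueq_diff[OF ueq_add[OF 1 2] 3] 4] by (simp add: minor_zero_weight_def algebra_simps)
  finally show ?thesis .
qed

lemma Eu_np_set: "x < y \<Longrightarrow> x \<in> {1..n} \<Longrightarrow> y \<in> {1..n} \<Longrightarrow> Eu x y \<in> np_set n"
  using Eu_g_set[of x y n] by (auto simp: np_set_def Eu_def split: if_splits)

lemma Jn_Eu_pair:
  assumes "x \<noteq> y" "x \<in> {1..n}" "y \<in> {1..n}"
  shows "(\<lambda>w. fa_word [Eu x y, Eu y x] w - (if x < y then fa_word [Ediff x y] w else 0)) \<in> Jn n"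
proof (cases "x < y")
  case True
  have i: "(\<lambda>w. fa_word ([] @ [Eu x y, Eu y x] @ []) w - fa_word ([] @ [Eu y x, Eu x y] @ []) w - fa_word ([] @ [mbr n (Eu x y) (Eu y x)] @ []) w) \<in> Iid n"
    by (rule Iid_comm_context) (use assms in \<open>auto intro!: Eu_g_set\<close>)
  have j: "fa_mul (fa_word [Eu y x]) (ltr (Eu x y)) \<in> Jn n"
    by (rule Jn.gen) (use assms True in \<open>auto intro!: fa_word_FA Eu_g_set Eu_np_set\<close>)
  have "(\<lambda>w. (fa_word [Eu x y, Eu y x] w - fa_word [Eu y x, Eu x y] w - fa_word [Ediff x y] w) + fa_word [Eu y x, Eu x y] w) \<in> Jn n"
    using Jn_add'[OF Jn.ideal[OF i] j] assms by (simp add: ltr_eq_fa_word fa_mul_fa_word mbr_Eu_transpose)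
  then show ?thesis using True by simp
next
  case False
  then have yx: "y < x" using assms by simp
  have j: "fa_mul (fa_word [Eu x y]) (ltr (Eu y x)) \<in> Jn n"
    by (rule Jn.gen) (use assms yx in \<open>auto intro!: fa_word_FA Eu_g_set Eu_np_set\<close>)
  then show ?thesis using False by (simp add: ltr_eq_fa_word fa_mul_fa_word)
qed

text \<open>The image of \<open>minor_zero_weight\<close> modulo \<open>U(g) n_+\<close>: a pair \<open>E_xy E_yx\<close> contributes
  \<open>E_xx - E_yy\<close> if \<open>x < y\<close> and nothing otherwise.\<close>

definition minor_proj :: "nat \<Rightarrow> nat \<Rightarrow> nat \<Rightarrow> nat \<Rightarrow> fa" where
  "minor_proj a b c d = (\<lambda>w. fa_word [Ediff c a, Ediff d b] w + (if d < a then fa_word [Ediff d a] w else 0) - (if b < a then fa_word [Ediff b a] w else 0)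
                   - (if d < c then fa_word [Ediff d c] w else 0) + (if b < c then fa_word [Ediff b c] w else 0))"

lemma Jn_minor_zero_weight_proj:
  assumes "distinct [a,b,c,d]" "a \<in> {1..n}" "b \<in> {1..n}" "c \<in> {1..n}" "d \<in> {1..n}"
  shows "(\<lambda>w. minor_zero_weight a b c d w - minor_proj a b c d w) \<in> Jn n"
proof -
  let ?pair = "\<lambda>x y w. fa_word [Eu x y, Eu y x] w - (if x < y then fa_word [Ediff x y] w else 0)"
  have pair: "?pair x y \<in> Jn n" if "x \<in> {a,b,c,d}" "y \<in> {a,b,c,d}" "x \<noteq> y" for x y
    using that assms by (intro Jn_Eu_pair) auto
  have "(\<lambda>w. ?pair d a w - ?pair b a w - ?pair d c w + ?pair b c w) \<in> Jn n"
    by (rule Jn_add'[OF Jn_diff'[OF Jn_diff'[OF pair pair] pair] pair]) (use assms(1) in auto)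
  moreover have "(\<lambda>w. minor_zero_weight a b c d w - minor_proj a b c d w)
      = (\<lambda>w. ?pair d a w - ?pair b a w - ?pair d c w + ?pair b c w)"
    by (simp add: minor_zero_weight_def minor_proj_def fun_eq_iff algebra_simps)
  ultimately show ?thesis by simp
qed

lemma minor_proj_Sh:
  assumes "distinct [a,b,c,d]" "a \<in> {1..n}" "b \<in> {1..n}" "c \<in> {1..n}" "d \<in> {1..n}"
  shows "minor_proj a b c d \<in> Sh n"
proof -
  let ?W = "{[Ediff c a, Ediff d b], [Ediff d a], [Ediff b a], [Ediff d c], [Ediff b c]}"
  have sub: "{w. minor_proj a b c d w \<noteq> 0} \<subseteq> ?W"
    by (auto simp: minor_proj_def fa_word_def split: if_splits)
  have h: "\<And>w. w \<in> ?W \<Longrightarrow> set w \<subseteq> h_set n"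
    using assms by (auto intro!: Ediff_h_set)
  have "finite {w. minor_proj a b c d w \<noteq> 0}" by (rule finite_subset[OF sub]) simp
  moreover have "\<And>w. minor_proj a b c d w \<noteq> 0 \<Longrightarrow> set w \<subseteq> h_set n" using sub h by blast
  ultimately show ?thesis by (auto simp: Sh_def FA_def dest: h_set_g_set)
qed

lemma ad_h_Eu_pair:
  assumes H: "H \<in> h_set n" and "x \<noteq> y" "x \<in> {1..n}" "y \<in> {1..n}"
  shows "ueq n (ad H (fa_word [Eu x y, Eu y x])) (\<lambda>w. 0)"
proof -
  have Hd: "\<And>i j. i \<noteq> j \<Longrightarrow> H i j = 0" using H by (simp add: h_set_offdiag)
  have g: "Eu x y \<in> g_set n" "Eu y x \<in> g_set n" using assms by (auto intro!: Eu_g_set)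
  have 1: "ueq n (ad H (fa_word [Eu x y, Eu y x])) (\<lambda>w. fa_word [msmul (H x x - H y y) (Eu x y), Eu y x] w + fa_word [Eu x y, msmul (H y y - H x x) (Eu y x)] w)"
    using ueq_ad_word2[OF h_set_g_set[OF H] g] assms by (simp add: mbr_H_Eu[OF Hd])
  have 2: "ueq n (\<lambda>w. fa_word [msmul (H x x - H y y) (Eu x y), Eu y x] w + fa_word [Eu x y, msmul (H y y - H x x) (Eu y x)] w)
     (\<lambda>w. (H x x - H y y) * fa_word [Eu x y, Eu y x] w + (H y y - H x x) * fa_word [Eu x y, Eu y x] w)"
    by (intro ueq_add ueq_word_smul_left ueq_word_smul_right g)
  show ?thesis using ueq_trans[OF 1 2] by (simp add: fun_eq_iff algebra_simps)
qed

lemma ad_h_h_pair: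
  assumes H: "H \<in> h_set n" and D1: "D1 \<in> h_set n" and D2: "D2 \<in> h_set n"
  shows "ueq n (ad H (fa_word [D1, D2])) (\<lambda>w. 0)"
proof -
  have Hd: "\<And>i j. i \<noteq> j \<Longrightarrow> H i j = 0" using H by (simp add: h_set_offdiag)
  have 1: "ueq n (ad H (fa_word [D1, D2])) (\<lambda>w. fa_word [(\<lambda>i j. 0), D2] w + fa_word [D1, (\<lambda>i j. 0)] w)"
    using ueq_ad_word2[OF h_set_g_set[OF H] h_set_g_set[OF D1] h_set_g_set[OF D2]]
    by (simp add: mbr_diagonal[OF Hd h_set_offdiag[OF D1]] mbr_diagonal[OF Hd h_set_offdiag[OF D2]])
  have 2: "ueq n (\<lambda>w. fa_word [(\<lambda>i j. 0), D2] w + fa_word [D1, (\<lambda>i j. 0)] w) (\<lambda>w. 0 + 0)"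
    by (intro ueq_add ueq_word_zero_left ueq_word_zero_right h_set_g_set D1 D2)
  show ?thesis using ueq_trans[OF 1 2] by simp
qed

lemma ad_h_minor_zero_weight:
  assumes H: "H \<in> h_set n" and "distinct [a,b,c,d]" "a \<in> {1..n}" "b \<in> {1..n}" "c \<in> {1..n}" "d \<in> {1..n}"
  shows "ueq n (ad H (minor_zero_weight a b c d)) (\<lambda>w. 0)"
proof -
  have "ueq n (ad H (minor_zero_weight a b c d)) (\<lambda>w. 0 + 0 - 0 - 0 + 0)"
    unfolding minor_zero_weight_def ad_add ad_diff
    by (intro ueq_add ueq_diff ad_h_h_pair ad_h_Eu_pair H Ediff_h_set) (use assms in auto)
  then show ?thesis by simp
qed

definition zw_minor :: "nat \<Rightarrow> nat \<Rightarrow> nat \<Rightarrow> nat \<Rightarrow> fa" where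
  "zw_minor a b c d = ad (Eu d b) (ad (Eu c a) (minor a b c d))"

lemma zw_minor_R0: assumes "minor_in_R l a b c d" shows "zw_minor a b c d \<in> R0 l"
proof -
  have d: "distinct [a,b,c,d]" and r: "a \<in> {1..Suc l}" "b \<in> {1..Suc l}" "c \<in> {1..Suc l}" "d \<in> {1..Suc l}"
    and M: "minor a b c d \<in> Rt l" using assms by (auto simp: minor_in_R_def)
  have "zw_minor a b c d \<in> Rt l" unfolding zw_minor_def
    using d r by (intro Rt.adj Eu_g_set M) auto
  moreover have "ad H (zw_minor a b c d) \<in> Iid (Suc l)" if H: "H \<in> h_set (Suc l)" for H
  proof -
    have "ueq (Suc l) (ad H (zw_minor a b c d)) (ad H (minor_zero_weight a b c d))"
      unfolding zw_minor_def by (rule ueq_ad[OF h_set_g_set[OF H] ad_ad_minor_ueq[OF d r]])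
    from ueq_trans[OF this ad_h_minor_zero_weight[OF H d r]] show ?thesis by (simp add: ueq_def)
  qed
  ultimately show ?thesis by (simp add: R0_def)
qed

lemma zw_minor_Jn: assumes "minor_in_R l a b c d" shows "fa_diff (zw_minor a b c d) (minor_proj a b c d) \<in> Jn (Suc l)"
proof -
  have d: "distinct [a,b,c,d]" and r: "a \<in> {1..Suc l}" "b \<in> {1..Suc l}" "c \<in> {1..Suc l}" "d \<in> {1..Suc l}"
    using assms by (auto simp: minor_in_R_def)
  have 1: "(\<lambda>w. zw_minor a b c d w - minor_zero_weight a b c d w) \<in> Jn (Suc l)"
    using ad_ad_minor_ueq[OF d r] by (intro Jn.ideal) (simp add: ueq_def zw_minor_def)
  have "(\<lambda>w. (zw_minor a b c d w - minor_zero_weight a b c d w) + (minor_zero_weight a b c d w - minor_proj a b c d w)) \<in> Jn (Suc l)"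
    by (rule Jn_add'[OF 1 Jn_minor_zero_weight_proj[OF d r]])
  then show ?thesis by (simp add: fa_diff_def)
qed

section \<open>The projections of the zero weight minors\<close>

lemma evalS_superset:
  assumes "finite S" "{w. p w \<noteq> 0} \<subseteq> S"
  shows "evalS l x p = (\<Sum>w\<in>S. p w * prod_list (map (hval l x) w))"
  unfolding evalS_def using assms by (intro sum.mono_neutral_left) auto

lemma evalS_lincomb:
  assumes "finsupp f" "finsupp g"
  shows "evalS l x (\<lambda>w. a * f w + b * g w) = a * evalS l x f + b * evalS l x g"
proof -
  let ?S = "{w. f w \<noteq> 0} \<union> {w. g w \<noteq> 0}"
  have fS: "finite ?S" using assms by (simp add: finsupp_def)
  have "evalS l x (\<lambda>w. a * f w + b * g w) = (\<Sum>w\<in>?S. (a * f w + b * g w) * prod_list (map (hval l x) w))"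
    by (rule evalS_superset[OF fS]) auto
  moreover have "evalS l x f = (\<Sum>w\<in>?S. f w * prod_list (map (hval l x) w))" by (rule evalS_superset[OF fS]) auto
  moreover have "evalS l x g = (\<Sum>w\<in>?S. g w * prod_list (map (hval l x) w))" by (rule evalS_superset[OF fS]) auto
  ultimately show ?thesis by (simp add: sum.distrib sum_distrib_left algebra_simps)
qed

lemma evalS_add: "finsupp f \<Longrightarrow> finsupp g \<Longrightarrow> evalS l x (\<lambda>w. f w + g w) = evalS l x f + evalS l x g"
  using evalS_lincomb[of f g l x 1 1] by simp
lemma evalS_diff: "finsupp f \<Longrightarrow> finsupp g \<Longrightarrow> evalS l x (\<lambda>w. f w - g w) = evalS l x f - evalS l x g"
  using evalS_lincomb[of f g l x 1 "-1"] by simp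
lemma evalS_zero: "evalS l x (\<lambda>w. 0) = 0" by (simp add: evalS_def)
lemma evalS_if: "evalS l x (\<lambda>w. if P then g w else 0) = (if P then evalS l x g else 0)"
  by (cases P) (simp_all add: evalS_zero)
lemma finsupp_if: "finsupp g \<Longrightarrow> finsupp (\<lambda>w. if P then g w else 0)"
  by (cases P) (simp_all add: finsupp_zero)
lemma evalS_fa_word: "evalS l x (fa_word u) = prod_list (map (hval l x) u)"
proof -
  have "evalS l x (fa_word u) = (\<Sum>w\<in>{u}. fa_word u w * prod_list (map (hval l x) w))"
    by (rule evalS_superset) (auto simp: fa_word_def)
  then show ?thesis by (simp add: fa_word_def)
qed

lemma evalS_minor_proj: "evalS l x (minor_proj a b c d) = hval l x (Ediff c a) * hval l x (Ediff d b)
   + (if d < a then hval l x (Ediff d a) else 0) - (if b < a then hval l x (Ediff b a) else 0)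
   - (if d < c then hval l x (Ediff d c) else 0) + (if b < c then hval l x (Ediff b c) else 0)"
  unfolding minor_proj_def
  by (simp add: evalS_add evalS_diff evalS_if finsupp_if finsupp_add finsupp_diff finsupp_fa_word evalS_fa_word)

lemma Ediff_partial_trace: "1 \<le> i \<Longrightarrow> 1 \<le> j \<Longrightarrow> (\<Sum>m=1..k. Ediff i j m m) = (if i \<le> k then 1 else 0) - (if j \<le> k then 1 else 0)"
  by (simp add: Ediff_def sum_subtractf)

lemma Ediff_partial_trace': "1 \<le> i \<Longrightarrow> 1 \<le> j \<Longrightarrow> (\<Sum>m=Suc 0..k. Ediff i j m m) = (if i \<le> k then 1 else 0) - (if j \<le> k then 1 else 0)"
  using Ediff_partial_trace by simp

lemma hval_Ediff: "1 \<le> i \<Longrightarrow> 1 \<le> j \<Longrightarrow>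
   hval l x (Ediff i j) = (\<Sum>k=1..l. ((if i \<le> k then 1 else 0) - (if j \<le> k then 1 else 0)) * x k)"
  unfolding hval_def by (intro sum.cong refl) (simp add: Ediff_partial_trace')

lemma hval_Ediff_succ_left: assumes "1 \<le> i" "i \<le> l" shows "hval l x (Ediff (i+1) i) = - x i"
proof -
  have "hval l x (Ediff (i+1) i) = (\<Sum>k=1..l. ((if i+1 \<le> k then 1 else 0) - (if i \<le> k then 1 else 0)) * x k)"
    by (rule hval_Ediff) (use assms in auto)
  also have "\<dots> = (\<Sum>k=1..l. if k = i then - x k else 0)"
    using assms by (intro sum.cong refl) auto
  finally show ?thesis using assms by simp
qed

lemma hval_Ediff_succ_right: assumes "1 \<le> i" "i \<le> l" shows "hval l x (Ediff i (i+1)) = x i"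
proof -
  have "hval l x (Ediff i (i+1)) = (\<Sum>k=1..l. ((if i \<le> k then 1 else 0) - (if i+1 \<le> k then 1 else 0)) * x k)"
    by (rule hval_Ediff) (use assms in auto)
  also have "\<dots> = (\<Sum>k=1..l. if k = i then x k else 0)"
    using assms by (intro sum.cong refl) auto
  finally show ?thesis using assms by simp
qed

lemma hval_Ediff_span3: assumes "2 \<le> i" "i + 1 \<le> l"
  shows "hval l x (Ediff (i+2) (i-1)) = - (x (i-1) + x i + x (i+1))"
proof -
  have "hval l x (Ediff (i+2) (i-1)) = (\<Sum>k=1..l. ((if i+2 \<le> k then 1 else 0) - (if i-1 \<le> k then 1 else 0)) * x k)"
    by (rule hval_Ediff) (use assms in auto)
  also have "\<dots> = (\<Sum>k=1..l. if k \<in> {i-1, i, i+1} then - x k else 0)"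
    using assms by (intro sum.cong refl) auto
  also have "\<dots> = (\<Sum>k\<in>{1..l} \<inter> {i-1, i, i+1}. - x k)" by (simp add: sum.inter_restrict)
  also have "{1..l} \<inter> {i-1, i, i+1} = {i-1, i, i+1}" using assms by auto
  also have "(\<Sum>k\<in>{i-1, i, i+1}. - x k) = - x (i-1) - x i - x (i+1)"
  proof -
    have ne: "i - 1 \<notin> {i, i+1}" "i \<notin> {i+1}" using assms by auto
    have "(\<Sum>k\<in>insert (i-1) (insert i {i+1}). - x k) = - x (i-1) + (- x i + - x (i+1))"
      by (subst sum.insert, simp, use ne in simp)+ simp
    then show ?thesis by simp
  qed
  finally show ?thesis by simp
qed

lemma hval_Ediff_span2: assumes "2 \<le> i" "i \<le> l"
  shows "hval l x (Ediff (i-1) (i+1)) = x (i-1) + x i"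
proof -
  have "hval l x (Ediff (i-1) (i+1)) = (\<Sum>k=1..l. ((if i-1 \<le> k then 1 else 0) - (if i+1 \<le> k then 1 else 0)) * x k)"
    by (rule hval_Ediff) (use assms in auto)
  also have "\<dots> = (\<Sum>k=1..l. if k \<in> {i-1, i} then x k else 0)"
    using assms by (intro sum.cong refl) auto
  also have "\<dots> = (\<Sum>k\<in>{1..l} \<inter> {i-1, i}. x k)" by (simp add: sum.inter_restrict)
  also have "{1..l} \<inter> {i-1, i} = {i-1, i}" using assms by auto
  also have "(\<Sum>k\<in>{i-1, i}. x k) = x (i-1) + x i"
    using assms by simp
  finally show ?thesis by simp
qed

lemma evalS_minor_proj_P: assumes "1 \<le> i" "i + 2 \<le> j" "j \<le> l"
  shows "evalS l x (minor_proj i j (i+1) (j+1)) = bfun (Pidx i j) x"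
proof -
  have "hval l x (Ediff (i+1) i) = - x i" "hval l x (Ediff (j+1) j) = - x j"
    using assms hval_Ediff_succ_left[of i l x] hval_Ediff_succ_left[of j l x] by auto
  then show ?thesis using assms by (simp add: evalS_minor_proj)
qed

lemma evalS_minor_proj_Q: assumes "2 \<le> i" "i + 1 \<le> l"
  shows "evalS l x (minor_proj i (i-1) (i+1) (i+2)) = bfun (Qidx i) x"
proof -
  have "hval l x (Ediff (i-1) i) = x (i-1)" using hval_Ediff_succ_right[of "i-1" l x] assms by simp
  moreover have "hval l x (Ediff (i+1) i) = - x i" using assms hval_Ediff_succ_left[of i l x] by auto
  moreover have "hval l x (Ediff (i+2) (i-1)) = - (x (i-1) + x i + x (i+1))" using assms hval_Ediff_span3[of i l x] by auto
  moreover have "hval l x (Ediff (i-1) (i+1)) = x (i-1) + x i" using assms hval_Ediff_span2[of i l x] by auto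
  moreover have "i - 1 < i + 1" "i - 1 < i" "\<not> i + 2 < i" "\<not> i + 2 < i + 1" using assms by auto
  ultimately show ?thesis using assms by (simp only: evalS_minor_proj if_True if_False bfun.simps) (simp add: algebra_simps)
qed

lemma evalS_minor_proj_rank3: "evalS 3 x (minor_proj 1 2 3 4) = bfun (Pidx 1 3) x + bfun (Qidx 2) x"
  by (simp add: evalS_minor_proj hval_Ediff eval_nat_numeral algebra_simps)

section \<open>The space P_0\<close>

lemma Sh_lincomb: assumes "p \<in> Sh n" "q \<in> Sh n" shows "(\<lambda>w. a * p w + b * q w) \<in> Sh n"
proof -
  have "finsupp (\<lambda>w. a * p w + b * q w)" using assms by (intro finsupp_lincomb Sh_finsupp)
  moreover have "set w \<subseteq> h_set n" if "a * p w + b * q w \<noteq> 0" for w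
  proof -
    have "p w \<noteq> 0 \<or> q w \<noteq> 0" using that by auto
    then show ?thesis using assms by (auto simp: Sh_def)
  qed
  ultimately show ?thesis by (auto simp: Sh_def FA_def finsupp_def dest: h_set_g_set)
qed

lemma R0_lincomb: assumes "r \<in> R0 l" "s \<in> R0 l" shows "(\<lambda>w. a * r w + b * s w) \<in> R0 l"
proof -
  have rs: "r \<in> Rt l" "s \<in> Rt l" using assms by (auto simp: R0_def)
  have "(\<lambda>w. a * r w + b * s w) \<in> Rt l"
    using Rt.add[OF Rt_smul'[OF rs(1)] Rt_smul'[OF rs(2)]] by (simp add: fa_add_def)
  moreover have "ad H (\<lambda>w. a * r w + b * s w) \<in> Iid (Suc l)" if H: "H \<in> h_set (Suc l)" for H
  proof -
    have "ad H r \<in> Iid (Suc l)" "ad H s \<in> Iid (Suc l)" using assms H by (auto simp: R0_def)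
    then have "(\<lambda>w. a * ad H r w + b * ad H s w) \<in> Iid (Suc l)" by (intro Iid_add' Iid_smul')
    then show ?thesis by (simp add: ad_lincomb[OF Rt_finsupp[OF rs(1)] Rt_finsupp[OF rs(2)]])
  qed
  ultimately show ?thesis by (simp add: R0_def)
qed

lemma P0_lincomb: assumes "f \<in> P0 l" "g \<in> P0 l" shows "(\<lambda>x. a * f x + b * g x) \<in> P0 l"
proof -
  obtain r p where r: "r \<in> R0 l" "p \<in> Sh (Suc l)" "fa_diff r p \<in> Jn (Suc l)" "f = (\<lambda>x. evalS l x p)"
    using assms(1) by (auto simp: P0_def)
  obtain s q where s: "s \<in> R0 l" "q \<in> Sh (Suc l)" "fa_diff s q \<in> Jn (Suc l)" "g = (\<lambda>x. evalS l x q)"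
    using assms(2) by (auto simp: P0_def)
  have "(\<lambda>w. a * r w + b * s w) \<in> R0 l" by (rule R0_lincomb[OF r(1) s(1)])
  moreover have "(\<lambda>w. a * p w + b * q w) \<in> Sh (Suc l)" by (rule Sh_lincomb[OF r(2) s(2)])
  moreover have "fa_diff (\<lambda>w. a * r w + b * s w) (\<lambda>w. a * p w + b * q w) \<in> Jn (Suc l)"
  proof -
    have "(\<lambda>w. a * fa_diff r p w + b * fa_diff s q w) \<in> Jn (Suc l)" by (intro Jn_add' Jn_smul' r(3) s(3))
    then show ?thesis by (simp add: fa_diff_def algebra_simps)
  qed
  moreover have "(\<lambda>x. a * f x + b * g x) = (\<lambda>x. evalS l x (\<lambda>w. a * p w + b * q w))"
    using r(4) s(4) evalS_lincomb[OF Sh_finsupp[OF r(2)] Sh_finsupp[OF s(2)]] by simp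
  ultimately show ?thesis unfolding P0_def by auto
qed

lemma P0_zero: "(\<lambda>x. 0) \<in> P0 l"
proof -
  have "(\<lambda>w. 0) \<in> R0 l"
    using Rt.ideal[OF Iid.zero] by (simp add: R0_def ad_def fa_diff_def fa_mul_zero_left fa_mul_zero_right Iid.zero)
  moreover have "(\<lambda>w. 0) \<in> Sh (Suc l)" by (simp add: Sh_def FA_def)
  moreover have "fa_diff (\<lambda>w. 0) (\<lambda>w. 0) \<in> Jn (Suc l)" by (simp add: fa_diff_def Jn.zero)
  moreover have "(\<lambda>x. 0) = (\<lambda>x. evalS l x (\<lambda>w. 0))" by (simp add: evalS_zero)
  ultimately have "\<exists>r\<in>R0 l. \<exists>p\<in>Sh (Suc l). fa_diff r p \<in> Jn (Suc l) \<and> (\<lambda>x. 0) = (\<lambda>x. evalS l x p)" by blast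
  then show ?thesis unfolding P0_def by simp
qed

lemma P0_sum: "(\<And>k. k \<in> I \<Longrightarrow> F k \<in> P0 l) \<Longrightarrow> (\<lambda>x. \<Sum>k\<in>I. c k * F k x) \<in> P0 l"
proof (induction I rule: infinite_finite_induct)
  case (infinite A) then show ?case by (simp add: P0_zero)
next
  case empty then show ?case by (simp add: P0_zero)
next
  case (insert i I)
  then have "(\<lambda>x. c i * F i x + 1 * (\<Sum>k\<in>I. c k * F k x)) \<in> P0 l" by (intro P0_lincomb) auto
  then show ?case using insert(1,2) by simp
qed

lemma minor_proj_P0: assumes "minor_in_R l a b c d" shows "(\<lambda>x. evalS l x (minor_proj a b c d)) \<in> P0 l"
proof -
  have d: "distinct [a,b,c,d]" and r: "a \<in> {1..Suc l}" "b \<in> {1..Suc l}" "c \<in> {1..Suc l}" "d \<in> {1..Suc l}"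
    using assms by (auto simp: minor_in_R_def)
  show ?thesis unfolding P0_def using zw_minor_R0[OF assms] minor_proj_Sh[OF d r] zw_minor_Jn[OF assms] by auto
qed

lemma bfun_P0_three: "k \<in> Ind 3 \<Longrightarrow> bfun k \<in> P0 3"
proof -
  have s: "minor_in_R 3 1 2 3 4"
    using minor_in_R_swap_cols[OF minor_in_R_vprime[of 3]] by simp
  have q: "bfun (Qidx 2) \<in> P0 3"
  proof -
    have "(\<lambda>x. evalS 3 x (minor_proj 2 (2-1) (2+1) (2+2))) \<in> P0 3"
      using minor_proj_P0[OF minor_in_R_swap_rows[OF s]] by simp
    moreover have "(\<lambda>x. evalS 3 x (minor_proj 2 (2-1) (2+1) (2+2))) = bfun (Qidx 2)"
      by (rule ext, rule evalS_minor_proj_Q) auto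
    ultimately show ?thesis by simp
  qed
  have "(\<lambda>x. bfun (Pidx 1 3) x + bfun (Qidx 2) x) \<in> P0 3"
    using minor_proj_P0[OF s] evalS_minor_proj_rank3 by simp
  from P0_lincomb[OF this q, of 1 "-1"] have "(\<lambda>x. bfun (Pidx 1 3) x) \<in> P0 3"
    by simp
  then have p: "bfun (Pidx 1 3) \<in> P0 3"
    by (simp only: eta_contract_eq)
  have "Ind 3 = {Pidx 1 3, Qidx 2}" by (auto simp: Ind_def)
  then show "k \<in> Ind 3 \<Longrightarrow> bfun k \<in> P0 3" using p q by auto
qed

lemma bfun_P0:
  assumes l3: "3 \<le> l" and k: "k \<in> Ind l"
  shows "bfun k \<in> P0 l"
proof (cases "l = 3")
  case True
  then show ?thesis using bfun_P0_three k by simp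
next
  case False
  then have l4: "4 \<le> l" using l3 by simp
  note start = minor_in_R_vprime[OF l3]
  consider (P) i j where "k = Pidx i j" "1 \<le> i" "i \<le> l - 2" "i + 2 \<le> j" "j \<le> l"
    | (Q) i where "k = Qidx i" "2 \<le> i" "i \<le> l - 1"
    using k unfolding Ind_def by auto
  then show ?thesis
  proof cases
    case P
    have "minor_in_R l i j (i+1) (j+1)" by (rule minor_in_R_all[OF l4 start]) (use P in auto)
    moreover have "(\<lambda>x. evalS l x (minor_proj i j (i+1) (j+1))) = bfun (Pidx i j)"
      using P by (intro ext evalS_minor_proj_P) auto
    ultimately show ?thesis using minor_proj_P0 P by metis
  next
    case Q
    have "minor_in_R l i (i-1) (i+1) (i+2)" by (rule minor_in_R_all[OF l4 start]) (use Q in auto)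
    moreover have "(\<lambda>x. evalS l x (minor_proj i (i-1) (i+1) (i+2))) = bfun (Qidx i)"
      using Q by (intro ext evalS_minor_proj_Q) auto
    ultimately show ?thesis using minor_proj_P0 Q by metis
  qed
qed

lemma quadratic_fn_hw_value: "quadratic_fn l (hw_value l u)"
proof -
  have "quadratic_fn l (\<lambda>x. hw_word_value l x w)" for w
  proof -
    consider "w = []" | X where "w = [X]" | X Y where "w = [X, Y]" | X Y Z w' where "w = X # Y # Z # w'"
      by (metis list.exhaust)
    then show ?thesis
      by cases (simp_all add: quadratic_fn_const quadratic_fn_add quadratic_fn_hval quadratic_fn_hval_product)
  qed
  then show ?thesis unfolding hw_value_def
    using quadratic_fn_sum[of "{w. u w \<noteq> 0}" l "\<lambda>w x. u w * hw_word_value l x w"]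
    by (simp add: quadratic_fn_const quadratic_fn_smul)
qed

lemma P0_subset_span:
  assumes l3: "3 \<le> l" and f: "f \<in> P0 l"
  shows "\<exists>c. f = (\<lambda>h. \<Sum>k\<in>Ind l. c k * bfun k h)"
proof -
  obtain r p where r: "r \<in> R0 l" "p \<in> Sh (Suc l)" "fa_diff r p \<in> Jn (Suc l)" and fp: "f = (\<lambda>x. evalS l x p)"
    using f by (auto simp: P0_def)
  have rt: "r \<in> Rt l" using r(1) by (simp add: R0_def)
  obtain u where u: "deg_le2 (Suc l) u" "ueq (Suc l) r u"
    using Rt_deg_le2_representative[OF rt l3] by blast
  have "f = hw_value l u"
    using evalS_eq_hw_value[OF rt r(2) r(3) u] fp by auto
  moreover have "hw_value l u (line_point k s) = 0" for k s
  proof -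
    have "hw_weight (Suc 0) (\<lambda>_. k) (\<lambda>_. s) = line_point k s"
      by (simp add: fun_eq_iff hw_weight_rank_one line_point_def)
    then show ?thesis using hw_value_rank_one[OF rt l3 u, of "\<lambda>_. k" "\<lambda>_. s"] by simp
  qed
  ultimately show ?thesis
    using quadratic_vanishing_on_lines_span[OF l3 quadratic_fn_hw_value] by simp
qed

theorem lemma5p4:
  fixes l :: nat
  assumes "l \<ge> 3"
  shows "(\<forall>c :: idx \<Rightarrow> complex. (\<forall>h. (\<Sum>k\<in>Ind l. c k * bfun k h) = 0) \<longrightarrow> (\<forall>k\<in>Ind l. c k = 0))
       \<and> P0 l = {f. \<exists>c :: idx \<Rightarrow> complex. f = (\<lambda>h. \<Sum>k\<in>Ind l. c k * bfun k h)}"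
proof (intro conjI allI impI subset_antisym subsetI)
  fix c :: "idx \<Rightarrow> complex"
  assume "\<forall>h. (\<Sum>k\<in>Ind l. c k * bfun k h) = 0"
  then show "\<forall>k\<in>Ind l. c k = 0" by (rule bfun_linear_independent)
next
  fix f assume "f \<in> P0 l"
  then show "f \<in> {f. \<exists>c. f = (\<lambda>h. \<Sum>k\<in>Ind l. c k * bfun k h)}"
    using P0_subset_span[OF assms] by blast
next
  fix f assume "f \<in> {f. \<exists>c. f = (\<lambda>h. \<Sum>k\<in>Ind l. c k * bfun k h)}"
  then obtain c where "f = (\<lambda>h. \<Sum>k\<in>Ind l. c k * bfun k h)" by blast
  then show "f \<in> P0 l" using P0_sum[of "Ind l" bfun l c] bfun_P0[OF assms] by simp
qed

end
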